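(* Let $G$ be a compact Hausdorff group and $\hat G$ a complete set of pairwise non-isomorphic irreducible unitary representations of $G$. Fix data $y^{(1)},\ldots,y^{(n)}\in L^2(G)$ (real-valued), $q\ge1$, $\lambda\ge0$ and real constants $\mu_1,\ldots,\mu_q$. Let $\hat\Phi^{\hat G}$ be an optimal dictionary for the problem $\mathcal P(\hat G)$ and suppose it is canonically unique. Let $\hat H_1\subseteq\hat H_2\subseteq\cdots\subseteq\hat G$ with $\bigcup_k\hat H_k=\hat G$, and for each $k$ let $\hat\Phi^{\hat H_k}$ be an optimal dictionary of $\mathcal P(\hat H_k)$, embedded into $L^2(\hat G)$. Then $D(\hat\Phi^{\hat H_k},\hat\Phi^{\hat G})\to0$ as $k\to\infty$.
   Context: $\mu$ is normalized Haar measure; each $\xi\in\hat G$ is $\rho_\xi:G\to U(V_\xi)$, $d_\xi=\dim V_\xi<\infty$. Fourier coefficients $\hat f_\xi=\int_G f(g)\rho_\xi(g)^*d\mu(g)$; $\|f\|_2^2=\sum_\xi d_\xi^2\|\hat f_\xi\|_F^2$. For $\hat H\subseteq\hat G$, $L^2(\hat H)$ = functions with $\hat f_\xi=0$ for $\xi\notin\hat H$. $B(L^2(\hat H))$ = block-diagonal operators $\ell=(\ell_\xi)_{\xi\in\hat H}$ acting by $\hat f_\xi\mapsto\hat f_\xi\ell_\xi^*$. Atomic norm $\|z\|_{\hat G}=\inf\{t\ge0:z\in t\cdot\mathrm{cl}\,\mathrm{conv}\{\pm(\rho_\xi(g))_{\xi\in\hat G}:g\in G\}\}$; $P_{\hat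 H}(z)=(z_\xi)_{\xi\in\hat H}$; $\|t\|^+_{\hat H}=\inf\{\|z\|_{\hat G}:z\in B(L^2(\hat G)),P_{\hat H}(z)=t\}$. Problem $\mathcal P(\hat H)$: minimize over dictionaries $\hat\Phi=\{\hat\phi_1,\dots,\hat\phi_q\}\subset L^2(\hat H)$ and operators $\ell^{(i)}_j\in B(L^2(\hat H))$ the objective $\sum_{i=1}^n\big(\sum_{\xi\in\hat H}\frac{d_\xi^2}{2}\|\hat y^{(i)}_\xi-\sum_{j}\hat\phi_{j,\xi}(\ell^{(i)}_{j,\xi})^*\|_F^2+\lambda\sum_j\|\ell^{(i)}_j\|^+_{\hat H}\big)+\sum_j\mu_j\sum_{\xi\in\hat H}d_\xi^2\|\hat\phi_{j,\xi}\|_F^2$, with infimum $\mathrm{OPT}\text{-}\hat H$; an optimal dictionary is the dictionary part of a minimizer. Distance between dictionaries: $D(\Phi,\tilde\Phi)=\min_{\pi,\,g_1,\ldots,g_q\in G}\max_j\|\phi_j-\tau(g_j)\tilde\phi_{\pi(j)}\|_2$, where $\pi$ ranges over permutations of $\{1,\dots,q\}$ and $[\tau(g)f](x)=f(g^{-1}x)$. Canonical uniqueness: an optimal dictionary $\hat\Phi$ of $\mathcal P(\hat G)$ is canonically unique if there is a function $\delta$ with $\delta(\epsilon)\downarrow0$ as $\epsilon\downarrow0$ such that every dictionary $\tilde\Phi$ attaining objective value $\mathrm{OPT}\text{-}\hat G+\epsilon$ in $\mathcal P(\hat G)$ (with some choice of operators) satisfies $D(\hat\Phi,\tilde\Phi)\le\delta(\epsilon)$.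 *)

theory Defs
  imports "HOL-Analysis.Analysis" "HOL-Combinatorics.Permutations" "Jordan_Normal_Form.Matrix"
begin

definition compact_hausdorff_group ::
  "('g::t2_space \<Rightarrow> 'g \<Rightarrow> 'g) \<Rightarrow> ('g \<Rightarrow> 'g) \<Rightarrow> 'g \<Rightarrow> bool" where
  "compact_hausdorff_group gmul ginv e \<longleftrightarrow>
     (\<forall>x y z. gmul (gmul x y) z = gmul x (gmul y z)) \<and>
     (\<forall>x. gmul e x = x \<and> gmul x e = x) \<and>
     (\<forall>x. gmul (ginv x) x = e \<and> gmul x (ginv x) = e) \<and>
     continuous_on UNIV (\<lambda>p. gmul (fst p) (snd p)) \<and>
     continuous_on UNIV ginv \<and>
     compact (UNIV :: 'g set)"

text \<open>Normalized Haar measure: a (Radon) Borel probability measure invariant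
  under left translations (on a compact group it is automatically also
  right invariant; we state both).\<close>

definition normalized_haar ::
  "('g::t2_space \<Rightarrow> 'g \<Rightarrow> 'g) \<Rightarrow> 'g measure \<Rightarrow> bool" where
  "normalized_haar gmul M \<longleftrightarrow>
     sets M = sets borel \<and> emeasure M UNIV = 1 \<and>
     (\<forall>g. distr M M (\<lambda>x. gmul g x) = M) \<and>
     (\<forall>g. distr M M (\<lambda>x. gmul x g) = M) \<and>
     (\<forall>A\<in>sets M. emeasure M A = (SUP K\<in>{K. compact K \<and> K \<subseteq> A}. emeasure M K))"

definition cadj :: "complex mat \<Rightarrow> complex mat" where
  "cadj A = mat (dim_col A) (dim_row A) (\<lambda>(i,j). cnj (A $$ (j,i)))"

definition frob_norm :: "complex mat \<Rightarrow> real" where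
  "frob_norm A = sqrt (\<Sum>i<dim_row A. \<Sum>j<dim_col A. (cmod (A $$ (i,j)))\<^sup>2)"

definition cvec_norm :: "complex vec \<Rightarrow> real" where
  "cvec_norm v = sqrt (\<Sum>i<dim_vec v. (cmod (v $ i))\<^sup>2)"

definition unitary_rep ::
  "('g::topological_space \<Rightarrow> 'g \<Rightarrow> 'g) \<Rightarrow> nat \<Rightarrow> ('g \<Rightarrow> complex mat) \<Rightarrow> bool" where
  "unitary_rep gmul n \<sigma> \<longleftrightarrow>
     (\<forall>g. \<sigma> g \<in> carrier_mat n n) \<and>
     (\<forall>g h. \<sigma> (gmul g h) = \<sigma> g * \<sigma> h) \<and>
     (\<forall>g. \<sigma> g * cadj (\<sigma> g) = 1\<^sub>m n \<and> cadj (\<sigma> g) * \<sigma> g = 1\<^sub>m n) \<and>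
     (\<forall>a<n. \<forall>b<n. continuous_on UNIV (\<lambda>g. \<sigma> g $$ (a,b)))"

definition invariant_subspace :: "nat \<Rightarrow> ('g \<Rightarrow> complex mat) \<Rightarrow> complex vec set \<Rightarrow> bool" where
  "invariant_subspace n \<sigma> W \<longleftrightarrow>
     W \<subseteq> carrier_vec n \<and> 0\<^sub>v n \<in> W \<and>
     (\<forall>v\<in>W. \<forall>w\<in>W. v + w \<in> W) \<and> (\<forall>c. \<forall>v\<in>W. c \<cdot>\<^sub>v v \<in> W) \<and>
     (\<forall>g. \<forall>v\<in>W. \<sigma> g *\<^sub>v v \<in> W)"

definition irreducible_rep :: "nat \<Rightarrow> ('g \<Rightarrow> complex mat) \<Rightarrow> bool" where
  "irreducible_rep n \<sigma> \<longleftrightarrow> n \<ge> 1 \<and>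
     (\<forall>W. invariant_subspace n \<sigma> W \<longrightarrow> W = {0\<^sub>v n} \<or> W = carrier_vec n)"

definition rep_iso :: "nat \<Rightarrow> ('g \<Rightarrow> complex mat) \<Rightarrow> nat \<Rightarrow> ('g \<Rightarrow> complex mat) \<Rightarrow> bool" where
  "rep_iso n \<sigma> m \<tau> \<longleftrightarrow> n = m \<and>
     (\<exists>A\<in>carrier_mat n n. invertible_mat A \<and> (\<forall>g. A * \<sigma> g = \<tau> g * A))"

text \<open>\<open>\<rho>\<close>, \<open>d\<close> indexed by the type 'x form a complete set of pairwise
  non-isomorphic irreducible unitary representations (the dual \<open>\<hat>G\<close> = UNIV :: 'x set).
  Irreducible unitary representations of a compact group are finite-dimensional,
  so completeness is stated w.r.t. finite-dimensional ones.\<close>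

definition complete_dual ::
  "('g::topological_space \<Rightarrow> 'g \<Rightarrow> 'g) \<Rightarrow> ('x \<Rightarrow> nat) \<Rightarrow> ('x \<Rightarrow> 'g \<Rightarrow> complex mat) \<Rightarrow> bool" where
  "complete_dual gmul d \<rho> \<longleftrightarrow>
     (\<forall>\<xi>. unitary_rep gmul (d \<xi>) (\<rho> \<xi>) \<and> irreducible_rep (d \<xi>) (\<rho> \<xi>)) \<and>
     (\<forall>\<xi> \<eta>. \<xi> \<noteq> \<eta> \<longrightarrow> \<not> rep_iso (d \<xi>) (\<rho> \<xi>) (d \<eta>) (\<rho> \<eta>)) \<and>
     (\<forall>n \<sigma>. unitary_rep gmul n \<sigma> \<and> irreducible_rep n \<sigma> \<longrightarrow>
        (\<exists>\<xi>. rep_iso (d \<xi>) (\<rho> \<xi>) n \<sigma>))"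

definition in_L2 :: "'g measure \<Rightarrow> ('g \<Rightarrow> complex) \<Rightarrow> bool" where
  "in_L2 M f \<longleftrightarrow> f \<in> borel_measurable M \<and> integrable M (\<lambda>x. (cmod (f x))\<^sup>2)"

definition L2_norm :: "'g measure \<Rightarrow> ('g \<Rightarrow> complex) \<Rightarrow> real" where
  "L2_norm M f = sqrt (\<integral>x. (cmod (f x))\<^sup>2 \<partial>M)"

text \<open>\<open>\<hat>f\<^sub>\<xi> = \<integral> f(g) \<rho>\<^sub>\<xi>(g)\<^sup>* d\<mu>(g)\<close>, entrywise.\<close>

definition fourier ::
  "'g measure \<Rightarrow> ('x \<Rightarrow> nat) \<Rightarrow> ('x \<Rightarrow> 'g \<Rightarrow> complex mat) \<Rightarrow> ('g \<Rightarrow> complex) \<Rightarrow> 'x \<Rightarrow> complex mat" where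
  "fourier M d \<rho> f \<xi> = mat (d \<xi>) (d \<xi>) (\<lambda>(a,b). \<integral>x. f x * cnj (\<rho> \<xi> x $$ (b,a)) \<partial>M)"

text \<open>\<open>L\<^sup>2(\<hat>H)\<close>: functions in \<open>L\<^sup>2(G)\<close> whose Fourier coefficients vanish outside \<open>\<hat>H\<close>.\<close>

definition in_L2_H ::
  "'g measure \<Rightarrow> ('x \<Rightarrow> nat) \<Rightarrow> ('x \<Rightarrow> 'g \<Rightarrow> complex mat) \<Rightarrow> 'x set \<Rightarrow> ('g \<Rightarrow> complex) \<Rightarrow> bool" where
  "in_L2_H M d \<rho> H f \<longleftrightarrow> in_L2 M f \<and> (\<forall>\<xi>. \<xi> \<notin> H \<longrightarrow> fourier M d \<rho> f \<xi> = 0\<^sub>m (d \<xi>) (d \<xi>))"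

definition transl :: "('g \<Rightarrow> 'g \<Rightarrow> 'g) \<Rightarrow> ('g \<Rightarrow> 'g) \<Rightarrow> 'g \<Rightarrow> ('g \<Rightarrow> complex) \<Rightarrow> 'g \<Rightarrow> complex" where
  "transl gmul ginv g f = (\<lambda>x. f (gmul (ginv g) x))"

text \<open>An element of \<open>B(L\<^sup>2(\<hat>H))\<close>: a family of blocks \<open>\<ell>\<^sub>\<xi>\<close> (\<open>d\<^sub>\<xi> \<times> d\<^sub>\<xi>\<close>), indexed by
  \<open>\<xi> \<in> \<hat>H\<close> (blocks outside \<open>\<hat>H\<close> are set to 0 by convention), with uniformly bounded
  operator norms.\<close>

definition block_op :: "('x \<Rightarrow> nat) \<Rightarrow> 'x set \<Rightarrow> ('x \<Rightarrow> complex mat) \<Rightarrow> bool" where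
  "block_op d H l \<longleftrightarrow>
     (\<forall>\<xi>. l \<xi> \<in> carrier_mat (d \<xi>) (d \<xi>)) \<and>
     (\<forall>\<xi>. \<xi> \<notin> H \<longrightarrow> l \<xi> = 0\<^sub>m (d \<xi>) (d \<xi>)) \<and>
     (\<exists>C. \<forall>\<xi>\<in>H. \<forall>v\<in>carrier_vec (d \<xi>). cvec_norm (l \<xi> *\<^sub>v v) \<le> C * cvec_norm v)"

definition atoms :: "('x \<Rightarrow> 'g \<Rightarrow> complex mat) \<Rightarrow> ('x \<Rightarrow> complex mat) set" where
  "atoms \<rho> = {(\<lambda>\<xi>. \<rho> \<xi> g) | g. True} \<union> {(\<lambda>\<xi>. (-1) \<cdot>\<^sub>m \<rho> \<xi> g) | g. True}"

definition block_conv :: "('x \<Rightarrow> nat) \<Rightarrow> ('x \<Rightarrow> complex mat) set \<Rightarrow> ('x \<Rightarrow> complex mat) set" where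
  "block_conv d S = {z. \<exists>(m::nat) c a. (\<forall>k<m. c k \<ge> (0::real) \<and> a k \<in> S) \<and> (\<Sum>k<m. c k) = 1 \<and>
       z = (\<lambda>\<xi>. mat (d \<xi>) (d \<xi>) (\<lambda>(i,j). \<Sum>k<m. complex_of_real (c k) * (a k \<xi> $$ (i,j))))}"

text \<open>Closure in the topology of blockwise (coordinatewise) convergence, which on
  bounded sets coincides with the weak-* topology of \<open>B(L\<^sup>2(\<hat>G))\<close>.\<close>

definition block_closure :: "('x \<Rightarrow> nat) \<Rightarrow> ('x \<Rightarrow> complex mat) set \<Rightarrow> ('x \<Rightarrow> complex mat) set" where
  "block_closure d S = {z. (\<forall>\<xi>. z \<xi> \<in> carrier_mat (d \<xi>) (d \<xi>)) \<and>
       (\<forall>F \<epsilon>. finite F \<and> \<epsilon> > 0 \<longrightarrow>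
          (\<exists>w\<in>S. \<forall>\<xi>\<in>F. \<forall>i<d \<xi>. \<forall>j<d \<xi>. cmod (z \<xi> $$ (i,j) - w \<xi> $$ (i,j)) < \<epsilon>))}"

definition atomic_norm :: "('x \<Rightarrow> nat) \<Rightarrow> ('x \<Rightarrow> 'g \<Rightarrow> complex mat) \<Rightarrow> ('x \<Rightarrow> complex mat) \<Rightarrow> ereal" where
  "atomic_norm d \<rho> z = Inf {ereal t | t. t \<ge> 0 \<and>
       (\<exists>w\<in>block_closure d (block_conv d (atoms \<rho>)). z = (\<lambda>\<xi>. complex_of_real t \<cdot>\<^sub>m w \<xi>))}"

definition plus_norm :: "('x \<Rightarrow> nat) \<Rightarrow> ('x \<Rightarrow> 'g \<Rightarrow> complex mat) \<Rightarrow> 'x set \<Rightarrow> ('x \<Rightarrow> complex mat) \<Rightarrow> ereal" where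
  "plus_norm d \<rho> H t = Inf {atomic_norm d \<rho> z | z. block_op d UNIV z \<and> (\<forall>\<xi>\<in>H. z \<xi> = t \<xi>)}"

text \<open>Dictionaries: \<open>\<phi> j\<close> for \<open>j < q\<close>; operators: \<open>l i j\<close> for \<open>i < n\<close>, \<open>j < q\<close>;
  data: \<open>y i\<close> for \<open>i < n\<close>.\<close>

definition feasible ::
  "'g measure \<Rightarrow> ('x \<Rightarrow> nat) \<Rightarrow> ('x \<Rightarrow> 'g \<Rightarrow> complex mat) \<Rightarrow> nat \<Rightarrow> nat \<Rightarrow> 'x set \<Rightarrow>
   (nat \<Rightarrow> 'g \<Rightarrow> complex) \<Rightarrow> (nat \<Rightarrow> nat \<Rightarrow> 'x \<Rightarrow> complex mat) \<Rightarrow> bool" where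
  "feasible M d \<rho> n q H \<phi> l \<longleftrightarrow>
     (\<forall>j<q. in_L2_H M d \<rho> H (\<phi> j)) \<and> (\<forall>i<n. \<forall>j<q. block_op d H (l i j))"

definition objective ::
  "'g measure \<Rightarrow> ('x \<Rightarrow> nat) \<Rightarrow> ('x \<Rightarrow> 'g \<Rightarrow> complex mat) \<Rightarrow> nat \<Rightarrow> (nat \<Rightarrow> 'g \<Rightarrow> real) \<Rightarrow>
   nat \<Rightarrow> real \<Rightarrow> (nat \<Rightarrow> real) \<Rightarrow> 'x set \<Rightarrow>
   (nat \<Rightarrow> 'g \<Rightarrow> complex) \<Rightarrow> (nat \<Rightarrow> nat \<Rightarrow> 'x \<Rightarrow> complex mat) \<Rightarrow> ereal" where
  "objective M d \<rho> n y q lam \<mu> H \<phi> l =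
     (\<Sum>i<n.
        enn2ereal (\<Sum>\<^sub>\<infinity>\<xi>\<in>H. ennreal ((real (d \<xi>))\<^sup>2 / 2 *
           (frob_norm (mat (d \<xi>) (d \<xi>) (\<lambda>ab.
              fourier M d \<rho> (\<lambda>x. complex_of_real (y i x)) \<xi> $$ ab -
              (\<Sum>j<q. (fourier M d \<rho> (\<phi> j) \<xi> * cadj (l i j \<xi>)) $$ ab))))\<^sup>2))
        + ereal lam * (\<Sum>j<q. plus_norm d \<rho> H (l i j)))
     + (\<Sum>j<q. ereal (\<mu> j) *
          enn2ereal (\<Sum>\<^sub>\<infinity>\<xi>\<in>H. ennreal ((real (d \<xi>))\<^sup>2 * (frob_norm (fourier M d \<rho> (\<phi> j) \<xi>))\<^sup>2)))"

definition OPT ::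
  "'g measure \<Rightarrow> ('x \<Rightarrow> nat) \<Rightarrow> ('x \<Rightarrow> 'g \<Rightarrow> complex mat) \<Rightarrow> nat \<Rightarrow> (nat \<Rightarrow> 'g \<Rightarrow> real) \<Rightarrow>
   nat \<Rightarrow> real \<Rightarrow> (nat \<Rightarrow> real) \<Rightarrow> 'x set \<Rightarrow> ereal" where
  "OPT M d \<rho> n y q lam \<mu> H =
     Inf {objective M d \<rho> n y q lam \<mu> H \<phi> l | \<phi> l. feasible M d \<rho> n q H \<phi> l}"

definition optimal_dictionary ::
  "'g measure \<Rightarrow> ('x \<Rightarrow> nat) \<Rightarrow> ('x \<Rightarrow> 'g \<Rightarrow> complex mat) \<Rightarrow> nat \<Rightarrow> (nat \<Rightarrow> 'g \<Rightarrow> real) \<Rightarrow>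
   nat \<Rightarrow> real \<Rightarrow> (nat \<Rightarrow> real) \<Rightarrow> 'x set \<Rightarrow> (nat \<Rightarrow> 'g \<Rightarrow> complex) \<Rightarrow> bool" where
  "optimal_dictionary M d \<rho> n y q lam \<mu> H \<phi> \<longleftrightarrow>
     (\<exists>l. feasible M d \<rho> n q H \<phi> l \<and>
          objective M d \<rho> n y q lam \<mu> H \<phi> l = OPT M d \<rho> n y q lam \<mu> H)"

definition dict_dist ::
  "('g \<Rightarrow> 'g \<Rightarrow> 'g) \<Rightarrow> ('g \<Rightarrow> 'g) \<Rightarrow> 'g measure \<Rightarrow> nat \<Rightarrow>
   (nat \<Rightarrow> 'g \<Rightarrow> complex) \<Rightarrow> (nat \<Rightarrow> 'g \<Rightarrow> complex) \<Rightarrow> real" where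
  "dict_dist gmul ginv M q \<phi> \<psi> =
     Inf {Max ((\<lambda>j. L2_norm M (\<lambda>x. \<phi> j x - transl gmul ginv (gs j) (\<psi> (\<pi> j)) x)) ` {..<q})
          | \<pi> gs. \<pi> permutes {..<q}}"

definition canonically_unique ::
  "('g \<Rightarrow> 'g \<Rightarrow> 'g) \<Rightarrow> ('g \<Rightarrow> 'g) \<Rightarrow> 'g measure \<Rightarrow> ('x \<Rightarrow> nat) \<Rightarrow> ('x \<Rightarrow> 'g \<Rightarrow> complex mat) \<Rightarrow>
   nat \<Rightarrow> (nat \<Rightarrow> 'g \<Rightarrow> real) \<Rightarrow> nat \<Rightarrow> real \<Rightarrow> (nat \<Rightarrow> real) \<Rightarrow> (nat \<Rightarrow> 'g \<Rightarrow> complex) \<Rightarrow> bool" where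
  "canonically_unique gmul ginv M d \<rho> n y q lam \<mu> \<Phi> \<longleftrightarrow>
     (\<exists>\<delta>::real \<Rightarrow> real. (\<delta> \<longlongrightarrow> 0) (at_right 0) \<and>
        (\<forall>\<epsilon>\<ge>0. \<forall>\<psi> l. feasible M d \<rho> n q UNIV \<psi> l \<and>
            objective M d \<rho> n y q lam \<mu> UNIV \<psi> l = OPT M d \<rho> n y q lam \<mu> UNIV + ereal \<epsilon>
            \<longrightarrow> dict_dist gmul ginv M q \<Phi> \<psi> \<le> \<delta> \<epsilon>))"

end

theory Submission
  imports Defs "Jordan_Normal_Form.Spectral_Radius"
begin

text \<open>
  Extend the optimal coefficients of \<open>\<P>(\<hat>H\<^sub>k)\<close> to all of \<open>\<hat>G\<close>, up to a slack \<open>\<eta>\<^sub>k \<rightarrow> 0\<close>.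
  Outside \<open>\<hat>H\<^sub>k\<close> the dictionary \<open>\<hat>\<Phi>\<^bsup>\<hat>H\<^sub>k\<^esup>\<close> has no energy, so in \<open>\<P>(\<hat>G)\<close> its objective
  exceeds \<open>OPT-\<hat>H\<^sub>k\<close> by at most the data energy outside \<open>\<hat>H\<^sub>k\<close> plus the slack. Conversely,
  truncating an optimal dictionary of \<open>\<P>(\<hat>G)\<close> to a finite set \<open>F \<subseteq> \<hat>H\<^sub>k\<close> of frequencies
  (Schur orthogonality provides functions with prescribed Fourier coefficients) gives
  \<open>OPT-\<hat>H\<^sub>k \<le> OPT-\<hat>G + (data energy outside F)\<close>; here atoms of weight \<open>\<mu>\<^sub>j \<le> 0\<close> must vanish,
  since otherwise they could be rescaled without bound at no cost. Hence the extended
  dictionaries are \<open>\<epsilon>\<^sub>k\<close>-optimal with \<open>\<epsilon>\<^sub>k \<rightarrow> 0\<close>, and canonical uniqueness gives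
  \<open>D \<le> \<delta>(\<epsilon>\<^sub>k) \<rightarrow> 0\<close>.

  Since \<open>\<delta>(0)\<close> need not be small, exact optima (\<open>\<epsilon>\<^sub>k = 0\<close>) need a separate argument: perturbing
  one atom at a single frequency changes the objective by \<open>\<alpha> c\<^sup>2\<close>. If \<open>\<alpha> > 0\<close> the perturbations
  are near-optimal and converge to the optimum; if \<open>\<alpha> = 0\<close> they are exact optima of unbounded
  norm, which canonical uniqueness rules out.
\<close>

section \<open>Matrices\<close>

lemma cadj_carrier[simp]: "A \<in> carrier_mat n m \<Longrightarrow> cadj A \<in> carrier_mat m n"
  by (auto simp: cadj_def)

lemma cadj_dim[simp]: "dim_row (cadj A) = dim_col A" "dim_col (cadj A) = dim_row A"
  by (auto simp: cadj_def)

lemma cadj_index[simp]: "i < dim_col A \<Longrightarrow> j < dim_row A \<Longrightarrow> cadj A $$ (i,j) = cnj (A $$ (j,i))"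
  by (auto simp: cadj_def)

lemma cadj_cadj[simp]: "cadj (cadj A) = A"
  by (rule eq_matI) auto

lemma cadj_mult:
  assumes "A \<in> carrier_mat n k" "B \<in> carrier_mat k m"
  shows "cadj (A * B) = cadj B * cadj A"
  using assms by (intro eq_matI) (auto simp: scalar_prod_def row_def col_def mult.commute)

lemma cadj_smult: "cadj (c \<cdot>\<^sub>m A) = cnj c \<cdot>\<^sub>m cadj A"
  by (rule eq_matI) auto

lemma smult_smult_mat: "a \<cdot>\<^sub>m (b \<cdot>\<^sub>m (A :: 'a::comm_ring_1 mat)) = (a * b) \<cdot>\<^sub>m A"
  by (rule eq_matI) (auto simp: mult.assoc)

lemma smult_cancel_cadj:
  assumes F: "F \<in> carrier_mat m m" and L: "L \<in> carrier_mat m m" and t: "t \<noteq> 0"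
  shows "(complex_of_real t \<cdot>\<^sub>m F) * cadj (complex_of_real (1/t) \<cdot>\<^sub>m L) = F * cadj L"
proof -
  have "cadj (complex_of_real (1/t) \<cdot>\<^sub>m L) = complex_of_real (1/t) \<cdot>\<^sub>m cadj L"
    by (simp add: cadj_smult)
  then have "(complex_of_real t \<cdot>\<^sub>m F) * cadj (complex_of_real (1/t) \<cdot>\<^sub>m L)
      = (complex_of_real t \<cdot>\<^sub>m F) * (complex_of_real (1/t) \<cdot>\<^sub>m cadj L)" by simp
  also have "\<dots> = complex_of_real t \<cdot>\<^sub>m (F * (complex_of_real (1/t) \<cdot>\<^sub>m cadj L))"
    by (rule mult_smult_assoc_mat[OF F, where nc=m]) (use L in simp)
  also have "\<dots> = complex_of_real t \<cdot>\<^sub>m (complex_of_real (1/t) \<cdot>\<^sub>m (F * cadj L))"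
    by (subst mult_smult_distrib[OF F, where nc=m]) (use L in simp_all)
  also have "\<dots> = F * cadj L" using t by (intro eq_matI) auto
  finally show ?thesis .
qed

lemma mult_mat_index:
  assumes "A \<in> carrier_mat n k" "B \<in> carrier_mat k m" "i < n" "j < m"
  shows "(A * B) $$ (i,j) = (\<Sum>l<k. A $$ (i,l) * B $$ (l,j))"
  using assms by (auto simp: scalar_prod_def lessThan_atLeast0)

lemma diag_mult_cadj:
  assumes "T \<in> carrier_mat m n" "i < m"
  shows "(T * cadj T) $$ (i,i) = complex_of_real (\<Sum>l<n. (cmod (T $$ (i,l)))\<^sup>2)"
  using assms by (subst mult_mat_index[of _ m n _ m])
    (auto simp: complex_norm_square simp del: of_real_power intro!: sum.cong)

lemma diag_cadj_mult:
  assumes "T \<in> carrier_mat m n" "k < n"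
  shows "(cadj T * T) $$ (k,k) = complex_of_real (\<Sum>l<m. (cmod (T $$ (l,k)))\<^sup>2)"
  using assms by (subst mult_mat_index[of _ n m _ n])
    (auto simp: complex_norm_square mult.commute simp del: of_real_power intro!: sum.cong)

lemma trace_mult_cadj_commute:
  assumes T: "T \<in> carrier_mat m n"
  shows "(\<Sum>i<m. (T * cadj T) $$ (i,i)) = (\<Sum>k<n. (cadj T * T) $$ (k,k))"
proof -
  have "(\<Sum>i<m. (T * cadj T) $$ (i,i)) = complex_of_real (\<Sum>i<m. \<Sum>l<n. (cmod (T $$ (i,l)))\<^sup>2)"
    by (simp add: diag_mult_cadj[OF T])
  also have "\<dots> = complex_of_real (\<Sum>k<n. \<Sum>l<m. (cmod (T $$ (l,k)))\<^sup>2)"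
    by (simp add: sum.swap[of _ "{..<m}" "{..<n}"])
  also have "\<dots> = (\<Sum>k<n. (cadj T * T) $$ (k,k))"
    by (simp add: diag_cadj_mult[OF T])
  finally show ?thesis .
qed

text \<open>Comparing traces of \<open>T T\<^sup>*\<close> and \<open>T\<^sup>* T\<close> forces \<open>m = n\<close>; then \<open>T / a\<close> inverts \<open>T\<^sup>*\<close>.\<close>

lemma scalar_gram_imp_invertible:
  fixes T :: "complex mat"
  assumes T: "T \<in> carrier_mat m n" and nz: "T \<noteq> 0\<^sub>m m n"
    and a1: "T * cadj T = a1 \<cdot>\<^sub>m 1\<^sub>m m" and a2: "cadj T * T = a2 \<cdot>\<^sub>m 1\<^sub>m n"
  shows "m = n \<and> invertible_mat (cadj T)"
proof -
  have Tc: "cadj T \<in> carrier_mat n m" using T by simp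
  obtain i k where ik: "i < m" "k < n" "T $$ (i,k) \<noteq> 0"
    using nz T by (metis carrier_matD(1,2) eq_matI index_zero_mat(1,2,3))
  have "(cmod (T $$ (i,k)))\<^sup>2 \<le> (\<Sum>l<n. (cmod (T $$ (i,l)))\<^sup>2)"
    by (rule member_le_sum) (use ik in auto)
  moreover have "(cmod (T $$ (i,k)))\<^sup>2 > 0" using ik by simp
  moreover have "a1 = complex_of_real (\<Sum>l<n. (cmod (T $$ (i,l)))\<^sup>2)"
    using diag_mult_cadj[OF T ik(1)] a1 ik(1) by simp
  ultimately have "a1 \<noteq> 0" by (metis less_le_trans less_irrefl of_real_eq_0_iff)
  have "(T * cadj T) * T = T * (cadj T * T)" by (rule assoc_mult_mat[OF T Tc T])
  then have "a1 \<cdot>\<^sub>m T = a2 \<cdot>\<^sub>m T"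
    using T by (simp add: a1 a2 mult_smult_assoc_mat[of _ m m T n] mult_smult_distrib[of T m n _ n])
  then have "(a1 \<cdot>\<^sub>m T) $$ (i,k) = (a2 \<cdot>\<^sub>m T) $$ (i,k)" by simp
  then have a12: "a1 = a2" using ik T by simp
  have "of_nat m * a1 = (\<Sum>i'<m. (T * cadj T) $$ (i',i'))" using a1 by simp
  also have "\<dots> = (\<Sum>k'<n. (cadj T * T) $$ (k',k'))" by (rule trace_mult_cadj_commute[OF T])
  also have "\<dots> = of_nat n * a1" using a2 a12 by simp
  finally have mn: "m = n" using \<open>a1 \<noteq> 0\<close> by simp
  have "invertible_mat (cadj T)"
    unfolding invertible_mat_def inverts_mat_def
  proof (intro conjI exI[of _ "(1 / a1) \<cdot>\<^sub>m T"])
    show "square_mat (cadj T)" using T mn by simp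
    have "cadj T * ((1 / a1) \<cdot>\<^sub>m T) = (1 / a1) \<cdot>\<^sub>m (cadj T * T)"
      by (rule mult_smult_distrib[OF Tc T])
    also have "\<dots> = 1\<^sub>m n" using a2 a12 \<open>a1 \<noteq> 0\<close> by (intro eq_matI) auto
    finally show "cadj T * ((1 / a1) \<cdot>\<^sub>m T) = 1\<^sub>m (dim_row (cadj T))" using T by simp
    have "((1 / a1) \<cdot>\<^sub>m T) * cadj T = (1 / a1) \<cdot>\<^sub>m (T * cadj T)"
      by (rule mult_smult_assoc_mat[OF T Tc])
    also have "\<dots> = 1\<^sub>m m" using a1 \<open>a1 \<noteq> 0\<close> by (intro eq_matI) auto
    finally show "((1 / a1) \<cdot>\<^sub>m T) * cadj T = 1\<^sub>m (dim_row ((1 / a1) \<cdot>\<^sub>m T))" using T by simp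
  qed
  with mn show ?thesis by simp
qed

lemma eigenspace_invariant:
  fixes S :: "complex mat"
  assumes car: "\<And>g. \<sigma> g \<in> carrier_mat m m"
    and S: "S \<in> carrier_mat m m" and comm: "\<And>g. S * \<sigma> g = \<sigma> g * S"
  shows "invariant_subspace m \<sigma> {w \<in> carrier_vec m. S *\<^sub>v w = c \<cdot>\<^sub>v w}"
  unfolding invariant_subspace_def
proof (intro conjI ballI allI)
  show "0\<^sub>v m \<in> {w \<in> carrier_vec m. S *\<^sub>v w = c \<cdot>\<^sub>v w}" using S by (auto intro!: eq_vecI)
next
  fix x y assume "x \<in> {w \<in> carrier_vec m. S *\<^sub>v w = c \<cdot>\<^sub>v w}" "y \<in> {w \<in> carrier_vec m. S *\<^sub>v w = c \<cdot>\<^sub>v w}"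
  then show "x + y \<in> {w \<in> carrier_vec m. S *\<^sub>v w = c \<cdot>\<^sub>v w}"
    using S by (auto simp: mult_add_distrib_mat_vec smult_add_distrib_vec)
next
  fix k x assume "x \<in> {w \<in> carrier_vec m. S *\<^sub>v w = c \<cdot>\<^sub>v w}"
  then show "k \<cdot>\<^sub>v x \<in> {w \<in> carrier_vec m. S *\<^sub>v w = c \<cdot>\<^sub>v w}"
    using S by (auto simp: mult_mat_vec smult_smult_assoc mult.commute)
next
  fix g x assume x: "x \<in> {w \<in> carrier_vec m. S *\<^sub>v w = c \<cdot>\<^sub>v w}"
  then have xc: "x \<in> carrier_vec m" by simp
  have "S *\<^sub>v (\<sigma> g *\<^sub>v x) = (S * \<sigma> g) *\<^sub>v x"
    by (rule assoc_mult_mat_vec[symmetric]) (use S car xc in auto)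
  also have "\<dots> = (\<sigma> g * S) *\<^sub>v x" by (simp add: comm)
  also have "\<dots> = c \<cdot>\<^sub>v (\<sigma> g *\<^sub>v x)"
    using S car[of g] x by (simp add: mult_mat_vec)
  finally show "\<sigma> g *\<^sub>v x \<in> {w \<in> carrier_vec m. S *\<^sub>v w = c \<cdot>\<^sub>v w}"
    using car[of g] xc by simp
qed auto

lemma schur_lemma_scalar:
  fixes S :: "complex mat"
  assumes irr: "irreducible_rep m \<sigma>" and car: "\<And>g. \<sigma> g \<in> carrier_mat m m"
    and S: "S \<in> carrier_mat m m" and comm: "\<And>g. S * \<sigma> g = \<sigma> g * S"
  shows "\<exists>c. S = c \<cdot>\<^sub>m 1\<^sub>m m"
proof -
  have "m > 0" using irr by (simp add: irreducible_rep_def)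
  then obtain c where "c \<in> spectrum S" using spectrum_non_empty[OF S] by blast
  then obtain v where v: "v \<in> carrier_vec m" "v \<noteq> 0\<^sub>v m" "S *\<^sub>v v = c \<cdot>\<^sub>v v"
    using S by (auto simp: spectrum_def eigenvalue_def eigenvector_def)
  let ?W = "{w \<in> carrier_vec m. S *\<^sub>v w = c \<cdot>\<^sub>v w}"
  have "invariant_subspace m \<sigma> ?W" by (rule eigenspace_invariant[OF car S comm])
  then have "?W = {0\<^sub>v m} \<or> ?W = carrier_vec m" using irr by (simp add: irreducible_rep_def)
  moreover have "v \<in> ?W" using v by simp
  ultimately have W: "?W = carrier_vec m" using v(2) by auto
  have "S = c \<cdot>\<^sub>m 1\<^sub>m m"
  proof (rule eq_matI)
    fix i j assume ij: "i < dim_row (c \<cdot>\<^sub>m 1\<^sub>m m)" "j < dim_col (c \<cdot>\<^sub>m 1\<^sub>m m)"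
    then have "unit_vec m j \<in> ?W" unfolding W by simp
    then have "S *\<^sub>v unit_vec m j = c \<cdot>\<^sub>v unit_vec m j" by simp
    then have "(S *\<^sub>v unit_vec m j) $ i = (c \<cdot>\<^sub>v unit_vec m j) $ i" by simp
    then show "S $$ (i, j) = (c \<cdot>\<^sub>m 1\<^sub>m m) $$ (i, j)"
      using ij S by (auto split: if_splits)
  qed (use S in auto)
  then show ?thesis by blast
qed

lemma cvec_norm_smult: "cvec_norm (c \<cdot>\<^sub>v v) = cmod c * cvec_norm v"
proof -
  have "(\<Sum>i<dim_vec v. (cmod (c * v $ i))\<^sup>2) = (cmod c)\<^sup>2 * (\<Sum>i<dim_vec v. (cmod (v $ i))\<^sup>2)"
    by (simp add: norm_mult power_mult_distrib sum_distrib_left)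
  then show ?thesis by (simp add: cvec_norm_def real_sqrt_mult)
qed

lemma cvec_norm_nonneg: "cvec_norm v \<ge> 0"
  by (simp add: cvec_norm_def sum_nonneg)

lemma smult_mat_vec: "A \<in> carrier_mat n m \<Longrightarrow> v \<in> carrier_vec m \<Longrightarrow> (c \<cdot>\<^sub>m A) *\<^sub>v v = c \<cdot>\<^sub>v (A *\<^sub>v v)"
  by (rule eq_vecI) (auto simp: scalar_prod_def sum_distrib_left mult.assoc)

lemma frob_sq: "(frob_norm A)\<^sup>2 = (\<Sum>i<dim_row A. \<Sum>j<dim_col A. (cmod (A $$ (i,j)))\<^sup>2)"
proof -
  have "0 \<le> (\<Sum>i<dim_row A. \<Sum>j<dim_col A. (cmod (A $$ (i,j)))\<^sup>2)" by (intro sum_nonneg) auto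
  then show ?thesis by (simp add: frob_norm_def)
qed

lemma frob_smult: "(frob_norm (c \<cdot>\<^sub>m A))\<^sup>2 = (cmod c)\<^sup>2 * (frob_norm A)\<^sup>2"
  by (simp add: frob_sq norm_mult power_mult_distrib sum_distrib_left)

lemma frob_zero: "frob_norm (0\<^sub>m m n) = 0"
  by (simp add: frob_norm_def)

lemma frob_mult_cadj:
  assumes X: "X \<in> carrier_mat n n" and L: "L \<in> carrier_mat n n"
    and C: "\<forall>v\<in>carrier_vec n. cvec_norm (L *\<^sub>v v) \<le> C * cvec_norm v"
  shows "(frob_norm (X * cadj L))\<^sup>2 \<le> C\<^sup>2 * (frob_norm X)\<^sup>2"
proof -
  have row: "(\<Sum>b<n. (cmod ((X * cadj L) $$ (a,b)))\<^sup>2) \<le> C\<^sup>2 * (\<Sum>c<n. (cmod (X $$ (a,c)))\<^sup>2)" if a: "a < n" for a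
  proof -
    define v where "v = vec n (\<lambda>c. cnj (X $$ (a,c)))"
    have v: "v \<in> carrier_vec n" by (simp add: v_def)
    have ent: "(L *\<^sub>v v) $ b = cnj ((X * cadj L) $$ (a,b))" if b: "b < n" for b
      using X L a b by (simp add: v_def scalar_prod_def lessThan_atLeast0 mult.commute)
    have "(cvec_norm (L *\<^sub>v v))\<^sup>2 = (\<Sum>b<n. (cmod ((L *\<^sub>v v) $ b))\<^sup>2)"
      using L v by (simp add: cvec_norm_def sum_nonneg del: index_mult_mat_vec)
    also have "\<dots> = (\<Sum>b<n. (cmod ((X * cadj L) $$ (a,b)))\<^sup>2)"
      by (rule sum.cong) (simp_all add: ent del: index_mult_mat_vec)
    finally have "(\<Sum>b<n. (cmod ((X * cadj L) $$ (a,b)))\<^sup>2) = (cvec_norm (L *\<^sub>v v))\<^sup>2" by simp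
    also have "\<dots> \<le> (C * cvec_norm v)\<^sup>2"
      using C v by (intro power_mono) (auto simp: cvec_norm_nonneg)
    also have "\<dots> = C\<^sup>2 * (\<Sum>c<n. (cmod (X $$ (a,c)))\<^sup>2)"
      by (simp add: cvec_norm_def power_mult_distrib sum_nonneg v_def)
    finally show ?thesis .
  qed
  have "(frob_norm (X * cadj L))\<^sup>2 = (\<Sum>a<n. \<Sum>b<n. (cmod ((X * cadj L) $$ (a,b)))\<^sup>2)"
    using X L by (simp add: frob_sq)
  also have "\<dots> \<le> (\<Sum>a<n. C\<^sup>2 * (\<Sum>c<n. (cmod (X $$ (a,c)))\<^sup>2))" by (intro sum_mono row) auto
  also have "\<dots> = C\<^sup>2 * (frob_norm X)\<^sup>2" using X by (simp add: frob_sq sum_distrib_left)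
  finally show ?thesis .
qed

lemma cmod_add_sq_le: "(cmod (a + b))\<^sup>2 \<le> 2 * (cmod a)\<^sup>2 + 2 * (cmod b)\<^sup>2"
proof -
  have "(cmod (a + b))\<^sup>2 \<le> (cmod a + cmod b)\<^sup>2"
    by (intro power_mono norm_triangle_ineq) auto
  also have "\<dots> \<le> 2 * (cmod a)\<^sup>2 + 2 * (cmod b)\<^sup>2"
    using zero_le_power2[of "cmod a - cmod b"] by (simp add: power2_eq_square algebra_simps)
  finally show ?thesis .
qed

lemma cmod_sum_sq_le: "(cmod (\<Sum>j<q. z j))\<^sup>2 \<le> real q * (\<Sum>j<q. (cmod (z j))\<^sup>2)"
proof -
  have "(cmod (\<Sum>j<q. z j))\<^sup>2 \<le> (\<Sum>j<q. cmod (z j))\<^sup>2"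
    by (intro power_mono norm_sum) auto
  also have "\<dots> = (\<Sum>j<q. cmod (z j) * 1)\<^sup>2" by simp
  also have "\<dots> \<le> (\<Sum>j<q. (cmod (z j))\<^sup>2) * (\<Sum>j<q. 1\<^sup>2)" by (rule Cauchy_Schwarz_ineq_sum)
  finally show ?thesis by (simp add: mult.commute)
qed

lemma frob_sum_sq_le:
  assumes R: "R \<in> carrier_mat m m" and P: "\<And>j. j < q \<Longrightarrow> P j \<in> carrier_mat m m"
  shows "(frob_norm (mat m m (\<lambda>ab. R $$ ab + (\<Sum>j<q. P j $$ ab))))\<^sup>2
      \<le> 2 * (frob_norm R)\<^sup>2 + 2 * real q * (\<Sum>j<q. (frob_norm (P j))\<^sup>2)"
proof -
  have pt: "(cmod (R $$ (a,b) + (\<Sum>j<q. P j $$ (a,b))))\<^sup>2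
      \<le> 2 * (cmod (R $$ (a,b)))\<^sup>2 + 2 * real q * (\<Sum>j<q. (cmod (P j $$ (a,b)))\<^sup>2)" for a b
    by (rule order_trans[OF cmod_add_sq_le]) (use cmod_sum_sq_le[of "\<lambda>j. P j $$ (a,b)" q] in simp)
  have frob_P: "(\<Sum>j<q. (frob_norm (P j))\<^sup>2) = (\<Sum>j<q. \<Sum>a<m. \<Sum>b<m. (cmod (P j $$ (a,b)))\<^sup>2)"
  proof (rule sum.cong[OF refl])
    fix j assume "j \<in> {..<q}"
    then show "(frob_norm (P j))\<^sup>2 = (\<Sum>a<m. \<Sum>b<m. (cmod (P j $$ (a,b)))\<^sup>2)"
      using carrier_matD[OF P[of j]] by (simp add: frob_sq)
  qed
  have "(frob_norm (mat m m (\<lambda>ab. R $$ ab + (\<Sum>j<q. P j $$ ab))))\<^sup>2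
      = (\<Sum>a<m. \<Sum>b<m. (cmod (R $$ (a,b) + (\<Sum>j<q. P j $$ (a,b))))\<^sup>2)"
    by (simp add: frob_sq)
  also have "\<dots> \<le> (\<Sum>a<m. \<Sum>b<m. 2 * (cmod (R $$ (a,b)))\<^sup>2 + 2 * real q * (\<Sum>j<q. (cmod (P j $$ (a,b)))\<^sup>2))"
    by (intro sum_mono pt)
  also have "\<dots> = 2 * (\<Sum>a<m. \<Sum>b<m. (cmod (R $$ (a,b)))\<^sup>2)
      + 2 * real q * (\<Sum>j<q. \<Sum>a<m. \<Sum>b<m. (cmod (P j $$ (a,b)))\<^sup>2)"
    by (simp add: sum.distrib sum_distrib_left sum.swap[of _ "{..<q}"])
  also have "\<dots> = 2 * (frob_norm R)\<^sup>2 + 2 * real q * (\<Sum>j<q. (frob_norm (P j))\<^sup>2)"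
    unfolding frob_P using R by (simp add: frob_sq)
  finally show ?thesis .
qed

section \<open>Infinite sums and quadratic functions\<close>

lemma ennreal_summable[simp]: "(f :: 'a \<Rightarrow> ennreal) summable_on A"
  by (rule nonneg_summable_on_complete) simp

lemma einfsum_split: "infsum (f :: 'a \<Rightarrow> ennreal) UNIV = infsum f A + infsum f (- A)"
proof -
  have "infsum f (A \<union> - A) = infsum f A + infsum f (- A)"
    by (rule infsum_Un_disjoint) auto
  then show ?thesis by simp
qed

lemma einfsum_split_gen: "A \<subseteq> B \<Longrightarrow> infsum (f :: 'a \<Rightarrow> ennreal) B = infsum f A + infsum f (B - A)"
proof -
  assume "A \<subseteq> B"
  then have "B = A \<union> (B - A)" by auto
  moreover have "infsum f (A \<union> (B - A)) = infsum f A + infsum f (B - A)"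
    by (rule infsum_Un_disjoint) auto
  ultimately show ?thesis by simp
qed

lemma einfsum_mono: "A \<subseteq> B \<Longrightarrow> (\<And>x. x \<in> A \<Longrightarrow> f x \<le> g x) \<Longrightarrow> infsum (f :: 'a \<Rightarrow> ennreal) A \<le> infsum g B"
proof -
  assume AB: "A \<subseteq> B" and fg: "\<And>x. x \<in> A \<Longrightarrow> f x \<le> g x"
  have "infsum f A \<le> infsum g A" by (rule infsum_mono) (auto simp: fg)
  also have "\<dots> \<le> infsum g B" using einfsum_split_gen[OF AB, of g] by simp
  finally show ?thesis .
qed

lemma einfsum_add: "infsum (\<lambda>x. (f x :: ennreal) + g x) A = infsum f A + infsum g A"
  by (rule infsum_add) auto

lemma einfsum_sum: "finite J \<Longrightarrow> infsum (\<lambda>x. \<Sum>j\<in>J. (f j x :: ennreal)) A = (\<Sum>j\<in>J. infsum (f j) A)"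
  by (induction J rule: finite_induct) (auto simp: einfsum_add)

lemma einfsum_cmult: "infsum (\<lambda>x. c * (f x :: ennreal)) A = c * infsum f A"
  by (simp add: nonneg_infsum_complete SUP_mult_left_ennreal sum_distrib_left)

lemma einfsum_zero: "(\<And>x. x \<in> A \<Longrightarrow> f x = 0) \<Longrightarrow> infsum (f :: 'a \<Rightarrow> ennreal) A = 0"
  by (simp add: infsum_0)

lemma einfsum_point: "infsum (f :: 'a \<Rightarrow> ennreal) UNIV = f a + infsum f (- {a})"
  using einfsum_split[of f "{a}"] by simp

lemma einfsum_tail:
  assumes fin: "infsum (f :: 'a \<Rightarrow> ennreal) UNIV < \<infinity>" and e: "e > 0"
  shows "\<exists>F. finite F \<and> infsum f (- F) < ennreal e"
proof -
  let ?S = "infsum f UNIV"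
  obtain s where s: "?S = ennreal s" "s \<ge> 0" using fin
    by (metis ennreal_cases infinity_ennreal_def less_irrefl)
  show ?thesis
  proof (cases "s < e")
    case True
    then show ?thesis using s e by (intro exI[of _ "{}"]) (simp add: ennreal_lessI)
  next
    case False
    have S: "?S = (SUP F\<in>{F. finite F \<and> F \<subseteq> UNIV}. sum f F)"
      by (rule nonneg_infsum_complete) auto
    have "ennreal (s - e) < ?S" using s e False by (simp add: ennreal_lessI)
    then obtain F where F: "finite F" "ennreal (s - e) < sum f F"
      using S by (auto simp: less_SUP_iff)
    have "sum f F = infsum f F" using F by simp
    then have split: "?S = sum f F + infsum f (- F)" using einfsum_split[of f F] by simp
    have "infsum f (- F) < ennreal e"
    proof (rule ccontr)
      assume "\<not> infsum f (- F) < ennreal e"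
      then have "ennreal e \<le> infsum f (- F)" by simp
      then have "sum f F + ennreal e \<le> ?S" using split by (simp add: add_left_mono)
      moreover have "ennreal (s - e) + ennreal e < sum f F + ennreal e"
        using F(2) e by (simp add: ennreal_add_left_cancel_less)
      moreover have "ennreal (s - e) + ennreal e = ennreal s"
        using e False by (simp add: ennreal_plus[symmetric])
      ultimately show False using s by simp
    qed
    then show ?thesis using F(1) by blast
  qed
qed

lemma ereal_add_finite: "\<bar>(x::ereal) + y\<bar> \<noteq> \<infinity> \<Longrightarrow> \<bar>x\<bar> \<noteq> \<infinity> \<and> \<bar>y\<bar> \<noteq> \<infinity>"
  by (cases x; cases y) auto

lemma ereal_sum_finite: "finite A \<Longrightarrow> \<bar>\<Sum>a\<in>A. (f a :: ereal)\<bar> \<noteq> \<infinity> \<Longrightarrow> a \<in> A \<Longrightarrow> \<bar>f a\<bar> \<noteq> \<infinity>"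
proof (induction A rule: finite_induct)
  case empty then show ?case by simp
next
  case (insert b A)
  then have "\<bar>f b + (\<Sum>a\<in>A. f a)\<bar> \<noteq> \<infinity>" by simp
  then have "\<bar>f b\<bar> \<noteq> \<infinity> \<and> \<bar>\<Sum>a\<in>A. f a\<bar> \<noteq> \<infinity>" by (rule ereal_add_finite)
  then show ?case using insert by auto
qed

lemma enn2ereal_mono: "a \<le> b \<Longrightarrow> enn2ereal a \<le> enn2ereal b"
  by (simp add: less_eq_ennreal.rep_eq)

lemma enn2ereal_fin: "enn2ereal a \<noteq> \<infinity> \<Longrightarrow> a < \<infinity>"
  by (simp add: top.not_eq_extremum)

lemma ennreal_affine_sum:
  assumes "a \<ge> 0" "\<And>j. b j \<ge> 0" "\<And>j. e j \<ge> 0"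
  shows "ennreal (2 * a + (\<Sum>j<q. b j * e j)) = 2 * ennreal a + (\<Sum>j<q. ennreal (b j) * ennreal (e j))"
proof -
  have "ennreal (2 * a + (\<Sum>j<q. b j * e j)) = ennreal (2 * a) + ennreal (\<Sum>j<q. b j * e j)"
    using assms by (intro ennreal_plus) (auto intro: sum_nonneg)
  also have "ennreal (\<Sum>j<q. b j * e j) = (\<Sum>j<q. ennreal (b j) * ennreal (e j))"
    using assms by (subst sum_ennreal[symmetric]) (simp_all add: ennreal_mult)
  finally show ?thesis using assms by (simp add: ennreal_mult)
qed

lemma ereal_antimono_neg: "c \<le> 0 \<Longrightarrow> (a::ereal) \<le> b \<Longrightarrow> ereal c * b \<le> ereal c * a"
  by (cases a; cases b; cases "c = 0") (auto simp: mult_left_mono_neg)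

lemma infsum_point_change:
  fixes f g :: "'x \<Rightarrow> real"
  assumes f0: "\<And>x. f x \<ge> 0" and g0: "\<And>x. g x \<ge> 0" and eq: "\<And>x. x \<noteq> a \<Longrightarrow> g x = f x"
    and fin: "infsum (\<lambda>x. ennreal (f x)) UNIV < \<infinity>"
  shows "enn2ereal (infsum (\<lambda>x. ennreal (g x)) UNIV) = enn2ereal (infsum (\<lambda>x. ennreal (f x)) UNIV) + ereal (g a - f a)"
proof -
  let ?R = "infsum (\<lambda>x. ennreal (f x)) (- {a})"
  have sf: "infsum (\<lambda>x. ennreal (f x)) UNIV = ennreal (f a) + ?R" by (rule einfsum_point)
  have "infsum (\<lambda>x. ennreal (g x)) (- {a}) = ?R" by (rule infsum_cong) (auto simp: eq)
  then have sg: "infsum (\<lambda>x. ennreal (g x)) UNIV = ennreal (g a) + ?R" using einfsum_point[of "\<lambda>x. ennreal (g x)" a] by simp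
  have "?R < \<infinity>" using fin sf by (metis infinity_ennreal_def le_iff_add le_less_trans add.commute)
  then obtain r where r: "?R = ennreal r" "r \<ge> 0" by (metis ennreal_cases infinity_ennreal_def less_irrefl)
  show ?thesis unfolding sf sg r using f0[of a] g0[of a] r(2)
    by (simp add: ennreal_plus[symmetric] del: ennreal_plus)
qed

definition quadratic_fun :: "(real \<Rightarrow> real) \<Rightarrow> bool" where
  "quadratic_fun h \<longleftrightarrow> (\<exists>a b k. \<forall>c. h c = a * c\<^sup>2 + b * c + k)"

lemma quadratic_fun_const: "quadratic_fun (\<lambda>c. k)"
  unfolding quadratic_fun_def by (rule exI[of _ 0], rule exI[of _ 0], rule exI[of _ k]) simp

lemma quadratic_fun_add:
  assumes "quadratic_fun f" "quadratic_fun g"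
  shows "quadratic_fun (\<lambda>c. f c + g c)"
proof -
  obtain a b k a' b' k' where f: "\<And>c. f c = a * c\<^sup>2 + b * c + k"
    and g: "\<And>c. g c = a' * c\<^sup>2 + b' * c + k'"
    using assms unfolding quadratic_fun_def by metis
  show ?thesis unfolding quadratic_fun_def
    by (rule exI[of _ "a + a'"], rule exI[of _ "b + b'"], rule exI[of _ "k + k'"]) (simp add: f g algebra_simps)
qed

lemma quadratic_fun_cmult:
  assumes "quadratic_fun f"
  shows "quadratic_fun (\<lambda>c. r * f c)"
proof -
  obtain a b k where f: "\<And>c. f c = a * c\<^sup>2 + b * c + k"
    using assms unfolding quadratic_fun_def by metis
  show ?thesis unfolding quadratic_fun_def
    by (rule exI[of _ "r * a"], rule exI[of _ "r * b"], rule exI[of _ "r * k"]) (simp add: f algebra_simps)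
qed

lemma quadratic_fun_diff: "quadratic_fun f \<Longrightarrow> quadratic_fun g \<Longrightarrow> quadratic_fun (\<lambda>c. f c - g c)"
  using quadratic_fun_add[of f "\<lambda>c. -1 * g c"] quadratic_fun_cmult[of g "-1"] by simp

lemma quadratic_fun_sum:
  "(\<And>i. i \<in> I \<Longrightarrow> quadratic_fun (f i)) \<Longrightarrow> quadratic_fun (\<lambda>c. \<Sum>i\<in>I. f i c)"
  by (induction I rule: infinite_finite_induct) (auto intro: quadratic_fun_const quadratic_fun_add)

lemma quadratic_fun_frob_affine:
  assumes "R \<in> carrier_mat m m" "V \<in> carrier_mat m m"
  shows "quadratic_fun (\<lambda>c. (frob_norm (mat m m (\<lambda>ab. R $$ ab + complex_of_real c * V $$ ab)))\<^sup>2)"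
proof -
  have "quadratic_fun (\<lambda>c. (cmod (r + complex_of_real c * v))\<^sup>2)" for r v
    unfolding quadratic_fun_def
    by (rule exI[of _ "(cmod v)\<^sup>2"], rule exI[of _ "2 * Re (r * cnj v)"], rule exI[of _ "(cmod r)\<^sup>2"])
       (unfold cmod_power2, simp add: power2_eq_square algebra_simps)
  then show ?thesis
    using assms by (simp add: frob_sq quadratic_fun_sum)
qed

lemma quadratic_fun_nonneg:
  assumes h: "quadratic_fun h" and h0: "h 0 = 0" and pos: "\<And>c. h c \<ge> 0"
  shows "\<exists>\<alpha>\<ge>0. \<forall>c. h c = \<alpha> * c\<^sup>2"
proof -
  obtain \<alpha> \<beta> k where hc: "\<And>c. h c = \<alpha> * c\<^sup>2 + \<beta> * c + k"
    using h unfolding quadratic_fun_def by metis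
  have k: "k = 0" using hc[of 0] h0 by simp
  have \<beta>: "\<beta> = 0"
  proof (rule ccontr)
    assume nz: "\<beta> \<noteq> 0"
    define t where "t = 1 / (\<bar>\<alpha>\<bar> + 1)"
    have t: "t > 0" "\<alpha> * t < 1"
      using abs_ge_self[of \<alpha>] by (simp_all add: t_def field_simps)
    \<comment> \<open>for small \<open>c\<close> of the sign of \<open>-\<beta>\<close> the linear term dominates\<close>
    have "h (- \<beta> * t) = \<beta>\<^sup>2 * t * (\<alpha> * t - 1)"
      by (simp add: hc k power2_eq_square algebra_simps)
    also have "\<dots> < 0" using nz t by (simp add: mult_pos_neg)
    finally show False using pos[of "- \<beta> * t"] by simp
  qed
  have "\<alpha> \<ge> 0" using pos[of 1] hc[of 1] k \<beta> by simp
  then show ?thesis using hc k \<beta> by auto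
qed

lemma finite_subset_eventually:
  fixes H :: "nat \<Rightarrow> 'a set"
  assumes Hmono: "\<And>k. H k \<subseteq> H (Suc k)" and Hun: "(\<Union>k. H k) = UNIV" and F: "finite F"
  shows "\<exists>K. \<forall>k\<ge>K. F \<subseteq> H k"
  using F
proof (induction F rule: finite_induct)
  case empty
  then show ?case by simp
next
  case (insert a F)
  obtain K where K: "\<forall>k\<ge>K. F \<subseteq> H k" using insert by blast
  obtain Ka where Ka: "a \<in> H Ka" using Hun by blast
  have "H Ka \<subseteq> H k" if "Ka \<le> k" for k using lift_Suc_mono_le[of H, OF Hmono that] .
  then have "\<forall>k\<ge>max K Ka. insert a F \<subseteq> H k" using K Ka by auto
  then show ?case by blast
qed

section \<open>Block operators and the atomic norm\<close>

lemma atomic_norm_nonneg: "atomic_norm d \<rho> z \<ge> 0"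
  unfolding atomic_norm_def by (rule Inf_greatest) auto

lemma plus_norm_nonneg: "plus_norm d \<rho> H t \<ge> 0"
  unfolding plus_norm_def by (rule Inf_greatest) (auto intro: atomic_norm_nonneg)

lemma plus_norm_le_atomic: "block_op d UNIV z \<Longrightarrow> (\<And>\<xi>. \<xi> \<in> H \<Longrightarrow> z \<xi> = t \<xi>) \<Longrightarrow> plus_norm d \<rho> H t \<le> atomic_norm d \<rho> z"
  unfolding plus_norm_def by (rule Inf_lower) auto

lemma plus_norm_restrict:
  assumes "block_op d UNIV l" "\<And>\<xi>. \<xi> \<in> H \<Longrightarrow> l' \<xi> = l \<xi>"
  shows "plus_norm d \<rho> H l' \<le> plus_norm d \<rho> UNIV l"
  unfolding plus_norm_def by (rule Inf_superset_mono) (use assms in auto)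

lemma block_op_smult:
  assumes "block_op d H l"
  shows "block_op d H (\<lambda>\<xi>. c \<cdot>\<^sub>m l \<xi>)"
proof -
  obtain C where C: "\<forall>\<xi>\<in>H. \<forall>v\<in>carrier_vec (d \<xi>). cvec_norm (l \<xi> *\<^sub>v v) \<le> C * cvec_norm v"
    using assms by (auto simp: block_op_def)
  have "\<forall>\<xi>\<in>H. \<forall>v\<in>carrier_vec (d \<xi>). cvec_norm ((c \<cdot>\<^sub>m l \<xi>) *\<^sub>v v) \<le> (cmod c * C) * cvec_norm v"
  proof (intro ballI)
    fix \<xi> and v :: "complex vec" assume "\<xi> \<in> H" "v \<in> carrier_vec (d \<xi>)"
    moreover have "l \<xi> \<in> carrier_mat (d \<xi>) (d \<xi>)" using assms by (simp add: block_op_def)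
    ultimately show "cvec_norm ((c \<cdot>\<^sub>m l \<xi>) *\<^sub>v v) \<le> (cmod c * C) * cvec_norm v"
      using C by (auto simp: smult_mat_vec[of _ "d \<xi>" "d \<xi>"] cvec_norm_smult mult.assoc intro!: mult_left_mono)
  qed
  then show ?thesis using assms by (auto simp: block_op_def)
qed

lemma block_op_UNIV:
  assumes "block_op d H l"
  shows "block_op d UNIV l"
proof -
  obtain C where C: "\<forall>\<xi>\<in>H. \<forall>v\<in>carrier_vec (d \<xi>). cvec_norm (l \<xi> *\<^sub>v v) \<le> C * cvec_norm v"
    using assms by (auto simp: block_op_def)
  have "\<forall>\<xi>. \<forall>v\<in>carrier_vec (d \<xi>). cvec_norm (l \<xi> *\<^sub>v v) \<le> max C 0 * cvec_norm v"
  proof (intro allI ballI)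
    fix \<xi> and v :: "complex vec" assume v: "v \<in> carrier_vec (d \<xi>)"
    show "cvec_norm (l \<xi> *\<^sub>v v) \<le> max C 0 * cvec_norm v"
    proof (cases "\<xi> \<in> H")
      case True
      then have "cvec_norm (l \<xi> *\<^sub>v v) \<le> C * cvec_norm v" using C v by auto
      also have "\<dots> \<le> max C 0 * cvec_norm v" by (intro mult_right_mono) (auto simp: cvec_norm_nonneg)
      finally show ?thesis .
    next
      case False
      then have "l \<xi> = 0\<^sub>m (d \<xi>) (d \<xi>)" using assms by (simp add: block_op_def)
      then have "cvec_norm (l \<xi> *\<^sub>v v) = 0" using v by (simp add: cvec_norm_def)
      then show ?thesis by (simp add: cvec_norm_nonneg)
    qed
  qed
  then show ?thesis using assms by (auto simp: block_op_def)
qed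

lemma block_op_restrict:
  assumes "block_op d UNIV l"
  shows "block_op d H (\<lambda>\<xi>. if \<xi> \<in> H then l \<xi> else 0\<^sub>m (d \<xi>) (d \<xi>))"
  using assms by (auto simp: block_op_def)

lemma block_op_zero: "block_op d H (\<lambda>\<xi>. 0\<^sub>m (d \<xi>) (d \<xi>))"
  unfolding block_op_def by (auto intro!: exI[of _ 0] simp: cvec_norm_def)

lemma plus_norm_approx:
  assumes b: "block_op d H l" and \<eta>: "\<eta> > 0"
  shows "\<exists>z. block_op d UNIV z \<and> (\<forall>\<xi>\<in>H. z \<xi> = l \<xi>) \<and> atomic_norm d \<rho> z \<le> plus_norm d \<rho> H l + ereal \<eta>"
proof (cases "plus_norm d \<rho> H l")
  case (real r)
  then have "Inf {atomic_norm d \<rho> z | z. block_op d UNIV z \<and> (\<forall>\<xi>\<in>H. z \<xi> = l \<xi>)} < plus_norm d \<rho> H l + ereal \<eta>"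
    using \<eta> by (simp add: plus_norm_def)
  then show ?thesis by (auto simp: Inf_less_iff intro: less_imp_le)
next
  case PInf
  then show ?thesis using block_op_UNIV[OF b] by (intro exI[of _ l]) auto
next
  case MInf
  then show ?thesis using plus_norm_nonneg[of d \<rho> H l] by simp
qed

lemma atomic_norm_scale:
  assumes c: "0 \<le> c" "c \<le> 1"
  shows "atomic_norm d \<rho> (\<lambda>\<xi>. complex_of_real c \<cdot>\<^sub>m z \<xi>) \<le> atomic_norm d \<rho> z"
proof -
  have "atomic_norm d \<rho> (\<lambda>\<xi>. complex_of_real c \<cdot>\<^sub>m z \<xi>) \<le> ereal t"
    if t: "0 \<le> t" "w \<in> block_closure d (block_conv d (atoms \<rho>))" "z = (\<lambda>\<xi>. complex_of_real t \<cdot>\<^sub>m w \<xi>)" for t w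
  proof -
    have "(\<lambda>\<xi>. complex_of_real c \<cdot>\<^sub>m z \<xi>) = (\<lambda>\<xi>. complex_of_real (c * t) \<cdot>\<^sub>m w \<xi>)"
      using t by (simp add: smult_smult_mat)
    then have "atomic_norm d \<rho> (\<lambda>\<xi>. complex_of_real c \<cdot>\<^sub>m z \<xi>) \<le> ereal (c * t)"
      unfolding atomic_norm_def using t c by (intro Inf_lower) auto
    also have "\<dots> \<le> ereal t" using t c by (simp add: mult_left_le_one_le)
    finally show ?thesis .
  qed
  then show ?thesis unfolding atomic_norm_def[of d \<rho> z] by (auto intro: Inf_greatest)
qed

lemma plus_norm_scale:
  assumes c: "0 \<le> c" "c \<le> 1"
  shows "plus_norm d \<rho> H (\<lambda>\<xi>. complex_of_real c \<cdot>\<^sub>m l \<xi>) \<le> plus_norm d \<rho> H l"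
proof -
  have "plus_norm d \<rho> H (\<lambda>\<xi>. complex_of_real c \<cdot>\<^sub>m l \<xi>) \<le> atomic_norm d \<rho> z"
    if "block_op d UNIV z" "\<forall>\<xi>\<in>H. z \<xi> = l \<xi>" for z
  proof -
    have "plus_norm d \<rho> H (\<lambda>\<xi>. complex_of_real c \<cdot>\<^sub>m l \<xi>) \<le> atomic_norm d \<rho> (\<lambda>\<xi>. complex_of_real c \<cdot>\<^sub>m z \<xi>)"
      by (rule plus_norm_le_atomic) (use that in \<open>auto intro: block_op_smult\<close>)
    also have "\<dots> \<le> atomic_norm d \<rho> z" by (rule atomic_norm_scale[OF c])
    finally show ?thesis .
  qed
  then show ?thesis unfolding plus_norm_def[of d \<rho> H l] by (auto intro: Inf_greatest)
qed

section \<open>Square-integrable functions\<close>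

lemma L2_measurable: "in_L2 M f \<Longrightarrow> f \<in> borel_measurable M"
  by (simp add: in_L2_def)

lemma L2_integrable: "in_L2 M f \<Longrightarrow> integrable M (\<lambda>x. (cmod (f x))\<^sup>2)"
  by (simp add: in_L2_def)

lemma L2_norm_nonneg: "L2_norm M f \<ge> 0"
  by (simp add: L2_norm_def)

lemma L2_add: assumes "in_L2 M f" "in_L2 M g" shows "in_L2 M (\<lambda>x. f x + g x)"
  unfolding in_L2_def
proof
  show "(\<lambda>x. f x + g x) \<in> borel_measurable M" using assms by (auto simp: in_L2_def)
  show "integrable M (\<lambda>x. (cmod (f x + g x))\<^sup>2)"
  proof (rule Bochner_Integration.integrable_bound[where f="\<lambda>x. 2 * (cmod (f x))\<^sup>2 + 2 * (cmod (g x))\<^sup>2"])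
    show "integrable M (\<lambda>x. 2 * (cmod (f x))\<^sup>2 + 2 * (cmod (g x))\<^sup>2)"
      using assms by (auto simp: in_L2_def)
    show "(\<lambda>x. (cmod (f x + g x))\<^sup>2) \<in> borel_measurable M" using assms by (auto simp: in_L2_def)
    show "AE x in M. norm ((cmod (f x + g x))\<^sup>2) \<le> norm (2 * (cmod (f x))\<^sup>2 + 2 * (cmod (g x))\<^sup>2)"
      using cmod_add_sq_le by (auto intro!: AE_I2 simp del: norm_triangle_ineq)
  qed
qed

lemma L2_scale: assumes "in_L2 M f" shows "in_L2 M (\<lambda>x. c * f x)"
  using assms by (auto simp: in_L2_def norm_mult power_mult_distrib)

lemma L2_sum: "finite F \<Longrightarrow> (\<And>i. i \<in> F \<Longrightarrow> in_L2 M (f i)) \<Longrightarrow> in_L2 M (\<lambda>x. \<Sum>i\<in>F. f i x)"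
proof (induction F rule: finite_induct)
  case empty then show ?case by (simp add: in_L2_def)
next
  case (insert a F) then show ?case by (simp add: L2_add)
qed

lemma L2_zero: "in_L2 M (\<lambda>x. 0)"
  by (simp add: in_L2_def)

lemma L2_norm_scale: "L2_norm M (\<lambda>x. c * f x) = cmod c * L2_norm M f"
  by (simp add: L2_norm_def norm_mult power_mult_distrib real_sqrt_mult)

lemma L2_norm_uminus: "L2_norm M (\<lambda>x. - f x) = L2_norm M f"
  by (simp add: L2_norm_def)

lemma L2_diff: "in_L2 M f \<Longrightarrow> in_L2 M g \<Longrightarrow> in_L2 M (\<lambda>x. f x - g x)"
  using L2_add[of M f "\<lambda>x. (-1) * g x"] L2_scale[of M g "-1"] by simp

lemma L2_cross_integrable:
  assumes "in_L2 M f" "in_L2 M g"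
  shows "integrable M (\<lambda>x. cmod (f x) * cmod (g x))"
proof (rule Bochner_Integration.integrable_bound[where f="\<lambda>x. (cmod (f x))\<^sup>2 + (cmod (g x))\<^sup>2"])
  show "integrable M (\<lambda>x. (cmod (f x))\<^sup>2 + (cmod (g x))\<^sup>2)" using assms by (auto simp: in_L2_def)
  show "(\<lambda>x. cmod (f x) * cmod (g x)) \<in> borel_measurable M" using assms by (auto simp: in_L2_def)
  show "AE x in M. norm (cmod (f x) * cmod (g x)) \<le> norm ((cmod (f x))\<^sup>2 + (cmod (g x))\<^sup>2)"
  proof (rule AE_I2)
    fix x
    have "2 * (cmod (f x) * cmod (g x)) \<le> (cmod (f x))\<^sup>2 + (cmod (g x))\<^sup>2"
      using zero_le_power2[of "cmod (f x) - cmod (g x)"] by (simp add: power2_eq_square algebra_simps)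
    moreover have "0 \<le> cmod (f x) * cmod (g x)" by simp
    moreover have "norm (cmod (f x) * cmod (g x)) = cmod (f x) * cmod (g x)" by simp
    moreover have "norm ((cmod (f x))\<^sup>2 + (cmod (g x))\<^sup>2) = (cmod (f x))\<^sup>2 + (cmod (g x))\<^sup>2" by simp
    ultimately show "norm (cmod (f x) * cmod (g x)) \<le> norm ((cmod (f x))\<^sup>2 + (cmod (g x))\<^sup>2)" by linarith
  qed
qed

lemma L2_Cauchy_Schwarz:
  assumes f: "in_L2 M f" and g: "in_L2 M g"
  shows "(\<integral>x. cmod (f x) * cmod (g x) \<partial>M) \<le> L2_norm M f * L2_norm M g"
proof -
  define A where "A = (\<integral>x. (cmod (f x))\<^sup>2 \<partial>M)"
  define B where "B = (\<integral>x. (cmod (g x))\<^sup>2 \<partial>M)"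
  define C where "C = (\<integral>x. cmod (f x) * cmod (g x) \<partial>M)"
  have [measurable]: "f \<in> borel_measurable M" "g \<in> borel_measurable M"
    using f g by (simp_all add: L2_measurable)
  have nn: "ennreal (\<integral>x. h x \<partial>M) = (\<integral>\<^sup>+x. ennreal (h x) \<partial>M)"
    if "integrable M h" "\<And>x. h x \<ge> 0" for h :: "'a \<Rightarrow> real"
    using nn_integral_eq_integral[OF that(1)] that(2) by simp
  have "(ennreal C)\<^sup>2 = (\<integral>\<^sup>+x. ennreal (cmod (f x)) * ennreal (cmod (g x)) \<partial>M)\<^sup>2"
    unfolding C_def by (simp add: nn[OF L2_cross_integrable[OF f g]] ennreal_mult)
  also have "\<dots> \<le> (\<integral>\<^sup>+x. ennreal (cmod (f x)) ^ 2 \<partial>M) * (\<integral>\<^sup>+x. ennreal (cmod (g x)) ^ 2 \<partial>M)"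
    by (rule Cauchy_Schwarz_nn_integral) measurable
  also have "\<dots> = ennreal (A * B)"
    unfolding A_def B_def by (simp add: nn[OF L2_integrable[OF f]] nn[OF L2_integrable[OF g]] ennreal_power ennreal_mult)
  finally have "ennreal (C\<^sup>2) \<le> ennreal (A * B)"
    by (simp add: C_def ennreal_power)
  then have "C\<^sup>2 \<le> A * B"
    by (simp add: A_def B_def)
  then have "sqrt (C\<^sup>2) \<le> sqrt A * sqrt B" by (metis real_sqrt_le_mono real_sqrt_mult)
  then show ?thesis by (simp add: C_def A_def B_def L2_norm_def)
qed

lemma L2_triangle:
  assumes f: "in_L2 M f" and g: "in_L2 M g"
  shows "L2_norm M (\<lambda>x. f x + g x) \<le> L2_norm M f + L2_norm M g"
proof -
  have "(\<integral>x. (cmod (f x + g x))\<^sup>2 \<partial>M) \<le> (\<integral>x. (cmod (f x))\<^sup>2 + 2 * (cmod (f x) * cmod (g x)) + (cmod (g x))\<^sup>2 \<partial>M)"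
  proof (rule Bochner_Integration.integral_mono)
    show "integrable M (\<lambda>x. (cmod (f x + g x))\<^sup>2)" using L2_add[OF f g] by (simp add: in_L2_def)
    show "integrable M (\<lambda>x. (cmod (f x))\<^sup>2 + 2 * (cmod (f x) * cmod (g x)) + (cmod (g x))\<^sup>2)"
      using L2_integrable[OF f] L2_integrable[OF g] L2_cross_integrable[OF f g] by auto
    fix x
    have "(cmod (f x + g x))\<^sup>2 \<le> (cmod (f x) + cmod (g x))\<^sup>2"
      by (intro power_mono norm_triangle_ineq) auto
    then show "(cmod (f x + g x))\<^sup>2 \<le> (cmod (f x))\<^sup>2 + 2 * (cmod (f x) * cmod (g x)) + (cmod (g x))\<^sup>2"
      by (simp add: power2_eq_square algebra_simps)
  qed
  also have "\<dots> = (\<integral>x. (cmod (f x))\<^sup>2 \<partial>M) + 2 * (\<integral>x. cmod (f x) * cmod (g x) \<partial>M) + (\<integral>x. (cmod (g x))\<^sup>2 \<partial>M)"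
    using L2_integrable[OF f] L2_integrable[OF g] L2_cross_integrable[OF f g] by simp
  also have "\<dots> \<le> (L2_norm M f)\<^sup>2 + 2 * (L2_norm M f * L2_norm M g) + (L2_norm M g)\<^sup>2"
    using L2_Cauchy_Schwarz[OF f g] by (simp add: L2_norm_def)
  also have "\<dots> = (L2_norm M f + L2_norm M g)\<^sup>2" by (simp add: power2_eq_square algebra_simps)
  finally have "(L2_norm M (\<lambda>x. f x + g x))\<^sup>2 \<le> (L2_norm M f + L2_norm M g)\<^sup>2"
    by (simp add: L2_norm_def)
  then show ?thesis using L2_norm_nonneg
    by (meson add_nonneg_nonneg power2_le_imp_le)
qed

lemma L2_norm_diff_sym: "L2_norm M (\<lambda>x. f x - g x) = L2_norm M (\<lambda>x. g x - f x)"
  using L2_norm_uminus[of M "\<lambda>x. f x - g x"] by simp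

lemma L2_triangle_diff:
  assumes "in_L2 M f" "in_L2 M g" "in_L2 M h"
  shows "L2_norm M (\<lambda>x. f x - h x) \<le> L2_norm M (\<lambda>x. f x - g x) + L2_norm M (\<lambda>x. g x - h x)"
  using L2_triangle[OF L2_diff[OF assms(1,2)] L2_diff[OF assms(2,3)]] by simp

lemma L2_diff_ge:
  assumes "in_L2 M f" "in_L2 M g"
  shows "L2_norm M g - L2_norm M f \<le> L2_norm M (\<lambda>x. f x - g x)"
proof -
  have "L2_norm M (\<lambda>x. g x - 0) \<le> L2_norm M (\<lambda>x. g x - f x) + L2_norm M (\<lambda>x. f x - 0)"
    by (rule L2_triangle_diff) (use assms L2_zero in auto)
  then show ?thesis using L2_norm_diff_sym[of M f g] by simp
qed

section \<open>Harmonic analysis on a compact group\<close>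

locale compact_group_dual =
  fixes gmul :: "'g::t2_space \<Rightarrow> 'g \<Rightarrow> 'g" and ginv :: "'g \<Rightarrow> 'g" and e :: 'g
    and M :: "'g measure"
    and d :: "'x \<Rightarrow> nat" and \<rho> :: "'x \<Rightarrow> 'g \<Rightarrow> complex mat"
  assumes grp: "compact_hausdorff_group gmul ginv e"
    and haar: "normalized_haar gmul M"
    and dual: "complete_dual gmul d \<rho>"
begin

lemma gmul_assoc: "gmul (gmul x y) z = gmul x (gmul y z)"
  using grp by (simp add: compact_hausdorff_group_def)

lemma gmul_e_left[simp]: "gmul e x = x"
  using grp by (simp add: compact_hausdorff_group_def)

lemma ginv_left[simp]: "gmul (ginv x) x = e"
  using grp by (simp add: compact_hausdorff_group_def)

lemma ginv_gmul_cancel[simp]: "gmul (ginv g) (gmul g x) = x"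
  by (metis gmul_assoc ginv_left gmul_e_left)

lemma sets_haar: "sets M = sets borel"
  using haar by (simp add: normalized_haar_def)

lemma space_haar[simp]: "space M = UNIV"
  using sets_eq_imp_space_eq[OF sets_haar] by simp

lemma emeasure_haar_UNIV: "emeasure M UNIV = 1"
  using haar by (simp add: normalized_haar_def)

lemma finite_haar: "finite_measure M"
  by (rule finite_measureI) (simp add: emeasure_haar_UNIV)

lemma measure_haar_UNIV: "measure M UNIV = 1"
  by (simp add: emeasure_haar_UNIV measure_def)

lemma continuous_measurable: "continuous_on UNIV f \<Longrightarrow> f \<in> borel_measurable M"
  using borel_measurable_continuous_onI measurable_cong_sets[OF sets_haar refl] by blast

lemma gmul_continuous: "continuous_on UNIV (gmul g)"
proof -
  have c: "continuous_on UNIV (\<lambda>p. gmul (fst p) (snd p))"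
    using grp by (simp add: compact_hausdorff_group_def)
  have "continuous_on UNIV ((\<lambda>p. gmul (fst p) (snd p)) \<circ> (\<lambda>x. (g, x)))"
    by (rule continuous_on_compose) (auto intro!: continuous_intros continuous_on_subset[OF c])
  then show ?thesis by (simp add: o_def)
qed

lemma gmul_measurable: "gmul g \<in> measurable M M"
proof -
  have "gmul g \<in> measurable borel borel"
    using borel_measurable_continuous_onI[OF gmul_continuous] .
  then show ?thesis using measurable_cong_sets[OF sets_haar sets_haar] by simp
qed

lemma integral_gmul_invariant:
  fixes f :: "'g \<Rightarrow> 'b::{banach, second_countable_topology}"
  assumes f: "f \<in> borel_measurable M"
  shows "(\<integral>x. f (gmul g x) \<partial>M) = (\<integral>x. f x \<partial>M)"
proof -
  have "distr M M (gmul g) = M" using haar by (simp add: normalized_haar_def)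
  then show ?thesis using integral_distr[OF gmul_measurable f, of g] by simp
qed

lemma integrable_bounded:
  fixes f :: "'g \<Rightarrow> 'b::{banach, second_countable_topology}"
  assumes "f \<in> borel_measurable M" "\<And>x. norm (f x) \<le> B"
  shows "integrable M f"
  using finite_measure.integrable_const_bound[OF finite_haar, of f B] assms by auto

context
  fixes n :: nat and \<sigma> :: "'g \<Rightarrow> complex mat"
  assumes ur: "unitary_rep gmul n \<sigma>"
begin

lemma unitary_rep_carrier[simp]: "\<sigma> g \<in> carrier_mat n n"
  using ur by (simp add: unitary_rep_def)

lemma unitary_rep_dims[simp]: "dim_row (\<sigma> g) = n" "dim_col (\<sigma> g) = n"
  using carrier_matD[OF unitary_rep_carrier[of g]] by auto

lemma unitary_rep_mult: "\<sigma> (gmul g h) = \<sigma> g * \<sigma> h"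
  using ur by (simp add: unitary_rep_def)

lemma unitary_rep_mult_cadj: "\<sigma> g * cadj (\<sigma> g) = 1\<^sub>m n"
  using ur by (simp add: unitary_rep_def)

lemma unitary_rep_cadj_mult: "cadj (\<sigma> g) * \<sigma> g = 1\<^sub>m n"
  using ur by (simp add: unitary_rep_def)

lemma unitary_rep_continuous: "a < n \<Longrightarrow> b < n \<Longrightarrow> continuous_on UNIV (\<lambda>g. \<sigma> g $$ (a,b))"
  using ur by (simp add: unitary_rep_def)

lemma unitary_rep_unit: "\<sigma> e = 1\<^sub>m n"
proof -
  let ?U = "\<sigma> e"
  have eq: "?U * ?U = ?U" using unitary_rep_mult[of e e] by simp
  have "?U = ?U * 1\<^sub>m n" by simp
  also have "\<dots> = ?U * (?U * cadj ?U)" by (simp only: unitary_rep_mult_cadj)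
  also have "\<dots> = (?U * ?U) * cadj ?U" by (rule assoc_mult_mat[symmetric]) auto
  also have "\<dots> = ?U * cadj ?U" by (simp only: eq)
  also have "\<dots> = 1\<^sub>m n" by (rule unitary_rep_mult_cadj)
  finally show ?thesis .
qed

lemma unitary_rep_inv: "\<sigma> (ginv g) = cadj (\<sigma> g)"
proof -
  have "\<sigma> (ginv g) * \<sigma> g = 1\<^sub>m n" using unitary_rep_mult[of "ginv g" g] unitary_rep_unit by simp
  then have "\<sigma> (ginv g) * \<sigma> g * cadj (\<sigma> g) = cadj (\<sigma> g)" by simp
  moreover have "\<sigma> (ginv g) * \<sigma> g * cadj (\<sigma> g) = \<sigma> (ginv g) * (\<sigma> g * cadj (\<sigma> g))"
    by (rule assoc_mult_mat) auto
  ultimately show ?thesis using unitary_rep_mult_cadj by simp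
qed

lemma unitary_rep_row_norm: "a < n \<Longrightarrow> (\<Sum>k<n. (cmod (\<sigma> g $$ (a,k)))\<^sup>2) = 1"
proof -
  assume a: "a < n"
  have "(\<sigma> g * cadj (\<sigma> g)) $$ (a,a) = 1" using unitary_rep_mult_cadj a by simp
  moreover have "(\<sigma> g * cadj (\<sigma> g)) $$ (a,a) = (\<Sum>k<n. \<sigma> g $$ (a,k) * cnj (\<sigma> g $$ (a,k)))"
    using a by (simp add: scalar_prod_def row_def col_def lessThan_atLeast0)
  ultimately have "(\<Sum>k<n. \<sigma> g $$ (a,k) * cnj (\<sigma> g $$ (a,k))) = 1" by simp
  moreover have "(\<Sum>k<n. \<sigma> g $$ (a,k) * cnj (\<sigma> g $$ (a,k))) = complex_of_real (\<Sum>k<n. (cmod (\<sigma> g $$ (a,k)))\<^sup>2)"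
    unfolding of_real_sum by (rule sum.cong[OF refl]) (rule complex_norm_square[symmetric])
  ultimately show ?thesis by (metis of_real_eq_1_iff)
qed

lemma unitary_rep_entry_bound: "a < n \<Longrightarrow> b < n \<Longrightarrow> cmod (\<sigma> g $$ (a,b)) \<le> 1"
proof -
  assume a: "a < n" and b: "b < n"
  have "(cmod (\<sigma> g $$ (a,b)))\<^sup>2 \<le> (\<Sum>k<n. (cmod (\<sigma> g $$ (a,k)))\<^sup>2)"
    by (rule member_le_sum[where f="\<lambda>k. (cmod (\<sigma> g $$ (a,k)))\<^sup>2"]) (use b in auto)
  then have "(cmod (\<sigma> g $$ (a,b)))\<^sup>2 \<le> 1" using unitary_rep_row_norm[OF a] by simp
  then show ?thesis by (simp add: power_le_one_iff abs_le_square_iff)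
qed

end

lemma intertwiner_cadj:
  assumes u1: "unitary_rep gmul m \<sigma>" and u2: "unitary_rep gmul n \<sigma>'"
    and T: "T \<in> carrier_mat m n" and intw: "\<And>g. \<sigma> g * T = T * \<sigma>' g"
  shows "cadj T * \<sigma> g = \<sigma>' g * cadj T"
proof -
  have "cadj (\<sigma> (ginv g) * T) = cadj (T * \<sigma>' (ginv g))" by (simp add: intw)
  then have "cadj T * cadj (\<sigma> (ginv g)) = cadj (\<sigma>' (ginv g)) * cadj T"
    using T unitary_rep_carrier[OF u1] unitary_rep_carrier[OF u2]
    by (simp add: cadj_mult[of _ m m _ n] cadj_mult[of _ m n _ n])
  then show ?thesis by (simp add: unitary_rep_inv[OF u1] unitary_rep_inv[OF u2])
qed

lemma intertwiner_gram_commute: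
  assumes u1: "unitary_rep gmul m \<sigma>" and u2: "unitary_rep gmul n \<sigma>'"
    and T: "T \<in> carrier_mat m n" and intw: "\<And>g. \<sigma> g * T = T * \<sigma>' g"
  shows "(T * cadj T) * \<sigma> g = \<sigma> g * (T * cadj T)"
proof -
  note c1 = unitary_rep_carrier[OF u1] and c2 = unitary_rep_carrier[OF u2]
  have Tc: "cadj T \<in> carrier_mat n m" using T by simp
  have "(T * cadj T) * \<sigma> g = T * (cadj T * \<sigma> g)" by (rule assoc_mult_mat[OF T Tc c1])
  also have "\<dots> = T * (\<sigma>' g * cadj T)" by (simp add: intertwiner_cadj[OF u1 u2 T intw])
  also have "\<dots> = (T * \<sigma>' g) * cadj T" by (rule assoc_mult_mat[symmetric, OF T c2 Tc])
  also have "\<dots> = (\<sigma> g * T) * cadj T" by (simp add: intw)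
  also have "\<dots> = \<sigma> g * (T * cadj T)" by (rule assoc_mult_mat[OF c1 T Tc])
  finally show ?thesis .
qed

lemma schur_lemma_zero:
  assumes u1: "unitary_rep gmul m \<sigma>" and i1: "irreducible_rep m \<sigma>"
    and u2: "unitary_rep gmul n \<sigma>'" and i2: "irreducible_rep n \<sigma>'"
    and niso: "\<not> rep_iso m \<sigma> n \<sigma>'"
    and T: "T \<in> carrier_mat m n" and intw: "\<And>g. \<sigma> g * T = T * \<sigma>' g"
  shows "T = 0\<^sub>m m n"
proof (rule ccontr)
  assume nz: "T \<noteq> 0\<^sub>m m n"
  have Tc: "cadj T \<in> carrier_mat n m" using T by simp
  have intw': "\<sigma>' g * cadj T = cadj T * \<sigma> g" for g
    using intertwiner_cadj[OF u1 u2 T intw] by simp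
  obtain a1 where a1: "T * cadj T = a1 \<cdot>\<^sub>m 1\<^sub>m m"
    using schur_lemma_scalar[OF i1 unitary_rep_carrier[OF u1] mult_carrier_mat[OF T Tc]
        intertwiner_gram_commute[OF u1 u2 T intw]] by blast
  obtain a2 where a2: "cadj T * T = a2 \<cdot>\<^sub>m 1\<^sub>m n"
    using schur_lemma_scalar[OF i2 unitary_rep_carrier[OF u2] mult_carrier_mat[OF Tc T]
        intertwiner_gram_commute[OF u2 u1 Tc intw', unfolded cadj_cadj]] by blast
  have mn: "m = n" and inv: "invertible_mat (cadj T)"
    using scalar_gram_imp_invertible[OF T nz a1 a2] by auto
  have "rep_iso m \<sigma> n \<sigma>'"
    unfolding rep_iso_def
    by (intro conjI bexI[of _ "cadj T"]) (use mn inv Tc intertwiner_cadj[OF u1 u2 T intw] in auto)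
  with niso show False by simp
qed

lemma rho_unitary: "unitary_rep gmul (d \<xi>) (\<rho> \<xi>)"
  using dual by (simp add: complete_dual_def)

lemma rho_irreducible: "irreducible_rep (d \<xi>) (\<rho> \<xi>)"
  using dual by (simp add: complete_dual_def)

lemma dim_pos: "d \<xi> \<ge> 1"
  using rho_irreducible by (simp add: irreducible_rep_def)

lemma rho_bound: "a < d \<xi> \<Longrightarrow> b < d \<xi> \<Longrightarrow> cmod (\<rho> \<xi> x $$ (a,b)) \<le> 1"
  by (rule unitary_rep_entry_bound[OF rho_unitary])

lemma rho_continuous: "a < d \<xi> \<Longrightarrow> b < d \<xi> \<Longrightarrow> continuous_on UNIV (\<lambda>x. \<rho> \<xi> x $$ (a,b))"
  by (rule unitary_rep_continuous[OF rho_unitary])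

lemma rho_continuous_transl: "a < d \<xi> \<Longrightarrow> b < d \<xi> \<Longrightarrow> continuous_on UNIV (\<lambda>x. \<rho> \<xi> (gmul g x) $$ (a,b))"
  using continuous_on_compose[OF gmul_continuous[of g] continuous_on_subset[OF rho_continuous]] by (auto simp: o_def)

lemma rho_dims[simp]: "dim_row (\<rho> \<xi> g) = d \<xi>" "dim_col (\<rho> \<xi> g) = d \<xi>"
  by (rule unitary_rep_dims[OF rho_unitary])+

lemma rho_coeff_prod_integrable:
  assumes "a < d \<xi>" "b < d \<xi>" "c < d \<eta>" "f < d \<eta>"
  shows "integrable M (\<lambda>x. \<rho> \<xi> x $$ (a,b) * cnj (\<rho> \<eta> x $$ (c,f)))"
proof (rule integrable_bounded[where B=1])
  show "(\<lambda>x. \<rho> \<xi> x $$ (a,b) * cnj (\<rho> \<eta> x $$ (c,f))) \<in> borel_measurable M"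
    using assms by (intro continuous_measurable continuous_intros rho_continuous)
  fix x
  have "cmod (\<rho> \<xi> x $$ (a,b)) * cmod (cnj (\<rho> \<eta> x $$ (c,f))) \<le> 1 * 1"
    using rho_bound assms by (intro mult_mono) auto
  then show "norm (\<rho> \<xi> x $$ (a,b) * cnj (\<rho> \<eta> x $$ (c,f))) \<le> 1"
    by (simp add: norm_mult)
qed

definition coeff_mat where
  "coeff_mat \<xi> \<eta> b f = mat (d \<xi>) (d \<eta>) (\<lambda>(a,c). \<integral>x. \<rho> \<xi> x $$ (a,b) * cnj (\<rho> \<eta> x $$ (c,f)) \<partial>M)"

lemma coeff_mat_carrier: "coeff_mat \<xi> \<eta> b f \<in> carrier_mat (d \<xi>) (d \<eta>)"
  by (simp add: coeff_mat_def)

lemma coeff_mat_intertwines: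
  assumes b: "b < d \<xi>" and f: "f < d \<eta>"
  shows "\<rho> \<xi> g * coeff_mat \<xi> \<eta> b f = coeff_mat \<xi> \<eta> b f * \<rho> \<eta> g"
proof (rule eq_matI)
  note u1 = rho_unitary[of \<xi>] and u2 = rho_unitary[of \<eta>]
  fix a c assume "a < dim_row (coeff_mat \<xi> \<eta> b f * \<rho> \<eta> g)" "c < dim_col (coeff_mat \<xi> \<eta> b f * \<rho> \<eta> g)"
  then have a: "a < d \<xi>" and c: "c < d \<eta>" by (auto simp: coeff_mat_def)
  have "(\<rho> \<xi> g * coeff_mat \<xi> \<eta> b f) $$ (a,c)
      = (\<Sum>k<d \<xi>. \<rho> \<xi> g $$ (a,k) * (\<integral>x. \<rho> \<xi> x $$ (k,b) * cnj (\<rho> \<eta> x $$ (c,f)) \<partial>M))"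
    using a c by (subst mult_mat_index[OF unitary_rep_carrier[OF u1] coeff_mat_carrier]) (auto simp: coeff_mat_def)
  also have "\<dots> = (\<Sum>k<d \<xi>. (\<integral>x. \<rho> \<xi> g $$ (a,k) * (\<rho> \<xi> x $$ (k,b) * cnj (\<rho> \<eta> x $$ (c,f))) \<partial>M))"
    by simp
  also have "\<dots> = (\<integral>x. (\<Sum>k<d \<xi>. \<rho> \<xi> g $$ (a,k) * (\<rho> \<xi> x $$ (k,b) * cnj (\<rho> \<eta> x $$ (c,f)))) \<partial>M)"
    by (rule Bochner_Integration.integral_sum[symmetric]) (auto intro!: integrable_mult_right rho_coeff_prod_integrable b c f)
  also have "\<dots> = (\<integral>x. \<rho> \<xi> (gmul g x) $$ (a,b) * cnj (\<rho> \<eta> x $$ (c,f)) \<partial>M)"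
  proof (rule Bochner_Integration.integral_cong[OF refl])
    fix x
    have "\<rho> \<xi> (gmul g x) $$ (a,b) = (\<Sum>k<d \<xi>. \<rho> \<xi> g $$ (a,k) * \<rho> \<xi> x $$ (k,b))"
      using a b by (simp add: unitary_rep_mult[OF u1] scalar_prod_def lessThan_atLeast0)
    then show "(\<Sum>k<d \<xi>. \<rho> \<xi> g $$ (a,k) * (\<rho> \<xi> x $$ (k,b) * cnj (\<rho> \<eta> x $$ (c,f))))
        = \<rho> \<xi> (gmul g x) $$ (a,b) * cnj (\<rho> \<eta> x $$ (c,f))"
      by (simp add: sum_distrib_right mult.assoc)
  qed
  also have "\<dots> = (\<integral>x. \<rho> \<xi> x $$ (a,b) * cnj (\<rho> \<eta> (gmul (ginv g) x) $$ (c,f)) \<partial>M)"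
  proof -
    let ?F = "\<lambda>y. \<rho> \<xi> y $$ (a,b) * cnj (\<rho> \<eta> (gmul (ginv g) y) $$ (c,f))"
    have "?F \<in> borel_measurable M"
      using a b c f by (intro continuous_measurable continuous_intros rho_continuous rho_continuous_transl)
    from integral_gmul_invariant[OF this, of g] show ?thesis by simp
  qed
  also have "\<dots> = (\<integral>x. (\<Sum>k<d \<eta>. (\<rho> \<xi> x $$ (a,b) * cnj (\<rho> \<eta> x $$ (k,f))) * \<rho> \<eta> g $$ (k,c)) \<partial>M)"
  proof (rule Bochner_Integration.integral_cong[OF refl])
    fix x
    have "\<rho> \<eta> (gmul (ginv g) x) $$ (c,f) = (\<Sum>k<d \<eta>. cnj (\<rho> \<eta> g $$ (k,c)) * \<rho> \<eta> x $$ (k,f))"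
      using c f by (simp add: unitary_rep_mult[OF u2] unitary_rep_inv[OF u2] scalar_prod_def lessThan_atLeast0)
    then show "\<rho> \<xi> x $$ (a,b) * cnj (\<rho> \<eta> (gmul (ginv g) x) $$ (c,f))
        = (\<Sum>k<d \<eta>. (\<rho> \<xi> x $$ (a,b) * cnj (\<rho> \<eta> x $$ (k,f))) * \<rho> \<eta> g $$ (k,c))"
      by (simp add: sum_distrib_left mult.assoc mult.commute mult.left_commute)
  qed
  also have "\<dots> = (\<Sum>k<d \<eta>. (\<integral>x. (\<rho> \<xi> x $$ (a,b) * cnj (\<rho> \<eta> x $$ (k,f))) * \<rho> \<eta> g $$ (k,c) \<partial>M))"
    by (rule Bochner_Integration.integral_sum) (auto intro!: integrable_mult_left rho_coeff_prod_integrable a b f)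
  also have "\<dots> = (\<Sum>k<d \<eta>. (\<integral>x. \<rho> \<xi> x $$ (a,b) * cnj (\<rho> \<eta> x $$ (k,f)) \<partial>M) * \<rho> \<eta> g $$ (k,c))"
    by simp
  also have "\<dots> = (coeff_mat \<xi> \<eta> b f * \<rho> \<eta> g) $$ (a,c)"
    using a c by (subst mult_mat_index[OF coeff_mat_carrier unitary_rep_carrier[OF u2]]) (auto simp: coeff_mat_def)
  finally show "(\<rho> \<xi> g * coeff_mat \<xi> \<eta> b f) $$ (a,c) = (coeff_mat \<xi> \<eta> b f * \<rho> \<eta> g) $$ (a,c)" .
qed (auto simp: coeff_mat_def)

lemma schur_orthogonality:
  assumes a: "a < d \<xi>" and b: "b < d \<xi>" and c: "c < d \<eta>" and f: "f < d \<eta>"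
  shows "(\<integral>x. \<rho> \<xi> x $$ (a,b) * cnj (\<rho> \<eta> x $$ (c,f)) \<partial>M)
       = (if \<xi> = \<eta> \<and> a = c \<and> b = f then 1 / of_nat (d \<xi>) else 0)"
proof (cases "\<xi> = \<eta>")
  case False
  have niso: "\<not> rep_iso (d \<xi>) (\<rho> \<xi>) (d \<eta>) (\<rho> \<eta>)"
    using dual False by (simp add: complete_dual_def)
  have "coeff_mat \<xi> \<eta> b f = 0\<^sub>m (d \<xi>) (d \<eta>)"
    by (rule schur_lemma_zero[OF rho_unitary rho_irreducible rho_unitary rho_irreducible niso coeff_mat_carrier coeff_mat_intertwines[OF b f]])
  then have "coeff_mat \<xi> \<eta> b f $$ (a,c) = 0" using a c by simp
  then show ?thesis using False a c by (simp add: coeff_mat_def)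
next
  case True
  then have c': "c < d \<xi>" and f': "f < d \<xi>" using c f by auto
  obtain s where s: "coeff_mat \<xi> \<xi> b f = s \<cdot>\<^sub>m 1\<^sub>m (d \<xi>)"
    using schur_lemma_scalar[OF rho_irreducible unitary_rep_carrier[OF rho_unitary] coeff_mat_carrier] coeff_mat_intertwines[OF b f'] by metis
  have "(\<Sum>i<d \<xi>. coeff_mat \<xi> \<xi> b f $$ (i,i)) = of_nat (d \<xi>) * s" using s by simp
  moreover have "(\<Sum>i<d \<xi>. coeff_mat \<xi> \<xi> b f $$ (i,i)) = (\<integral>x. (\<Sum>i<d \<xi>. \<rho> \<xi> x $$ (i,b) * cnj (\<rho> \<xi> x $$ (i,f))) \<partial>M)"
    by (subst Bochner_Integration.integral_sum) (auto simp: coeff_mat_def intro!: rho_coeff_prod_integrable b f')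
  moreover have "(\<Sum>i<d \<xi>. \<rho> \<xi> x $$ (i,b) * cnj (\<rho> \<xi> x $$ (i,f))) = (if b = f then 1 else 0)" for x
  proof -
    have "(cadj (\<rho> \<xi> x) * \<rho> \<xi> x) $$ (f,b) = (if f = b then 1 else 0)"
      using unitary_rep_cadj_mult[OF rho_unitary] b f' by simp
    moreover have "(cadj (\<rho> \<xi> x) * \<rho> \<xi> x) $$ (f,b) = (\<Sum>i<d \<xi>. \<rho> \<xi> x $$ (i,b) * cnj (\<rho> \<xi> x $$ (i,f)))"
      using b f' by (simp add: scalar_prod_def lessThan_atLeast0 mult.commute)
    ultimately show ?thesis by auto
  qed
  ultimately have "of_nat (d \<xi>) * s = (if b = f then 1 else 0)"
    by (simp add: measure_haar_UNIV)
  then have sv: "s = (if b = f then 1 / of_nat (d \<xi>) else 0)"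
    using dim_pos[of \<xi>] by (auto simp: field_simps)
  have "coeff_mat \<xi> \<xi> b f $$ (a,c) = (if a = c then s else 0)" using s a c' by simp
  then show ?thesis using True a c' sv by (auto simp: coeff_mat_def)
qed

abbreviation "\<F> \<equiv> fourier M d \<rho>"

lemma fourier_carrier[simp]: "\<F> f \<xi> \<in> carrier_mat (d \<xi>) (d \<xi>)"
  by (simp add: fourier_def)

lemma fourier_dim[simp]: "dim_row (\<F> f \<xi>) = d \<xi>" "dim_col (\<F> f \<xi>) = d \<xi>"
  by (simp_all add: fourier_def)

lemma fourier_index: "a < d \<xi> \<Longrightarrow> b < d \<xi> \<Longrightarrow>
    \<F> f \<xi> $$ (a,b) = (\<integral>x. f x * cnj (\<rho> \<xi> x $$ (b,a)) \<partial>M)"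
  by (simp add: fourier_def)

lemma L2_integrable_bounded:
  assumes f: "in_L2 M f" and g: "g \<in> borel_measurable M" and gb: "\<And>x. cmod (g x) \<le> 1"
  shows "integrable M (\<lambda>x. f x * g x)"
proof (rule Bochner_Integration.integrable_bound[where f="\<lambda>x. 1 + (cmod (f x))\<^sup>2"])
  show "integrable M (\<lambda>x. 1 + (cmod (f x))\<^sup>2)"
    using f finite_measure.integrable_const[OF finite_haar] by (intro Bochner_Integration.integrable_add) (auto simp: in_L2_def)
  show "(\<lambda>x. f x * g x) \<in> borel_measurable M" using f g by (auto simp: in_L2_def)
  show "AE x in M. norm (f x * g x) \<le> norm (1 + (cmod (f x))\<^sup>2)"
  proof (rule AE_I2)
    fix x
    have "cmod (f x) * cmod (g x) \<le> cmod (f x) * 1" using gb[of x] by (intro mult_left_mono) auto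
    also have "\<dots> \<le> 1 + (cmod (f x))\<^sup>2"
    proof -
      have h: "0 \<le> (cmod (f x) - 1/2)\<^sup>2" by simp
      have "(cmod (f x) - 1/2)\<^sup>2 = (cmod (f x))\<^sup>2 - cmod (f x) + 1/4"
        by (simp add: power2_eq_square algebra_simps)
      then show ?thesis using h by simp
    qed
    finally show "norm (f x * g x) \<le> norm (1 + (cmod (f x))\<^sup>2)" by (simp add: norm_mult)
  qed
qed

lemma L2_rho_coeff_integrable: "in_L2 M f \<Longrightarrow> a < d \<xi> \<Longrightarrow> b < d \<xi> \<Longrightarrow> integrable M (\<lambda>x. f x * cnj (\<rho> \<xi> x $$ (b,a)))"
  by (rule L2_integrable_bounded)
     (auto intro!: continuous_measurable continuous_intros rho_continuous simp: rho_bound)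

lemma fourier_add:
  assumes "in_L2 M f" "in_L2 M g"
  shows "\<F> (\<lambda>x. f x + g x) \<xi> = \<F> f \<xi> + \<F> g \<xi>"
  by (rule eq_matI) (auto simp: fourier_index distrib_right L2_rho_coeff_integrable assms)

lemma fourier_scale: "\<F> (\<lambda>x. c * f x) \<xi> = c \<cdot>\<^sub>m \<F> f \<xi>"
  by (rule eq_matI) (auto simp: fourier_index mult.assoc)

lemma fourier_zero_if_L2_norm_zero:
  assumes f: "in_L2 M f" and z: "L2_norm M f = 0"
  shows "\<F> f \<xi> = 0\<^sub>m (d \<xi>) (d \<xi>)"
proof -
  have "(\<integral>x. (cmod (f x))\<^sup>2 \<partial>M) = 0" using z by (simp add: L2_norm_def)
  then have "AE x in M. (cmod (f x))\<^sup>2 = 0"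
    using integral_nonneg_eq_0_iff_AE[OF L2_integrable[OF f]] by simp
  then have ae: "AE x in M. f x = 0" by simp
  show ?thesis
  proof (rule eq_matI)
    fix a b assume "a < dim_row (0\<^sub>m (d \<xi>) (d \<xi>))" "b < dim_col (0\<^sub>m (d \<xi>) (d \<xi>))"
    then have ab: "a < d \<xi>" "b < d \<xi>" by auto
    have "(\<integral>x. f x * cnj (\<rho> \<xi> x $$ (b,a)) \<partial>M) = 0"
      by (rule integral_eq_zero_AE) (use ae in auto)
    then show "\<F> f \<xi> $$ (a,b) = 0\<^sub>m (d \<xi>) (d \<xi>) $$ (a,b)" using ab by (simp add: fourier_index)
  qed auto
qed

lemma fourier_zero: "\<F> (\<lambda>x. 0) \<xi> = 0\<^sub>m (d \<xi>) (d \<xi>)"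
  by (rule fourier_zero_if_L2_norm_zero[OF L2_zero]) (simp add: L2_norm_def)

lemma double_sum_delta:
  fixes A :: "nat \<Rightarrow> nat \<Rightarrow> 'a::comm_ring_1"
  assumes "a' < n" "b' < n"
  shows "(\<Sum>a<n. \<Sum>b<n. A a b * (if b = b' \<and> a = a' then c else 0)) = A a' b' * c"
proof -
  have "(\<Sum>b<n. A a b * (if b = b' \<and> a = a' then c else 0)) = (if a = a' then A a b' * c else 0)" for a
  proof -
    have "(\<Sum>b<n. A a b * (if b = b' \<and> a = a' then c else 0)) = (\<Sum>b<n. (if b = b' then (if a = a' then A a b * c else 0) else 0))"
      by (rule sum.cong) auto
    also have "\<dots> = (if a = a' then A a b' * c else 0)" using assms by (simp add: sum.delta)
    finally show ?thesis .
  qed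
  then show ?thesis using assms by (simp add: sum.delta)
qed

text \<open>The Fourier inversion formula \<open>f(x) = \<Sigma>\<^sub>\<xi> d\<^sub>\<xi> tr (\<hat>f\<^sub>\<xi> \<rho>\<^sub>\<xi>(x))\<close>, restricted to one frequency.\<close>

definition synth :: "'x \<Rightarrow> complex mat \<Rightarrow> 'g \<Rightarrow> complex" where
  "synth \<xi> A x = of_nat (d \<xi>) * (\<Sum>a<d \<xi>. \<Sum>b<d \<xi>. A $$ (a,b) * \<rho> \<xi> x $$ (b,a))"

lemma synth_continuous: "continuous_on UNIV (synth \<xi> A)"
  unfolding synth_def by (intro continuous_intros rho_continuous) auto

lemma synth_bounded: "\<exists>B. \<forall>x. cmod (synth \<xi> A x) \<le> B"
proof -
  have "cmod (synth \<xi> A x) \<le> of_nat (d \<xi>) * (\<Sum>a<d \<xi>. \<Sum>b<d \<xi>. cmod (A $$ (a,b)))" for x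
  proof -
    have "cmod (\<Sum>a<d \<xi>. \<Sum>b<d \<xi>. A $$ (a,b) * \<rho> \<xi> x $$ (b,a)) \<le> (\<Sum>a<d \<xi>. \<Sum>b<d \<xi>. cmod (A $$ (a,b) * \<rho> \<xi> x $$ (b,a)))"
      by (rule order_trans[OF norm_sum sum_mono[OF norm_sum]])
    also have "\<dots> \<le> (\<Sum>a<d \<xi>. \<Sum>b<d \<xi>. cmod (A $$ (a,b)))"
      by (intro sum_mono) (auto simp: norm_mult intro!: mult_left_le rho_bound)
    finally show ?thesis unfolding synth_def by (simp add: norm_mult mult_left_mono)
  qed
  then show ?thesis by blast
qed

lemma in_L2_if_bounded_continuous:
  assumes "continuous_on UNIV f" "\<And>x. cmod (f x) \<le> B"
  shows "in_L2 M f"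
  unfolding in_L2_def
proof
  show "f \<in> borel_measurable M" by (rule continuous_measurable[OF assms(1)])
  show "integrable M (\<lambda>x. (cmod (f x))\<^sup>2)"
  proof (rule integrable_bounded[where B="B\<^sup>2"])
    show "(\<lambda>x. (cmod (f x))\<^sup>2) \<in> borel_measurable M"
      by (intro continuous_measurable continuous_intros assms(1))
    fix x show "norm ((cmod (f x))\<^sup>2) \<le> B\<^sup>2" using assms(2)[of x]
      by (simp add: power_mono)
  qed
qed

lemma synth_L2: "in_L2 M (synth \<xi> A)"
  using synth_bounded[of \<xi> A] in_L2_if_bounded_continuous[OF synth_continuous] by blast

lemma fourier_synth:
  assumes A: "A \<in> carrier_mat (d \<xi>) (d \<xi>)"
  shows "\<F> (synth \<xi> A) \<eta> = (if \<eta> = \<xi> then A else 0\<^sub>m (d \<eta>) (d \<eta>))"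
proof (rule eq_matI)
  fix a' b' assume "a' < dim_row (if \<eta> = \<xi> then A else 0\<^sub>m (d \<eta>) (d \<eta>))"
    "b' < dim_col (if \<eta> = \<xi> then A else 0\<^sub>m (d \<eta>) (d \<eta>))"
  then have a': "a' < d \<eta>" and b': "b' < d \<eta>" using A by (auto split: if_splits)
  have "\<F> (synth \<xi> A) \<eta> $$ (a',b') = (\<integral>x. synth \<xi> A x * cnj (\<rho> \<eta> x $$ (b',a')) \<partial>M)"
    using a' b' by (simp add: fourier_index)
  also have "\<dots> = (\<integral>x. of_nat (d \<xi>) * (\<Sum>a<d \<xi>. \<Sum>b<d \<xi>. A $$ (a,b) * (\<rho> \<xi> x $$ (b,a) * cnj (\<rho> \<eta> x $$ (b',a')))) \<partial>M)"
    unfolding synth_def by (simp add: sum_distrib_right mult.assoc)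
  also have "\<dots> = of_nat (d \<xi>) * (\<Sum>a<d \<xi>. \<Sum>b<d \<xi>. A $$ (a,b) * (\<integral>x. \<rho> \<xi> x $$ (b,a) * cnj (\<rho> \<eta> x $$ (b',a')) \<partial>M))"
  proof -
    have i2: "(\<integral>x. (\<Sum>b<d \<xi>. A $$ (a,b) * (\<rho> \<xi> x $$ (b,a) * cnj (\<rho> \<eta> x $$ (b',a')))) \<partial>M)
       = (\<Sum>b<d \<xi>. A $$ (a,b) * (\<integral>x. \<rho> \<xi> x $$ (b,a) * cnj (\<rho> \<eta> x $$ (b',a')) \<partial>M))" if a: "a < d \<xi>" for a
      by (subst Bochner_Integration.integral_sum) (auto intro!: integrable_mult_right rho_coeff_prod_integrable a a' b')
    have i1: "(\<integral>x. (\<Sum>a<d \<xi>. \<Sum>b<d \<xi>. A $$ (a,b) * (\<rho> \<xi> x $$ (b,a) * cnj (\<rho> \<eta> x $$ (b',a')))) \<partial>M)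
       = (\<Sum>a<d \<xi>. (\<integral>x. (\<Sum>b<d \<xi>. A $$ (a,b) * (\<rho> \<xi> x $$ (b,a) * cnj (\<rho> \<eta> x $$ (b',a')))) \<partial>M))"
      by (rule Bochner_Integration.integral_sum) (auto intro!: integrable_sum integrable_mult_right rho_coeff_prod_integrable a' b')
    show ?thesis by (simp only: integral_mult_right_zero i1) (simp add: i2)
  qed
  also have "\<dots> = of_nat (d \<xi>) * (\<Sum>a<d \<xi>. \<Sum>b<d \<xi>. A $$ (a,b) * (if \<xi> = \<eta> \<and> b = b' \<and> a = a' then 1 / of_nat (d \<xi>) else 0))"
    by (simp add: schur_orthogonality a' b')
  also have "\<dots> = (if \<eta> = \<xi> then A $$ (a',b') else 0)"
  proof (cases "\<eta> = \<xi>")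
    case True
    then have "(\<Sum>a<d \<xi>. \<Sum>b<d \<xi>. A $$ (a,b) * (if \<xi> = \<eta> \<and> b = b' \<and> a = a' then 1 / of_nat (d \<xi>) else 0))
        = A $$ (a',b') / of_nat (d \<xi>)"
      using a' b' double_sum_delta[of a' "d \<xi>" b' "\<lambda>a b. A $$ (a,b)" "1 / of_nat (d \<xi>)"] by simp
    then show ?thesis using True dim_pos[of \<xi>] by simp
  qed simp
  also have "\<dots> = (if \<eta> = \<xi> then A else 0\<^sub>m (d \<eta>) (d \<eta>)) $$ (a',b')" using a' b' by simp
  finally show "\<F> (synth \<xi> A) \<eta> $$ (a',b') = (if \<eta> = \<xi> then A else 0\<^sub>m (d \<eta>) (d \<eta>)) $$ (a',b')" .
qed (use A in auto)

definition synth_sum :: "'x set \<Rightarrow> ('x \<Rightarrow> complex mat) \<Rightarrow> 'g \<Rightarrow> complex" where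
  "synth_sum F C x = (\<Sum>\<xi>\<in>F. synth \<xi> (C \<xi>) x)"

lemma synth_sum_L2: "finite F \<Longrightarrow> in_L2 M (synth_sum F C)"
  unfolding synth_sum_def by (rule L2_sum) (auto intro: synth_L2)

lemma fourier_synth_sum:
  assumes F: "finite F" and C: "\<And>\<xi>. C \<xi> \<in> carrier_mat (d \<xi>) (d \<xi>)"
  shows "\<F> (synth_sum F C) \<eta> = (if \<eta> \<in> F then C \<eta> else 0\<^sub>m (d \<eta>) (d \<eta>))"
  using F unfolding synth_sum_def
proof (induction F rule: finite_induct)
  case empty
  then show ?case using fourier_zero by simp
next
  case (insert a F)
  have "\<F> (\<lambda>x. \<Sum>\<xi>\<in>insert a F. synth \<xi> (C \<xi>) x) \<eta>
      = \<F> (\<lambda>x. synth a (C a) x + (\<Sum>\<xi>\<in>F. synth \<xi> (C \<xi>) x)) \<eta>"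
    using insert by simp
  also have "\<dots> = \<F> (synth a (C a)) \<eta> + \<F> (\<lambda>x. \<Sum>\<xi>\<in>F. synth \<xi> (C \<xi>) x) \<eta>"
    by (rule fourier_add) (auto intro: synth_L2 L2_sum insert)
  also have "\<dots> = (if \<eta> \<in> insert a F then C \<eta> else 0\<^sub>m (d \<eta>) (d \<eta>))"
    using insert(2) C[of \<eta>] by (auto simp: fourier_synth[OF C] insert.IH intro!: eq_matI)
  finally show ?case .
qed

lemma synth_unit_L2_norm_pos: "L2_norm M (synth \<xi> (1\<^sub>m (d \<xi>))) > 0"
proof -
  have "\<F> (synth \<xi> (1\<^sub>m (d \<xi>))) \<xi> $$ (0,0) = 1"
    using dim_pos[of \<xi>] by (simp add: fourier_synth)
  then have "\<F> (synth \<xi> (1\<^sub>m (d \<xi>))) \<xi> \<noteq> 0\<^sub>m (d \<xi>) (d \<xi>)" using dim_pos[of \<xi>] by auto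
  then have "L2_norm M (synth \<xi> (1\<^sub>m (d \<xi>))) \<noteq> 0" using fourier_zero_if_L2_norm_zero[OF synth_L2] by blast
  then show ?thesis using L2_norm_nonneg[of M "synth \<xi> (1\<^sub>m (d \<xi>))"] by linarith
qed

abbreviation "\<tau> \<equiv> transl gmul ginv"

lemma transl_L2:
  assumes f: "in_L2 M f"
  shows "in_L2 M (\<tau> g f)" "L2_norm M (\<tau> g f) = L2_norm M f"
proof -
  have fm: "f \<in> borel_measurable M" using f by (simp add: in_L2_def)
  have D: "distr M M (gmul (ginv g)) = M" using haar by (simp add: normalized_haar_def)
  have m: "\<tau> g f \<in> borel_measurable M"
    unfolding transl_def using measurable_comp[OF gmul_measurable fm] by (simp add: o_def)
  have fm2: "(\<lambda>x. (cmod (f x))\<^sup>2) \<in> borel_measurable M" using fm by measurable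
  have "integrable M (\<lambda>x. (cmod (f (gmul (ginv g) x)))\<^sup>2)"
    using integrable_distr_eq[OF gmul_measurable fm2, of "ginv g"] D L2_integrable[OF f] by simp
  then show "in_L2 M (\<tau> g f)" using m by (simp add: in_L2_def transl_def)
  show "L2_norm M (\<tau> g f) = L2_norm M f"
    using integral_gmul_invariant[OF fm2, of "ginv g"] by (simp add: L2_norm_def transl_def)
qed

lemma transl_diff: "\<tau> g (\<lambda>x. f x - h x) = (\<lambda>x. \<tau> g f x - \<tau> g h x)"
  by (simp add: transl_def)

lemma transl_inv: "\<tau> g (\<tau> (ginv g) f) = f"
  by (simp add: transl_def)

context fixes q :: nat begin

definition match_dist :: "(nat \<Rightarrow> 'g \<Rightarrow> complex) \<Rightarrow> (nat \<Rightarrow> 'g \<Rightarrow> complex) \<Rightarrow> (nat \<Rightarrow> nat) \<Rightarrow> (nat \<Rightarrow> 'g) \<Rightarrow> real" where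
  "match_dist A B \<pi> gs = Max ((\<lambda>j. L2_norm M (\<lambda>x. A j x - \<tau> (gs j) (B (\<pi> j)) x)) ` {..<q})"

lemma dict_dist_eq_Inf: "dict_dist gmul ginv M q A B = Inf {match_dist A B \<pi> gs | \<pi> gs. \<pi> permutes {..<q}}"
  by (simp add: dict_dist_def match_dist_def)

lemma match_dist_ge_term: "j < q \<Longrightarrow> L2_norm M (\<lambda>x. A j x - \<tau> (gs j) (B (\<pi> j)) x) \<le> match_dist A B \<pi> gs"
  unfolding match_dist_def by (rule Max_ge) auto

lemma match_dist_nonneg: assumes "q \<ge> 1" shows "match_dist A B \<pi> gs \<ge> 0"
proof -
  have "0 < q" using assms by simp
  from match_dist_ge_term[OF this, of A gs B \<pi>] show ?thesis using L2_norm_nonneg order_trans by blast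
qed

lemma match_dist_le: "q \<ge> 1 \<Longrightarrow> (\<And>j. j < q \<Longrightarrow> L2_norm M (\<lambda>x. A j x - \<tau> (gs j) (B (\<pi> j)) x) \<le> c) \<Longrightarrow> match_dist A B \<pi> gs \<le> c"
  unfolding match_dist_def by (subst Max_le_iff) (auto simp: lessThan_empty_iff)

lemma permutes_lessThan: "\<pi> permutes {..<q} \<Longrightarrow> j < q \<Longrightarrow> \<pi> j < q"
  using permutes_in_image[of \<pi> "{..<q}" j] by simp

lemma dict_dist_le_match_dist: assumes q: "q \<ge> 1" and p: "\<pi> permutes {..<q}"
  shows "dict_dist gmul ginv M q A B \<le> match_dist A B \<pi> gs"
  unfolding dict_dist_eq_Inf
proof (rule cInf_lower)
  show "match_dist A B \<pi> gs \<in> {match_dist A B \<pi> gs |\<pi> gs. \<pi> permutes {..<q}}" using p by blast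
  show "bdd_below {match_dist A B \<pi> gs |\<pi> gs. \<pi> permutes {..<q}}"
    by (rule bdd_belowI[where m=0]) (use match_dist_nonneg[OF q] in blast)
qed

lemma dict_dist_greatest: "(\<And>\<pi> gs. \<pi> permutes {..<q} \<Longrightarrow> c \<le> match_dist A B \<pi> gs) \<Longrightarrow> c \<le> dict_dist gmul ginv M q A B"
  unfolding dict_dist_eq_Inf by (rule cInf_greatest) (use permutes_id in blast, auto)

lemma dict_dist_nonneg: "q \<ge> 1 \<Longrightarrow> dict_dist gmul ginv M q A B \<ge> 0"
  by (rule dict_dist_greatest) (rule match_dist_nonneg)

lemma dict_dist_commute_le:
  assumes q: "q \<ge> 1" and hA: "\<And>j. j < q \<Longrightarrow> in_L2 M (A j)" and hB: "\<And>j. j < q \<Longrightarrow> in_L2 M (B j)"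
  shows "dict_dist gmul ginv M q A B \<le> dict_dist gmul ginv M q B A"
proof (rule dict_dist_greatest)
  fix \<pi> gs assume p: "\<pi> permutes {..<q}"
  define \<pi>' where "\<pi>' = inv_into UNIV \<pi>"
  define gs' where "gs' = (\<lambda>j. ginv (gs (\<pi>' j)))"
  have p': "\<pi>' permutes {..<q}" using permutes_inv[OF p] by (simp add: \<pi>'_def)
  have "match_dist A B \<pi>' gs' \<le> match_dist B A \<pi> gs"
  proof (rule match_dist_le[OF q])
    fix j assume j: "j < q"
    define i where "i = \<pi>' j"
    have i: "i < q" using permutes_lessThan[OF p' j] by (simp add: i_def)
    have pi: "\<pi> i = j" using p by (simp add: i_def \<pi>'_def permutes_inverses(1))
    have "L2_norm M (\<lambda>x. A j x - \<tau> (gs' j) (B (\<pi>' j)) x)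
        = L2_norm M (\<lambda>x. A (\<pi> i) x - \<tau> (ginv (gs i)) (B i) x)"
      by (simp add: gs'_def i_def[symmetric] pi)
    also have "\<dots> = L2_norm M (\<tau> (gs i) (\<lambda>x. A (\<pi> i) x - \<tau> (ginv (gs i)) (B i) x))"
      by (rule transl_L2(2)[symmetric]) (intro L2_diff hA hB transl_L2(1) i permutes_lessThan[OF p])
    also have "\<dots> = L2_norm M (\<lambda>x. \<tau> (gs i) (A (\<pi> i)) x - B i x)"
      by (simp add: transl_diff transl_inv)
    also have "\<dots> = L2_norm M (\<lambda>x. B i x - \<tau> (gs i) (A (\<pi> i)) x)"
      by (rule L2_norm_diff_sym)
    also have "\<dots> \<le> match_dist B A \<pi> gs" by (rule match_dist_ge_term[OF i])
    finally show "L2_norm M (\<lambda>x. A j x - \<tau> (gs' j) (B (\<pi>' j)) x) \<le> match_dist B A \<pi> gs" .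
  qed
  then show "dict_dist gmul ginv M q A B \<le> match_dist B A \<pi> gs"
    using dict_dist_le_match_dist[OF q p', of A B gs'] by linarith
qed

lemma dict_dist_commute:
  assumes q: "q \<ge> 1" and hA: "\<And>j. j < q \<Longrightarrow> in_L2 M (A j)" and hB: "\<And>j. j < q \<Longrightarrow> in_L2 M (B j)"
  shows "dict_dist gmul ginv M q A B = dict_dist gmul ginv M q B A"
  using dict_dist_commute_le[of A B, OF q hA hB] dict_dist_commute_le[of B A, OF q hB hA] by linarith

lemma dict_dist_perturb:
  assumes q: "q \<ge> 1" and hA: "\<And>j. j < q \<Longrightarrow> in_L2 M (A j)" and hB: "\<And>j. j < q \<Longrightarrow> in_L2 M (B j)"
    and hB': "\<And>j. j < q \<Longrightarrow> in_L2 M (B' j)"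
    and D: "\<And>j. j < q \<Longrightarrow> L2_norm M (\<lambda>x. B' j x - B j x) \<le> D"
  shows "dict_dist gmul ginv M q A B \<le> dict_dist gmul ginv M q A B' + D"
proof -
  have "dict_dist gmul ginv M q A B - D \<le> dict_dist gmul ginv M q A B'"
  proof (rule dict_dist_greatest)
    fix \<pi> gs assume p: "\<pi> permutes {..<q}"
    have "match_dist A B \<pi> gs \<le> match_dist A B' \<pi> gs + D"
    proof (rule match_dist_le[OF q])
      fix j assume j: "j < q"
      have pj: "\<pi> j < q" using p j by (rule permutes_lessThan)
      have "L2_norm M (\<lambda>x. A j x - \<tau> (gs j) (B (\<pi> j)) x)
          \<le> L2_norm M (\<lambda>x. A j x - \<tau> (gs j) (B' (\<pi> j)) x) + L2_norm M (\<lambda>x. \<tau> (gs j) (B' (\<pi> j)) x - \<tau> (gs j) (B (\<pi> j)) x)"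
        by (rule L2_triangle_diff) (auto intro!: hA hB hB' transl_L2(1) j pj)
      also have "L2_norm M (\<lambda>x. \<tau> (gs j) (B' (\<pi> j)) x - \<tau> (gs j) (B (\<pi> j)) x) = L2_norm M (\<lambda>x. B' (\<pi> j) x - B (\<pi> j) x)"
        using transl_L2(2)[OF L2_diff[OF hB' hB], of "\<pi> j" "\<pi> j" "gs j"] pj by (simp add: transl_diff)
      also have "\<dots> \<le> D" by (rule D[OF pj])
      finally have "L2_norm M (\<lambda>x. A j x - \<tau> (gs j) (B (\<pi> j)) x) \<le> L2_norm M (\<lambda>x. A j x - \<tau> (gs j) (B' (\<pi> j)) x) + D"
        by simp
      also have "\<dots> \<le> match_dist A B' \<pi> gs + D" using match_dist_ge_term[OF j] by simp
      finally show "L2_norm M (\<lambda>x. A j x - \<tau> (gs j) (B (\<pi> j)) x) \<le> match_dist A B' \<pi> gs + D" .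
    qed
    then show "dict_dist gmul ginv M q A B - D \<le> match_dist A B' \<pi> gs" using dict_dist_le_match_dist[OF q p, of A B gs] by linarith
  qed
  then show ?thesis by linarith
qed

lemma dict_dist_lower_bound:
  assumes q: "q \<ge> 1" and hA: "\<And>j. j < q \<Longrightarrow> in_L2 M (A j)" and hB: "\<And>j. j < q \<Longrightarrow> in_L2 M (B j)"
    and j0: "j0 < q"
  shows "L2_norm M (B j0) - (\<Sum>j<q. L2_norm M (A j)) \<le> dict_dist gmul ginv M q A B"
proof (rule dict_dist_greatest)
  fix \<pi> gs assume p: "\<pi> permutes {..<q}"
  define j where "j = inv_into UNIV \<pi> j0"
  have j: "j < q" using permutes_lessThan[OF permutes_inv[OF p] j0] by (simp add: j_def)
  have pj: "\<pi> j = j0" using p by (simp add: j_def permutes_inverses(1))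
  have "L2_norm M (B j0) - (\<Sum>j<q. L2_norm M (A j)) \<le> L2_norm M (B j0) - L2_norm M (A j)"
    using member_le_sum[of j "{..<q}" "\<lambda>j. L2_norm M (A j)"] j L2_norm_nonneg by auto
  also have "\<dots> = L2_norm M (\<tau> (gs j) (B (\<pi> j))) - L2_norm M (A j)"
    using transl_L2(2)[OF hB[OF j0]] pj by simp
  also have "\<dots> \<le> L2_norm M (\<lambda>x. A j x - \<tau> (gs j) (B (\<pi> j)) x)"
    by (rule L2_diff_ge) (use hA hB j j0 pj transl_L2(1) in auto)
  also have "\<dots> \<le> match_dist A B \<pi> gs" by (rule match_dist_ge_term[OF j])
  finally show "L2_norm M (B j0) - (\<Sum>j<q. L2_norm M (A j)) \<le> match_dist A B \<pi> gs" .
qed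

end

end

section \<open>The dictionary learning problem\<close>

definition perturb_first :: "(nat \<Rightarrow> 'g \<Rightarrow> complex) \<Rightarrow> ('g \<Rightarrow> complex) \<Rightarrow> real \<Rightarrow> nat \<Rightarrow> 'g \<Rightarrow> complex" where
  "perturb_first \<psi> w c = \<psi>(0 := (\<lambda>x. \<psi> 0 x + complex_of_real c * w x))"

definition rescale_atom :: "nat \<Rightarrow> real \<Rightarrow> (nat \<Rightarrow> 'g \<Rightarrow> complex) \<Rightarrow> nat \<Rightarrow> 'g \<Rightarrow> complex" where
  "rescale_atom j t \<phi> = \<phi>(j := (\<lambda>x. complex_of_real t * \<phi> j x))"

definition rescale_ops :: "nat \<Rightarrow> real \<Rightarrow> (nat \<Rightarrow> nat \<Rightarrow> 'x \<Rightarrow> complex mat) \<Rightarrow> nat \<Rightarrow> nat \<Rightarrow> 'x \<Rightarrow> complex mat" where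
  "rescale_ops j t l = (\<lambda>i j'. if j' = j then (\<lambda>\<xi>. complex_of_real (1 / t) \<cdot>\<^sub>m l i j' \<xi>) else l i j')"

context compact_group_dual begin

lemma L2_perturb_first:
  assumes "in_L2 M (\<psi> j)" "in_L2 M (\<psi> 0)" "in_L2 M w"
  shows "in_L2 M (perturb_first \<psi> w c j)"
  using assms by (auto simp: perturb_first_def intro: L2_add L2_scale)

lemma fourier_perturb_first:
  assumes "in_L2 M (\<psi> 0)" "in_L2 M w"
  shows "\<F> (perturb_first \<psi> w c j) \<eta>
    = (if j = 0 then \<F> (\<psi> 0) \<eta> + complex_of_real c \<cdot>\<^sub>m \<F> w \<eta> else \<F> (\<psi> j) \<eta>)"
  using fourier_add[OF assms(1) L2_scale[OF assms(2)]]
  by (simp add: perturb_first_def fourier_scale)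

lemma L2_norm_perturb_first_diff:
  "L2_norm M (\<lambda>x. perturb_first \<psi> w c j x - \<psi> j x) \<le> \<bar>c\<bar> * L2_norm M w"
proof (cases "j = 0")
  case True
  then have "(\<lambda>x. perturb_first \<psi> w c j x - \<psi> j x) = (\<lambda>x. complex_of_real c * w x)"
    by (simp add: perturb_first_def)
  then show ?thesis by (simp add: L2_norm_scale)
qed (simp add: perturb_first_def L2_norm_def)

end

locale dictionary_problem = compact_group_dual gmul ginv e M d \<rho>
  for gmul :: "'g::t2_space \<Rightarrow> 'g \<Rightarrow> 'g" and ginv e M and d :: "'x \<Rightarrow> nat" and \<rho> +
  fixes n q :: nat and y :: "nat \<Rightarrow> 'g \<Rightarrow> real" and lam :: real and \<mu> :: "nat \<Rightarrow> real"
  assumes q1: "q \<ge> 1" and lam0: "lam \<ge> 0"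
begin

definition y_cplx :: "nat \<Rightarrow> 'g \<Rightarrow> complex" where "y_cplx i = (\<lambda>x. complex_of_real (y i x))"

definition residual where
  "residual \<phi> l i \<xi> = mat (d \<xi>) (d \<xi>) (\<lambda>ab.
     \<F> (y_cplx i) \<xi> $$ ab - (\<Sum>j<q. (\<F> (\<phi> j) \<xi> * cadj (l i j \<xi>)) $$ ab))"

definition fit where
  "fit \<phi> l i \<xi> = (real (d \<xi>))\<^sup>2 / 2 * (frob_norm (residual \<phi> l i \<xi>))\<^sup>2"

definition energy where
  "energy f \<xi> = (real (d \<xi>))\<^sup>2 * (frob_norm (\<F> f \<xi>))\<^sup>2"

definition data_energy where
  "data_energy i \<xi> = (real (d \<xi>))\<^sup>2 / 2 * (frob_norm (\<F> (y_cplx i) \<xi>))\<^sup>2"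

definition fit_sum where "fit_sum H \<phi> l i = infsum (\<lambda>\<xi>. ennreal (fit \<phi> l i \<xi>)) H"

definition energy_sum where "energy_sum H f = infsum (\<lambda>\<xi>. ennreal (energy f \<xi>)) H"

definition data_tail where "data_tail i A = infsum (\<lambda>\<xi>. ennreal (data_energy i \<xi>)) A"

definition penalty where "penalty H l i = (\<Sum>j<q. plus_norm d \<rho> H (l i j))"

abbreviation "obj \<equiv> objective M d \<rho> n y q lam \<mu>"

abbreviation "feas \<equiv> feasible M d \<rho> n q"

abbreviation "OP \<equiv> OPT M d \<rho> n y q lam \<mu>"

lemma objective_eq: "obj H \<phi> l = (\<Sum>i<n. enn2ereal (fit_sum H \<phi> l i) + ereal lam * penalty H l i)
     + (\<Sum>j<q. ereal (\<mu> j) * enn2ereal (energy_sum H (\<phi> j)))"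
  unfolding objective_def fit_sum_def energy_sum_def penalty_def fit_def energy_def residual_def
    y_cplx_def ..

lemma OPT_le: "feas H \<phi> l \<Longrightarrow> OP H \<le> obj H \<phi> l"
  unfolding OPT_def by (rule Inf_lower) blast

lemma fit_nonneg: "fit \<phi> l i \<xi> \<ge> 0" by (simp add: fit_def)

lemma energy_nonneg: "energy f \<xi> \<ge> 0" by (simp add: energy_def)

lemma penalty_nonneg: "penalty H l i \<ge> 0"
  unfolding penalty_def by (rule sum_nonneg) (rule plus_norm_nonneg)

lemma fit_cong:
  assumes "\<And>j. j < q \<Longrightarrow> \<F> (\<phi> j) \<xi> = \<F> (\<phi>' j) \<xi>" "\<And>j. j < q \<Longrightarrow> l i j \<xi> = l' i j \<xi>"
  shows "fit \<phi> l i \<xi> = fit \<phi>' l' i \<xi>"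
proof -
  have "residual \<phi> l i \<xi> = residual \<phi>' l' i \<xi>"
    unfolding residual_def using assms by (intro eq_matI) auto
  then show ?thesis by (simp add: fit_def)
qed

lemma fit_zero:
  assumes "\<And>j. j < q \<Longrightarrow> \<F> (\<phi> j) \<xi> = 0\<^sub>m (d \<xi>) (d \<xi>)"
    and "\<And>j. j < q \<Longrightarrow> l i j \<xi> \<in> carrier_mat (d \<xi>) (d \<xi>)"
  shows "fit \<phi> l i \<xi> = data_energy i \<xi>"
proof -
  have z: "(\<F> (\<phi> j) \<xi> * cadj (l i j \<xi>)) $$ (a,b) = 0" if "j < q" "a < d \<xi>" "b < d \<xi>" for j a b
    using assms(1)[OF that(1)] assms(2)[OF that(1)] that
    by (auto simp: carrier_matD scalar_prod_def intro!: sum.neutral)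
  have "residual \<phi> l i \<xi> = \<F> (y_cplx i) \<xi>"
    unfolding residual_def using z by (intro eq_matI) auto
  then show ?thesis by (simp add: fit_def data_energy_def)
qed

lemma feas_carrier: "feas H \<phi> l \<Longrightarrow> i < n \<Longrightarrow> j < q \<Longrightarrow> l i j \<xi> \<in> carrier_mat (d \<xi>) (d \<xi>)"
  by (simp add: feasible_def block_op_def)

lemma feas_L2: "feas H \<phi> l \<Longrightarrow> j < q \<Longrightarrow> in_L2 M (\<phi> j)"
  by (simp add: feasible_def in_L2_H_def)

lemma feas_out: "feas H \<phi> l \<Longrightarrow> j < q \<Longrightarrow> \<xi> \<notin> H \<Longrightarrow> \<F> (\<phi> j) \<xi> = 0\<^sub>m (d \<xi>) (d \<xi>)"
  by (simp add: feasible_def in_L2_H_def)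

lemma feas_block: "feas H \<phi> l \<Longrightarrow> i < n \<Longrightarrow> j < q \<Longrightarrow> block_op d H (l i j)"
  by (simp add: feasible_def)

lemma feas_bound:
  assumes "feas H \<phi> l" "i < n"
  shows "\<exists>C. \<forall>j<q. \<forall>\<xi>\<in>H. \<forall>v\<in>carrier_vec (d \<xi>). cvec_norm (l i j \<xi> *\<^sub>v v) \<le> C j * cvec_norm v"
  using feas_block[OF assms] by (simp add: block_op_def) metis

lemma feas_zero_ops:
  assumes "\<And>j. j < q \<Longrightarrow> in_L2 M (\<phi> j)"
  shows "feas UNIV \<phi> (\<lambda>i j \<xi>. 0\<^sub>m (d \<xi>) (d \<xi>))"
  using assms by (auto simp: feasible_def in_L2_H_def block_op_zero)

text \<open>The data decompose as \<open>\<hat>y = R + \<Sigma>\<^sub>j \<hat>\<phi>\<^sub>j \<ell>\<^sub>j\<^sup>*\<close> with \<open>R\<close> the residual.\<close>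

lemma data_energy_bound:
  assumes f: "feas UNIV \<phi> l" and i: "i < n"
    and C: "\<And>j v. j < q \<Longrightarrow> v \<in> carrier_vec (d \<xi>) \<Longrightarrow> cvec_norm (l i j \<xi> *\<^sub>v v) \<le> C j * cvec_norm v"
  shows "data_energy i \<xi> \<le> 2 * fit \<phi> l i \<xi> + real q * (\<Sum>j<q. (C j)\<^sup>2 * energy (\<phi> j) \<xi>)"
proof -
  let ?R = "residual \<phi> l i \<xi>"
  let ?P = "\<lambda>j. \<F> (\<phi> j) \<xi> * cadj (l i j \<xi>)"
  have Pc: "?P j \<in> carrier_mat (d \<xi>) (d \<xi>)" if "j < q" for j
    using feas_carrier[OF f i that] by (meson cadj_carrier fourier_carrier mult_carrier_mat)
  have "\<F> (y_cplx i) \<xi> = mat (d \<xi>) (d \<xi>) (\<lambda>ab. ?R $$ ab + (\<Sum>j<q. ?P j $$ ab))"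
    by (rule eq_matI) (auto simp: residual_def)
  then have "(frob_norm (\<F> (y_cplx i) \<xi>))\<^sup>2 \<le> 2 * (frob_norm ?R)\<^sup>2 + 2 * real q * (\<Sum>j<q. (frob_norm (?P j))\<^sup>2)"
    using frob_sum_sq_le[of ?R "d \<xi>" q ?P] Pc by (simp add: residual_def)
  also have "\<dots> \<le> 2 * (frob_norm ?R)\<^sup>2 + 2 * real q * (\<Sum>j<q. (C j)\<^sup>2 * (frob_norm (\<F> (\<phi> j) \<xi>))\<^sup>2)"
    by (intro add_left_mono mult_left_mono sum_mono frob_mult_cadj[OF fourier_carrier feas_carrier[OF f i]])
       (auto intro: C)
  finally have "(real (d \<xi>))\<^sup>2 / 2 * (frob_norm (\<F> (y_cplx i) \<xi>))\<^sup>2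
      \<le> (real (d \<xi>))\<^sup>2 / 2 * (2 * (frob_norm ?R)\<^sup>2 + 2 * real q * (\<Sum>j<q. (C j)\<^sup>2 * (frob_norm (\<F> (\<phi> j) \<xi>))\<^sup>2))"
    by (intro mult_left_mono) auto
  then show ?thesis
    by (simp add: data_energy_def fit_def energy_def sum_distrib_left algebra_simps)
qed

lemma objective_finite_parts:
  assumes "\<bar>obj H \<phi> l\<bar> \<noteq> \<infinity>"
  shows "\<bar>\<Sum>i<n. enn2ereal (fit_sum H \<phi> l i) + ereal lam * penalty H l i\<bar> \<noteq> \<infinity>"
    and "\<bar>\<Sum>j<q. ereal (\<mu> j) * enn2ereal (energy_sum H (\<phi> j))\<bar> \<noteq> \<infinity>"
  using ereal_add_finite[OF assms[unfolded objective_eq]] by auto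

lemma fit_sum_finite:
  assumes fin: "\<bar>obj H \<phi> l\<bar> \<noteq> \<infinity>" and i: "i < n"
  shows "fit_sum H \<phi> l i < \<infinity>"
proof -
  have "\<bar>enn2ereal (fit_sum H \<phi> l i) + ereal lam * penalty H l i\<bar> \<noteq> \<infinity>"
    using ereal_sum_finite[OF _ objective_finite_parts(1)[OF fin]] i by auto
  then have "\<bar>enn2ereal (fit_sum H \<phi> l i)\<bar> \<noteq> \<infinity>" by (rule conjunct1[OF ereal_add_finite])
  then show ?thesis by (intro enn2ereal_fin) auto
qed

lemma energy_sum_finite:
  assumes fin: "\<bar>obj H \<phi> l\<bar> \<noteq> \<infinity>" and j: "j < q" and mu: "\<mu> j \<noteq> 0"
  shows "energy_sum H (\<phi> j) < \<infinity>"
proof -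
  have "\<bar>ereal (\<mu> j) * enn2ereal (energy_sum H (\<phi> j))\<bar> \<noteq> \<infinity>"
    using ereal_sum_finite[OF _ objective_finite_parts(2)[OF fin]] j by auto
  moreover have "\<bar>ereal (\<mu> j) * \<infinity>\<bar> = \<infinity>" using mu by (cases "\<mu> j > 0") auto
  ultimately have "enn2ereal (energy_sum H (\<phi> j)) \<noteq> \<infinity>" by (intro notI) simp
  then show ?thesis by (intro enn2ereal_fin)
qed

lemma data_tail_finite:
  assumes f: "feas UNIV \<phi> l" and i: "i < n"
    and fit_fin: "fit_sum UNIV \<phi> l i < \<infinity>" and energy_fin: "\<And>j. j < q \<Longrightarrow> energy_sum UNIV (\<phi> j) < \<infinity>"
  shows "data_tail i UNIV < \<infinity>"
proof -
  obtain C where C: "\<forall>j<q. \<forall>\<xi>. \<forall>v\<in>carrier_vec (d \<xi>). cvec_norm (l i j \<xi> *\<^sub>v v) \<le> C j * cvec_norm v"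
    using feas_bound[OF f i] by auto
  have "ennreal (data_energy i \<xi>)
      \<le> 2 * ennreal (fit \<phi> l i \<xi>) + (\<Sum>j<q. ennreal (real q * (C j)\<^sup>2) * ennreal (energy (\<phi> j) \<xi>))" for \<xi>
  proof -
    have "data_energy i \<xi> \<le> 2 * fit \<phi> l i \<xi> + (\<Sum>j<q. real q * (C j)\<^sup>2 * energy (\<phi> j) \<xi>)"
      using data_energy_bound[OF f i, of \<xi> C] C by (simp add: sum_distrib_left mult.assoc)
    then have "ennreal (data_energy i \<xi>)
        \<le> ennreal (2 * fit \<phi> l i \<xi> + (\<Sum>j<q. real q * (C j)\<^sup>2 * energy (\<phi> j) \<xi>))"
      by (rule ennreal_leI)
    then show ?thesis by (simp add: ennreal_affine_sum fit_nonneg energy_nonneg)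
  qed
  then have "data_tail i UNIV \<le> infsum (\<lambda>\<xi>. 2 * ennreal (fit \<phi> l i \<xi>)
      + (\<Sum>j<q. ennreal (real q * (C j)\<^sup>2) * ennreal (energy (\<phi> j) \<xi>))) UNIV"
    unfolding data_tail_def by (rule einfsum_mono[OF order_refl])
  also have "\<dots> = 2 * fit_sum UNIV \<phi> l i + (\<Sum>j<q. ennreal (real q * (C j)\<^sup>2) * energy_sum UNIV (\<phi> j))"
    by (simp add: einfsum_add einfsum_cmult einfsum_sum fit_sum_def energy_sum_def)
  also have "\<dots> < \<infinity>"
  proof -
    have "2 * fit_sum UNIV \<phi> l i < \<infinity>"
      using fit_fin by (simp only: ennreal_mult_less_top infinity_ennreal_def) simp
    moreover have "ennreal (real q * (C j)\<^sup>2) * energy_sum UNIV (\<phi> j) < \<infinity>" if "j < q" for j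
      using energy_fin[OF that] by (simp only: ennreal_mult_less_top infinity_ennreal_def) simp
    ultimately show ?thesis
      by (simp only: infinity_ennreal_def ennreal_add_less_top ennreal_sum_less_top[OF finite_lessThan]) auto
  qed
  finally show ?thesis .
qed

lemma feas_rescale:
  assumes f: "feas UNIV \<phi> l" and j: "j < q"
  shows "feas UNIV (rescale_atom j t \<phi>) (rescale_ops j t l)"
  using f feas_L2[OF f j]
  by (auto simp: feasible_def in_L2_H_def rescale_atom_def rescale_ops_def L2_scale intro: block_op_smult)

lemma fit_rescale:
  assumes f: "feas UNIV \<phi> l" and i: "i < n" and t: "t \<noteq> 0"
  shows "fit (rescale_atom j t \<phi>) (rescale_ops j t l) i \<xi> = fit \<phi> l i \<xi>"
proof -
  have "\<F> (rescale_atom j t \<phi> j') \<xi> * cadj (rescale_ops j t l i j' \<xi>) = \<F> (\<phi> j') \<xi> * cadj (l i j' \<xi>)"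
    if "j' < q" for j'
  proof (cases "j' = j")
    case True
    then show ?thesis
      using smult_cancel_cadj[OF fourier_carrier feas_carrier[OF f i that] t]
      by (simp add: rescale_atom_def rescale_ops_def fourier_scale)
  qed (simp add: rescale_atom_def rescale_ops_def)
  then have "residual (rescale_atom j t \<phi>) (rescale_ops j t l) i \<xi> = residual \<phi> l i \<xi>"
    unfolding residual_def by (intro eq_matI) auto
  then show ?thesis by (simp add: fit_def)
qed

text \<open>The fit is unchanged and the atomic norms do not increase; the energy of the rescaled atom
  grows, which does not increase the objective when \<open>\<mu>\<^sub>j \<le> 0\<close>.\<close>

lemma objective_rescale_le:
  assumes f: "feas UNIV \<phi> l" and j: "j < q" and mu: "\<mu> j \<le> 0" and t: "t \<ge> 1"
  shows "obj UNIV (rescale_atom j t \<phi>) (rescale_ops j t l) \<le> obj UNIV \<phi> l"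
  unfolding objective_eq
proof (rule add_mono; rule sum_mono)
  fix i assume "i \<in> {..<n}"
  then have i: "i < n" by simp
  have "fit_sum UNIV (rescale_atom j t \<phi>) (rescale_ops j t l) i = fit_sum UNIV \<phi> l i"
    using t by (simp add: fit_sum_def fit_rescale[OF f i])
  moreover have "penalty UNIV (rescale_ops j t l) i \<le> penalty UNIV l i"
    unfolding penalty_def
    by (intro sum_mono) (use plus_norm_scale[of "1/t"] t in \<open>auto simp: rescale_ops_def\<close>)
  ultimately show "enn2ereal (fit_sum UNIV (rescale_atom j t \<phi>) (rescale_ops j t l) i)
        + ereal lam * penalty UNIV (rescale_ops j t l) i
      \<le> enn2ereal (fit_sum UNIV \<phi> l i) + ereal lam * penalty UNIV l i"
    using lam0 by (auto intro!: add_left_mono ereal_mult_left_mono)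
next
  fix j' assume "j' \<in> {..<q}"
  show "ereal (\<mu> j') * enn2ereal (energy_sum UNIV (rescale_atom j t \<phi> j'))
      \<le> ereal (\<mu> j') * enn2ereal (energy_sum UNIV (\<phi> j'))"
  proof (cases "j' = j")
    case True
    have "energy (\<phi> j) \<xi> \<le> energy (rescale_atom j t \<phi> j) \<xi>" for \<xi>
    proof -
      have "energy (rescale_atom j t \<phi> j) \<xi> = t\<^sup>2 * energy (\<phi> j) \<xi>"
        by (simp add: energy_def rescale_atom_def fourier_scale frob_smult)
      moreover have "1 \<le> t\<^sup>2" using t by (simp add: one_le_power)
      ultimately show ?thesis
        using energy_nonneg[of "\<phi> j" \<xi>] by (simp add: mult_le_cancel_right1)
    qed
    then have "energy_sum UNIV (\<phi> j) \<le> energy_sum UNIV (rescale_atom j t \<phi> j)"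
      unfolding energy_sum_def by (intro einfsum_mono ennreal_leI) auto
    then show ?thesis using True mu by (intro ereal_antimono_neg enn2ereal_mono) auto
  qed (simp add: rescale_atom_def)
qed

lemma fit_sum_change_at:
  assumes fin: "\<bar>obj UNIV \<psi> l\<bar> \<noteq> \<infinity>" and i: "i < n"
    and same: "\<And>\<eta> j. \<eta> \<noteq> \<xi>0 \<Longrightarrow> j < q \<Longrightarrow> \<F> (\<psi>' j) \<eta> = \<F> (\<psi> j) \<eta>"
  shows "enn2ereal (fit_sum UNIV \<psi>' l i)
    = enn2ereal (fit_sum UNIV \<psi> l i) + ereal (fit \<psi>' l i \<xi>0 - fit \<psi> l i \<xi>0)"
proof -
  have "fit \<psi>' l i \<eta> = fit \<psi> l i \<eta>" if "\<eta> \<noteq> \<xi>0" for \<eta>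
    by (rule fit_cong) (simp_all add: same that)
  then show ?thesis
    unfolding fit_sum_def
    by (intro infsum_point_change fit_nonneg) (use fit_sum_finite[OF fin i] in \<open>auto simp: fit_sum_def\<close>)
qed

lemma weighted_energy_sum_change_at:
  assumes fin: "\<bar>obj UNIV \<psi> l\<bar> \<noteq> \<infinity>" and j: "j < q"
    and same: "\<And>\<eta>. \<eta> \<noteq> \<xi>0 \<Longrightarrow> \<F> (\<psi>' j) \<eta> = \<F> (\<psi> j) \<eta>"
  shows "ereal (\<mu> j) * enn2ereal (energy_sum UNIV (\<psi>' j))
    = ereal (\<mu> j) * enn2ereal (energy_sum UNIV (\<psi> j)) + ereal (\<mu> j * (energy (\<psi>' j) \<xi>0 - energy (\<psi> j) \<xi>0))"
proof (cases "\<mu> j = 0")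
  case True
  then show ?thesis by (simp add: zero_ereal_def[symmetric])
next
  case False
  have fin_j: "energy_sum UNIV (\<psi> j) < \<infinity>" by (rule energy_sum_finite[OF fin j False])
  then obtain a where a: "enn2ereal (energy_sum UNIV (\<psi> j)) = ereal a"
    by (metis enn2ereal_ennreal enn2real_nonneg ennreal_enn2real infinity_ennreal_def less_irrefl)
  have "enn2ereal (energy_sum UNIV (\<psi>' j))
      = enn2ereal (energy_sum UNIV (\<psi> j)) + ereal (energy (\<psi>' j) \<xi>0 - energy (\<psi> j) \<xi>0)"
    unfolding energy_sum_def
    by (intro infsum_point_change energy_nonneg) (use fin_j same in \<open>auto simp: energy_def energy_sum_def\<close>)
  then show ?thesis using a by (simp add: distrib_left)
qed

lemma objective_change_at:
  assumes fin: "\<bar>obj UNIV \<psi> l\<bar> \<noteq> \<infinity>"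
    and same: "\<And>\<eta> j. \<eta> \<noteq> \<xi>0 \<Longrightarrow> j < q \<Longrightarrow> \<F> (\<psi>' j) \<eta> = \<F> (\<psi> j) \<eta>"
  shows "obj UNIV \<psi>' l = obj UNIV \<psi> l + ereal ((\<Sum>i<n. fit \<psi>' l i \<xi>0 - fit \<psi> l i \<xi>0)
           + (\<Sum>j<q. \<mu> j * (energy (\<psi>' j) \<xi>0 - energy (\<psi> j) \<xi>0)))"
proof -
  have "obj UNIV \<psi>' l = (\<Sum>i<n. (enn2ereal (fit_sum UNIV \<psi> l i) + ereal lam * penalty UNIV l i)
        + ereal (fit \<psi>' l i \<xi>0 - fit \<psi> l i \<xi>0))
      + (\<Sum>j<q. ereal (\<mu> j) * enn2ereal (energy_sum UNIV (\<psi> j))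
        + ereal (\<mu> j * (energy (\<psi>' j) \<xi>0 - energy (\<psi> j) \<xi>0)))"
    unfolding objective_eq
    by (rule arg_cong2[where f="(+)"]; rule sum.cong[OF refl])
       (auto simp: fit_sum_change_at[OF fin _ same] ac_simps intro!: weighted_energy_sum_change_at[OF fin] same)
  also have "\<dots> = obj UNIV \<psi> l + ereal ((\<Sum>i<n. fit \<psi>' l i \<xi>0 - fit \<psi> l i \<xi>0)
           + (\<Sum>j<q. \<mu> j * (energy (\<psi>' j) \<xi>0 - energy (\<psi> j) \<xi>0)))"
    unfolding objective_eq sum.distrib sum_ereal by (simp add: ac_simps)
  finally show ?thesis .
qed

lemma residual_perturb_first:
  assumes \<psi>0: "in_L2 M (\<psi> 0)" and w: "in_L2 M w" and q0: "0 < q"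
    and L: "l i 0 \<xi> \<in> carrier_mat (d \<xi>) (d \<xi>)"
  shows "residual (perturb_first \<psi> w c) l i \<xi> = mat (d \<xi>) (d \<xi>) (\<lambda>ab. residual \<psi> l i \<xi> $$ ab
           + complex_of_real c * ((-1) \<cdot>\<^sub>m (\<F> w \<xi> * cadj (l i 0 \<xi>))) $$ ab)"
proof (rule eq_matI)
  fix a b assume "a < dim_row (mat (d \<xi>) (d \<xi>) (\<lambda>ab. residual \<psi> l i \<xi> $$ ab
           + complex_of_real c * ((-1) \<cdot>\<^sub>m (\<F> w \<xi> * cadj (l i 0 \<xi>))) $$ ab))"
    "b < dim_col (mat (d \<xi>) (d \<xi>) (\<lambda>ab. residual \<psi> l i \<xi> $$ ab
           + complex_of_real c * ((-1) \<cdot>\<^sub>m (\<F> w \<xi> * cadj (l i 0 \<xi>))) $$ ab))"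
  then have ab: "a < d \<xi>" "b < d \<xi>" by auto
  let ?X = "cadj (l i 0 \<xi>)"
  have X: "?X \<in> carrier_mat (d \<xi>) (d \<xi>)" using L by simp
  have "(\<F> (\<psi> 0) \<xi> + complex_of_real c \<cdot>\<^sub>m \<F> w \<xi>) * ?X = \<F> (\<psi> 0) \<xi> * ?X + complex_of_real c \<cdot>\<^sub>m (\<F> w \<xi> * ?X)"
    using X by (simp add: add_mult_distrib_mat[of _ "d \<xi>" "d \<xi>"] mult_smult_assoc_mat[of _ "d \<xi>" "d \<xi>"])
  then have term0: "(\<F> (perturb_first \<psi> w c 0) \<xi> * ?X) $$ (a,b)
      = (\<F> (\<psi> 0) \<xi> * ?X) $$ (a,b) + complex_of_real c * (\<F> w \<xi> * ?X) $$ (a,b)"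
    using ab carrier_matD[OF X] by (simp add: fourier_perturb_first[of \<psi> w, OF \<psi>0 w])
  have "(\<Sum>j<q. (\<F> (perturb_first \<psi> w c j) \<xi> * cadj (l i j \<xi>)) $$ (a,b))
      = (\<Sum>j<q. (\<F> (\<psi> j) \<xi> * cadj (l i j \<xi>)) $$ (a,b)) + complex_of_real c * (\<F> w \<xi> * ?X) $$ (a,b)"
    using q0 term0 by (simp add: sum.remove[of "{..<q}" 0] perturb_first_def)
  then show "residual (perturb_first \<psi> w c) l i \<xi> $$ (a,b) = mat (d \<xi>) (d \<xi>) (\<lambda>ab. residual \<psi> l i \<xi> $$ ab
           + complex_of_real c * ((-1) \<cdot>\<^sub>m (\<F> w \<xi> * cadj (l i 0 \<xi>))) $$ ab) $$ (a,b)"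
    using ab carrier_matD[OF mult_carrier_mat[OF fourier_carrier X]] by (simp add: residual_def)
qed (simp_all add: residual_def)

lemma objective_perturb_first_quadratic:
  assumes f: "feas UNIV \<psi> l" and fin: "\<bar>obj UNIV \<psi> l\<bar> \<noteq> \<infinity>" and w: "in_L2 M w"
    and supp: "\<And>\<eta>. \<eta> \<noteq> \<xi>0 \<Longrightarrow> \<F> w \<eta> = 0\<^sub>m (d \<eta>) (d \<eta>)"
  shows "\<exists>h. quadratic_fun h \<and> (\<forall>c. obj UNIV (perturb_first \<psi> w c) l = obj UNIV \<psi> l + ereal (h c))"
proof -
  have q0: "0 < q" using q1 by simp
  have \<psi>0: "in_L2 M (\<psi> 0)" by (rule feas_L2[OF f q0])
  note fourier_\<psi> = fourier_perturb_first[of \<psi> w, OF \<psi>0 w]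
  define h where "h c = (\<Sum>i<n. fit (perturb_first \<psi> w c) l i \<xi>0 - fit \<psi> l i \<xi>0)
    + (\<Sum>j<q. \<mu> j * (energy (perturb_first \<psi> w c j) \<xi>0 - energy (\<psi> j) \<xi>0))" for c
  have "obj UNIV (perturb_first \<psi> w c) l = obj UNIV \<psi> l + ereal (h c)" for c
    unfolding h_def by (rule objective_change_at[OF fin]) (simp add: fourier_\<psi> supp)
  moreover have fit_quadratic: "quadratic_fun (\<lambda>c. fit (perturb_first \<psi> w c) l i \<xi>0)" if i: "i < n" for i
    unfolding fit_def residual_perturb_first[where \<psi>=\<psi> and w=w and l=l and i=i and \<xi>=\<xi>0, OF \<psi>0 w q0 feas_carrier[OF f i q0]]
    by (intro quadratic_fun_cmult quadratic_fun_frob_affine) (auto simp: residual_def feas_carrier[OF f i q0] intro!: smult_carrier_mat mult_carrier_mat)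
  moreover have energy_quadratic: "quadratic_fun (\<lambda>c. energy (perturb_first \<psi> w c j) \<xi>0)" for j
  proof (cases "j = 0")
    case True
    have "\<F> (\<psi> 0) \<xi>0 + complex_of_real c \<cdot>\<^sub>m \<F> w \<xi>0
        = mat (d \<xi>0) (d \<xi>0) (\<lambda>ab. \<F> (\<psi> 0) \<xi>0 $$ ab + complex_of_real c * \<F> w \<xi>0 $$ ab)" for c
      by (rule eq_matI) auto
    then show ?thesis
      unfolding energy_def fourier_\<psi> using True by (simp add: quadratic_fun_cmult quadratic_fun_frob_affine)
  qed (simp add: energy_def fourier_\<psi> quadratic_fun_const)
  moreover have "quadratic_fun h"
    unfolding h_def
    by (intro quadratic_fun_add quadratic_fun_sum quadratic_fun_cmult quadratic_fun_diff
        quadratic_fun_const energy_quadratic) (auto intro: fit_quadratic)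
  ultimately show ?thesis by blast
qed

lemma fit_sum_truncation_le:
  assumes f: "feas UNIV \<phi> l" and i: "i < n"
    and \<psi>: "\<And>j \<xi>. j < q \<Longrightarrow> \<F> (\<psi> j) \<xi> = (if \<xi> \<in> F then \<F> (\<phi> j) \<xi> else 0\<^sub>m (d \<xi>) (d \<xi>))"
    and l': "\<And>j \<xi>. j < q \<Longrightarrow> \<xi> \<in> H \<Longrightarrow> l' i j \<xi> = l i j \<xi>"
  shows "fit_sum H \<psi> l' i \<le> fit_sum UNIV \<phi> l i + data_tail i (- F)"
proof -
  have "ennreal (fit \<psi> l' i \<xi>) \<le> ennreal (fit \<phi> l i \<xi>) + (if \<xi> \<in> - F then ennreal (data_energy i \<xi>) else 0)"
    if \<xi>: "\<xi> \<in> H" for \<xi>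
  proof (cases "\<xi> \<in> F")
    case True
    have "fit \<psi> l' i \<xi> = fit \<phi> l i \<xi>"
      by (rule fit_cong) (simp_all add: True \<xi> \<psi> l')
    then show ?thesis using True by simp
  next
    case False
    have "fit \<psi> l' i \<xi> = data_energy i \<xi>"
      by (rule fit_zero) (simp_all add: False \<xi> \<psi> l' feas_carrier[OF f i])
    then show ?thesis using False by (simp add: add_increasing)
  qed
  then have "fit_sum H \<psi> l' i
      \<le> infsum (\<lambda>\<xi>. ennreal (fit \<phi> l i \<xi>) + (if \<xi> \<in> - F then ennreal (data_energy i \<xi>) else 0)) UNIV"
    unfolding fit_sum_def by (intro einfsum_mono) auto
  also have "\<dots> = fit_sum UNIV \<phi> l i + infsum (\<lambda>\<xi>. if \<xi> \<in> - F then ennreal (data_energy i \<xi>) else 0) UNIV"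
    by (simp add: einfsum_add fit_sum_def)
  also have "infsum (\<lambda>\<xi>. if \<xi> \<in> - F then ennreal (data_energy i \<xi>) else 0) UNIV = data_tail i (- F)"
    unfolding data_tail_def by (rule infsum_cong_neutral) auto
  finally show ?thesis .
qed

lemma penalty_extension:
  assumes fk: "feas H \<psi> l" and \<eta>: "\<eta> > 0"
  obtains Z where "feas UNIV \<psi> Z" and "\<And>i j \<xi>. i < n \<Longrightarrow> j < q \<Longrightarrow> \<xi> \<in> H \<Longrightarrow> Z i j \<xi> = l i j \<xi>"
    and "\<And>i. i < n \<Longrightarrow> penalty UNIV Z i \<le> penalty H l i + ereal (real q * \<eta>)"
proof -
  define P where "P i j z \<longleftrightarrow> block_op d UNIV z \<and> (\<forall>\<xi>\<in>H. z \<xi> = l i j \<xi>)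
    \<and> atomic_norm d \<rho> z \<le> plus_norm d \<rho> H (l i j) + ereal \<eta>" for i j z
  have "\<exists>z. P i j z" if "i < n" "j < q" for i j
    using plus_norm_approx[OF feas_block[OF fk that] \<eta>] by (simp add: P_def)
  then obtain Z where PZ: "\<And>i j. i < n \<Longrightarrow> j < q \<Longrightarrow> P i j (Z i j)" by metis
  have "penalty UNIV Z i \<le> penalty H l i + ereal (real q * \<eta>)" if i: "i < n" for i
  proof -
    have "plus_norm d \<rho> UNIV (Z i j) \<le> plus_norm d \<rho> H (l i j) + ereal \<eta>" if "j < q" for j
      using PZ[OF i that] plus_norm_le_atomic[of d "Z i j" UNIV "Z i j" \<rho>] by (auto simp: P_def)
    then have "penalty UNIV Z i \<le> (\<Sum>j<q. plus_norm d \<rho> H (l i j) + ereal \<eta>)"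
      unfolding penalty_def by (intro sum_mono) auto
    then show ?thesis by (simp add: penalty_def sum.distrib)
  qed
  moreover have "feas UNIV \<psi> Z"
    using fk PZ by (auto simp: feasible_def in_L2_H_def P_def)
  ultimately show ?thesis using that PZ by (auto simp: P_def)
qed

text \<open>Outside \<open>\<hat>H\<close> the dictionary has no energy, so there the fit of any extension of the
  coefficients is the data energy.\<close>

lemma fit_sum_extension:
  assumes fk: "feas H \<psi> l" and feas: "feas UNIV \<psi> Z" and i: "i < n"
    and ZH: "\<And>j \<xi>. j < q \<Longrightarrow> \<xi> \<in> H \<Longrightarrow> Z i j \<xi> = l i j \<xi>"
  shows "enn2ereal (fit_sum UNIV \<psi> Z i) = enn2ereal (fit_sum H \<psi> l i) + enn2ereal (data_tail i (- H))"
proof -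
  have "infsum (\<lambda>\<xi>. ennreal (fit \<psi> Z i \<xi>)) H = fit_sum H \<psi> l i"
    unfolding fit_sum_def by (intro infsum_cong arg_cong[where f=ennreal] fit_cong) (simp_all add: ZH)
  moreover have "infsum (\<lambda>\<xi>. ennreal (fit \<psi> Z i \<xi>)) (- H) = data_tail i (- H)"
    unfolding data_tail_def
    by (intro infsum_cong arg_cong[where f=ennreal] fit_zero) (auto simp: feas_out[OF fk] feas_carrier[OF feas i])
  ultimately show ?thesis
    using einfsum_split[of "\<lambda>\<xi>. ennreal (fit \<psi> Z i \<xi>)" H] by (simp add: fit_sum_def plus_ennreal.rep_eq)
qed

lemma energy_sum_extension:
  assumes fk: "feas H \<psi> l" and j: "j < q"
  shows "energy_sum UNIV (\<psi> j) = energy_sum H (\<psi> j)"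
  using einfsum_split[of "\<lambda>\<xi>. ennreal (energy (\<psi> j) \<xi>)" H]
    einfsum_zero[of "- H" "\<lambda>\<xi>. ennreal (energy (\<psi> j) \<xi>)"]
  by (simp add: energy_sum_def energy_def feas_out[OF fk j] frob_zero)

lemma extension_objective_le:
  assumes fk: "feas H \<psi> l" and \<eta>: "\<eta> > 0"
  shows "\<exists>z. feas UNIV \<psi> z \<and> obj UNIV \<psi> z
    \<le> obj H \<psi> l + (\<Sum>i<n. enn2ereal (data_tail i (- H))) + ereal (real n * (lam * (real q * \<eta>)))"
proof -
  obtain Z where feas: "feas UNIV \<psi> Z" and ZH: "\<And>i j \<xi>. i < n \<Longrightarrow> j < q \<Longrightarrow> \<xi> \<in> H \<Longrightarrow> Z i j \<xi> = l i j \<xi>"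
    and pen: "\<And>i. i < n \<Longrightarrow> penalty UNIV Z i \<le> penalty H l i + ereal (real q * \<eta>)"
    using penalty_extension[OF fk \<eta>] by blast
  have terms: "enn2ereal (fit_sum UNIV \<psi> Z i) + ereal lam * penalty UNIV Z i
      \<le> (enn2ereal (fit_sum H \<psi> l i) + ereal lam * penalty H l i)
        + (enn2ereal (data_tail i (- H)) + ereal (lam * (real q * \<eta>)))" if i: "i < n" for i
  proof -
    have "ereal lam * penalty UNIV Z i \<le> ereal lam * (penalty H l i + ereal (real q * \<eta>))"
      using pen[OF i] lam0 by (intro ereal_mult_left_mono) auto
    also have "\<dots> = ereal lam * penalty H l i + ereal (lam * (real q * \<eta>))"
      using penalty_nonneg[of H l i] \<eta> by (simp add: ereal_right_distrib)
    finally have pen': "ereal lam * penalty UNIV Z i \<le> ereal lam * penalty H l i + ereal (lam * (real q * \<eta>))" .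
    show ?thesis
      using add_left_mono[OF pen', of "enn2ereal (fit_sum H \<psi> l i) + enn2ereal (data_tail i (- H))"]
        fit_sum_extension[OF fk feas i ZH[OF i]]
      by (simp add: ac_simps)
  qed
  have "obj UNIV \<psi> Z \<le> (\<Sum>i<n. (enn2ereal (fit_sum H \<psi> l i) + ereal lam * penalty H l i)
        + (enn2ereal (data_tail i (- H)) + ereal (lam * (real q * \<eta>))))
      + (\<Sum>j<q. ereal (\<mu> j) * enn2ereal (energy_sum H (\<psi> j)))"
    unfolding objective_eq
    by (rule add_mono; rule sum_mono) (simp_all add: terms energy_sum_extension[OF fk])
  also have "\<dots> = obj H \<psi> l + (\<Sum>i<n. enn2ereal (data_tail i (- H))) + ereal (real n * (lam * (real q * \<eta>)))"
    unfolding objective_eq sum.distrib by (simp add: ac_simps)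
  finally show ?thesis using feas by blast
qed

end

section \<open>Canonically unique optima\<close>

locale canonical_optimum = dictionary_problem gmul ginv e M d \<rho> n q y lam \<mu>
  for gmul :: "'g::t2_space \<Rightarrow> 'g \<Rightarrow> 'g" and ginv e M and d :: "'x \<Rightarrow> nat" and \<rho> n q y lam \<mu> +
  fixes \<Phi> :: "nat \<Rightarrow> 'g \<Rightarrow> complex" and l0 :: "nat \<Rightarrow> nat \<Rightarrow> 'x \<Rightarrow> complex mat" and \<delta> :: "real \<Rightarrow> real"
  assumes feas_opt: "feas UNIV \<Phi> l0" and obj_opt: "obj UNIV \<Phi> l0 = OP UNIV"
    and \<delta>_lim: "(\<delta> \<longlongrightarrow> 0) (at_right 0)"
    and canonical: "\<And>\<epsilon> \<psi> l. \<epsilon> \<ge> 0 \<Longrightarrow> feas UNIV \<psi> l \<Longrightarrow> obj UNIV \<psi> l = OP UNIV + ereal \<epsilon> \<Longrightarrow>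
               dict_dist gmul ginv M q \<Phi> \<psi> \<le> \<delta> \<epsilon>"
begin

abbreviation "dst \<equiv> dict_dist gmul ginv M q"

lemma \<Phi>_L2: "j < q \<Longrightarrow> in_L2 M (\<Phi> j)"
  by (rule feas_L2[OF feas_opt])

lemma dst_nonneg: "dst \<Phi> \<psi> \<ge> 0"
  by (rule dict_dist_nonneg[OF q1])

lemma dst_le_zero_if_OPT_infinite:
  assumes inf: "OP UNIV = \<infinity>" and f: "feas UNIV \<psi> l"
  shows "dst \<Phi> \<psi> \<le> 0"
proof -
  have "dst \<Phi> \<psi> \<le> \<delta> \<epsilon>" if "\<epsilon> > 0" for \<epsilon>
    using canonical[OF _ f] OPT_le[OF f] inf that by simp
  then show ?thesis
    by (intro tendsto_lowerbound[OF \<delta>_lim]) (auto simp: eventually_at_right_field intro: exI[of _ 1])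
qed

lemma optimal_dict_norm_bound:
  assumes f: "feas UNIV \<psi> l" and opt: "obj UNIV \<psi> l = OP UNIV" and j: "j < q"
  shows "L2_norm M (\<psi> j) \<le> \<delta> 0 + (\<Sum>j<q. L2_norm M (\<Phi> j))"
proof -
  have "dst \<Phi> \<psi> \<le> \<delta> 0" using canonical[OF _ f] opt by simp
  moreover have "L2_norm M (\<psi> j) - (\<Sum>j<q. L2_norm M (\<Phi> j)) \<le> dst \<Phi> \<psi>"
    by (rule dict_dist_lower_bound[OF q1 _ _ j]) (use \<Phi>_L2 feas_L2[OF f] in auto)
  ultimately show ?thesis by simp
qed

lemma atom_zero_if_weight_nonpos:
  assumes j: "j < q" and mu: "\<mu> j \<le> 0"
  shows "L2_norm M (\<Phi> j) = 0"
proof (rule ccontr)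
  define B where "B = \<delta> 0 + (\<Sum>j<q. L2_norm M (\<Phi> j))"
  assume "L2_norm M (\<Phi> j) \<noteq> 0"
  then have pos: "L2_norm M (\<Phi> j) > 0" using L2_norm_nonneg[of M "\<Phi> j"] by linarith
  define t where "t = (\<bar>B\<bar> + 1) / L2_norm M (\<Phi> j) + 1"
  have t: "t \<ge> 1" using pos by (simp add: t_def)
  have f: "feas UNIV (rescale_atom j t \<Phi>) (rescale_ops j t l0)" by (rule feas_rescale[OF feas_opt j])
  have "obj UNIV (rescale_atom j t \<Phi>) (rescale_ops j t l0) = OP UNIV"
    using objective_rescale_le[OF feas_opt j mu t] OPT_le[OF f] obj_opt by simp
  then have "L2_norm M (rescale_atom j t \<Phi> j) \<le> B"
    unfolding B_def by (rule optimal_dict_norm_bound[OF f _ j])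
  moreover have "L2_norm M (rescale_atom j t \<Phi> j) = t * L2_norm M (\<Phi> j)"
    using t by (simp add: rescale_atom_def L2_norm_scale)
  moreover have "t * L2_norm M (\<Phi> j) = \<bar>B\<bar> + 1 + L2_norm M (\<Phi> j)"
    using pos by (simp add: t_def field_simps)
  ultimately show False using pos by simp
qed

lemma fourier_atom_zero_if_weight_nonpos: "j < q \<Longrightarrow> \<mu> j \<le> 0 \<Longrightarrow> \<F> (\<Phi> j) \<xi> = 0\<^sub>m (d \<xi>) (d \<xi>)"
  by (rule fourier_zero_if_L2_norm_zero[OF \<Phi>_L2 atom_zero_if_weight_nonpos])

lemma energy_sum_zero_if_weight_nonpos: "j < q \<Longrightarrow> \<mu> j \<le> 0 \<Longrightarrow> energy_sum A (\<Phi> j) = 0"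
  unfolding energy_sum_def
  by (rule einfsum_zero) (simp add: energy_def fourier_atom_zero_if_weight_nonpos frob_zero)

lemma OPT_nonneg: "OP UNIV \<ge> 0"
proof -
  have energy: "0 \<le> ereal (\<mu> j) * enn2ereal (energy_sum UNIV (\<Phi> j))" if "j < q" for j
    using that by (cases "\<mu> j \<le> 0")
      (auto simp: energy_sum_zero_if_weight_nonpos zero_ennreal.rep_eq intro!: mult_nonneg_nonneg)
  have fit: "0 \<le> enn2ereal (fit_sum UNIV \<Phi> l0 i) + ereal lam * penalty UNIV l0 i" for i
    using lam0 penalty_nonneg[of UNIV l0 i] by (auto intro!: add_nonneg_nonneg simp: ereal_zero_le_0_iff)
  have "0 \<le> obj UNIV \<Phi> l0"
    unfolding objective_eq by (rule add_nonneg_nonneg; rule sum_nonneg) (simp_all add: energy fit)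
  then show ?thesis using obj_opt by simp
qed

lemma data_tail_finite_at_optimum:
  assumes fin: "OP UNIV \<noteq> \<infinity>" and i: "i < n"
  shows "data_tail i UNIV < \<infinity>"
proof -
  have ofin: "\<bar>obj UNIV \<Phi> l0\<bar> \<noteq> \<infinity>" using fin OPT_nonneg obj_opt by auto
  have "energy_sum UNIV (\<Phi> j) < \<infinity>" if "j < q" for j
    using energy_sum_finite[OF ofin that] energy_sum_zero_if_weight_nonpos[OF that]
    by (cases "\<mu> j = 0") auto
  then show ?thesis by (rule data_tail_finite[OF feas_opt i fit_sum_finite[OF ofin i]])
qed

lemma dst_tendsto_zero:
  assumes \<psi>: "\<And>k. feas UNIV (\<psi>s k) (ls k)" "\<And>k. obj UNIV (\<psi>s k) (ls k) = OP UNIV + ereal (\<epsilon> k)"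
    and \<epsilon>: "\<And>k. \<epsilon> k \<ge> 0" "\<epsilon> \<longlonglongrightarrow> 0" and exact: "\<And>k. \<epsilon> k = 0 \<Longrightarrow> dst \<Phi> (\<psi>s k) \<le> 0"
  shows "(\<lambda>k. dst \<Phi> (\<psi>s k)) \<longlonglongrightarrow> 0"
proof (rule LIMSEQ_I)
  fix \<gamma> :: real assume "\<gamma> > 0"
  then have "\<forall>\<^sub>F e in at_right 0. \<delta> e < \<gamma>" by (rule order_tendstoD(2)[OF \<delta>_lim])
  then obtain s where s: "s > 0" "\<And>e. 0 < e \<Longrightarrow> e < s \<Longrightarrow> \<delta> e < \<gamma>"
    by (auto simp: eventually_at_right_field)
  obtain K where K: "\<And>k. k \<ge> K \<Longrightarrow> \<epsilon> k < s"
    using order_tendstoD(2)[OF \<epsilon>(2) s(1)] by (auto simp: eventually_sequentially)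
  have "dst \<Phi> (\<psi>s k) < \<gamma>" if "k \<ge> K" for k
  proof (cases "\<epsilon> k = 0")
    case True
    then show ?thesis using exact \<open>\<gamma> > 0\<close> by fastforce
  next
    case False
    then have "dst \<Phi> (\<psi>s k) \<le> \<delta> (\<epsilon> k)" using canonical[OF \<epsilon>(1) \<psi>] by simp
    also have "\<dots> < \<gamma>" using s(2) K[OF that] \<epsilon>(1)[of k] False by simp
    finally show ?thesis .
  qed
  then show "\<exists>K. \<forall>k\<ge>K. norm (dst \<Phi> (\<psi>s k) - 0) < \<gamma>" using dst_nonneg by auto
qed

lemma optimal_perturbation_excess:
  assumes f: "feas UNIV \<psi> l" and opt: "obj UNIV \<psi> l = OP UNIV" and fin: "OP UNIV \<noteq> \<infinity>"
    and w: "in_L2 M w" and supp: "\<And>\<eta>. \<eta> \<noteq> \<xi>0 \<Longrightarrow> \<F> w \<eta> = 0\<^sub>m (d \<eta>) (d \<eta>)"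
  obtains \<alpha> where "\<alpha> \<ge> 0" and "\<And>c. feas UNIV (perturb_first \<psi> w c) l"
    and "\<And>c. obj UNIV (perturb_first \<psi> w c) l = OP UNIV + ereal (\<alpha> * c\<^sup>2)"
proof -
  obtain Oval where Oval: "OP UNIV = ereal Oval" using fin OPT_nonneg by (cases "OP UNIV") auto
  have q0: "0 < q" using q1 by simp
  obtain h where h: "quadratic_fun h" and obj: "\<And>c. obj UNIV (perturb_first \<psi> w c) l = OP UNIV + ereal (h c)"
    using objective_perturb_first_quadratic[OF f _ w supp] opt Oval by auto
  have feas: "feas UNIV (perturb_first \<psi> w c) l" for c
    using f L2_perturb_first[of \<psi> _ w c, OF _ feas_L2[OF f q0] w] feas_L2[OF f]
    by (auto simp: feasible_def in_L2_H_def)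
  have "h c \<ge> 0" for c using OPT_le[OF feas[of c]] obj[of c] Oval by simp
  moreover have "h 0 = 0" using obj[of 0] opt Oval by (simp add: perturb_first_def)
  ultimately obtain \<alpha> where "\<alpha> \<ge> 0" "\<And>c. h c = \<alpha> * c\<^sup>2" using quadratic_fun_nonneg[OF h] by blast
  then show ?thesis using that feas obj by simp
qed

lemma perturb_first_not_always_optimal:
  assumes feas: "\<And>c. feas UNIV (perturb_first \<psi> w c) l" and \<psi>0: "in_L2 M (\<psi> 0)"
    and w: "L2_norm M w > 0"
  shows "\<exists>c. obj UNIV (perturb_first \<psi> w c) l \<noteq> OP UNIV"
proof (rule ccontr)
  assume "\<not> ?thesis"
  then have opt: "obj UNIV (perturb_first \<psi> w c) l = OP UNIV" for c by simp
  have q0: "0 < q" using q1 by simp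
  define B where "B = \<delta> 0 + (\<Sum>j<q. L2_norm M (\<Phi> j))"
  have bound: "\<bar>c\<bar> * L2_norm M w \<le> B + L2_norm M (\<psi> 0)" for c
  proof -
    have "L2_norm M (perturb_first \<psi> w c 0) \<le> B"
      unfolding B_def by (rule optimal_dict_norm_bound[OF feas opt q0])
    moreover have "L2_norm M (\<lambda>x. perturb_first \<psi> w c 0 x - \<psi> 0 x)
        \<le> L2_norm M (\<lambda>x. perturb_first \<psi> w c 0 x - 0) + L2_norm M (\<lambda>x. 0 - \<psi> 0 x)"
      by (rule L2_triangle_diff) (use feas_L2[OF feas q0] L2_zero \<psi>0 in auto)
    ultimately show ?thesis
      using L2_norm_uminus[of M "\<psi> 0"] by (simp add: perturb_first_def L2_norm_scale)
  qed
  define c where "c = (\<bar>B\<bar> + L2_norm M (\<psi> 0) + 1) / L2_norm M w"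
  have "\<bar>c\<bar> * L2_norm M w = \<bar>B\<bar> + L2_norm M (\<psi> 0) + 1"
    using w L2_norm_nonneg[of M "\<psi> 0"] by (simp add: c_def)
  then show False using bound[of c] abs_ge_self[of B] by linarith
qed

lemma optimal_dict_dist_zero:
  assumes f: "feas UNIV \<psi> l" and opt: "obj UNIV \<psi> l = OP UNIV" and fin: "OP UNIV \<noteq> \<infinity>"
  shows "dst \<Phi> \<psi> \<le> 0"
proof -
  obtain \<xi>0 :: 'x where True by simp
  define w where "w = synth \<xi>0 (1\<^sub>m (d \<xi>0))"
  have w: "in_L2 M w" "\<And>\<eta>. \<eta> \<noteq> \<xi>0 \<Longrightarrow> \<F> w \<eta> = 0\<^sub>m (d \<eta>) (d \<eta>)" "L2_norm M w > 0"
    by (simp_all add: w_def synth_L2 fourier_synth synth_unit_L2_norm_pos)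
  have q0: "0 < q" using q1 by simp
  have \<psi>L2: "\<And>j. j < q \<Longrightarrow> in_L2 M (\<psi> j)" by (rule feas_L2[OF f])
  obtain \<alpha> where \<alpha>: "\<alpha> \<ge> 0" and feas: "\<And>c. feas UNIV (perturb_first \<psi> w c) l"
    and obj: "\<And>c. obj UNIV (perturb_first \<psi> w c) l = OP UNIV + ereal (\<alpha> * c\<^sup>2)"
    using optimal_perturbation_excess[OF f opt fin w(1,2)] by blast
  have "\<alpha> \<noteq> 0"
    using perturb_first_not_always_optimal[OF feas \<psi>L2[OF q0] w(3)] obj by auto
  define c where "c k = 1 / real (Suc k)" for k
  have c: "c \<longlonglongrightarrow> 0" unfolding c_def by (rule LIMSEQ_inverse_real_of_nat[simplified inverse_eq_divide])
  have "(\<lambda>k. dst \<Phi> (perturb_first \<psi> w (c k))) \<longlonglongrightarrow> 0"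
  proof (rule dst_tendsto_zero[OF feas obj])
    show "\<alpha> * (c k)\<^sup>2 \<ge> 0" for k using \<alpha> by simp
    have "(\<lambda>k. (c k)\<^sup>2) \<longlonglongrightarrow> 0" using tendsto_power[OF c, of 2] by simp
    then show "(\<lambda>k. \<alpha> * (c k)\<^sup>2) \<longlonglongrightarrow> 0" by (rule tendsto_mult_right_zero)
    show "\<alpha> * (c k)\<^sup>2 = 0 \<Longrightarrow> dst \<Phi> (perturb_first \<psi> w (c k)) \<le> 0" for k
      using \<open>\<alpha> \<noteq> 0\<close> by (simp add: c_def)
  qed
  moreover have "(\<lambda>k. \<bar>c k\<bar> * L2_norm M w) \<longlonglongrightarrow> 0"
    using tendsto_mult_left_zero[OF tendsto_rabs_zero[OF c]] by simp
  ultimately have lim: "(\<lambda>k. dst \<Phi> (perturb_first \<psi> w (c k)) + \<bar>c k\<bar> * L2_norm M w) \<longlonglongrightarrow> 0"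
    by (rule tendsto_add_zero)
  have "dst \<Phi> \<psi> \<le> dst \<Phi> (perturb_first \<psi> w (c k)) + \<bar>c k\<bar> * L2_norm M w" for k
    by (rule dict_dist_perturb[OF q1])
       (use \<Phi>_L2 \<psi>L2 L2_perturb_first[of \<psi> _ w, OF _ \<psi>L2[OF q0] w(1)] L2_norm_perturb_first_diff in auto)
  then show ?thesis
    by (intro tendsto_lowerbound[OF lim]) (simp_all add: always_eventually)
qed

lemma weighted_energy_truncation_le:
  assumes j: "j < q" and \<psi>: "\<And>\<xi>. \<F> (\<psi> j) \<xi> = (if \<xi> \<in> F then \<F> (\<Phi> j) \<xi> else 0\<^sub>m (d \<xi>) (d \<xi>))"
  shows "ereal (\<mu> j) * enn2ereal (energy_sum H (\<psi> j)) \<le> ereal (\<mu> j) * enn2ereal (energy_sum UNIV (\<Phi> j))"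
proof (cases "\<mu> j \<le> 0")
  case True
  then show ?thesis
    using energy_sum_zero_if_weight_nonpos[OF j True] einfsum_zero[of H "\<lambda>\<xi>. ennreal (energy (\<psi> j) \<xi>)"]
    by (simp add: energy_sum_def energy_def \<psi> fourier_atom_zero_if_weight_nonpos[OF j True] frob_zero)
next
  case False
  have "energy_sum H (\<psi> j) \<le> energy_sum UNIV (\<Phi> j)"
    unfolding energy_sum_def by (rule einfsum_mono) (auto simp: energy_def \<psi> frob_zero)
  then show ?thesis using False by (intro ereal_mult_left_mono enn2ereal_mono) auto
qed

lemma OPT_le_truncation:
  assumes FH: "F \<subseteq> H" and F: "finite F"
  shows "OP H \<le> OP UNIV + (\<Sum>i<n. enn2ereal (data_tail i (- F)))"
proof -
  define \<psi> where "\<psi> j = synth_sum F (\<lambda>\<xi>. \<F> (\<Phi> j) \<xi>)" for j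
  define l' where "l' i j = (\<lambda>\<xi>. if \<xi> \<in> H then l0 i j \<xi> else 0\<^sub>m (d \<xi>) (d \<xi>))" for i j
  have fourier_\<psi>: "\<F> (\<psi> j) \<xi> = (if \<xi> \<in> F then \<F> (\<Phi> j) \<xi> else 0\<^sub>m (d \<xi>) (d \<xi>))" for j \<xi>
    unfolding \<psi>_def by (rule fourier_synth_sum[OF F]) simp
  have "in_L2 M (\<psi> j)" for j by (simp add: \<psi>_def synth_sum_L2[OF F])
  then have feas: "feas H \<psi> l'"
    using FH block_op_restrict[OF feas_block[OF feas_opt]] by (auto simp: feasible_def in_L2_H_def fourier_\<psi> l'_def)
  have fit_pen: "enn2ereal (fit_sum H \<psi> l' i) + ereal lam * penalty H l' i
      \<le> (enn2ereal (fit_sum UNIV \<Phi> l0 i) + ereal lam * penalty UNIV l0 i) + enn2ereal (data_tail i (- F))"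
    if i: "i < n" for i
  proof -
    have "fit_sum H \<psi> l' i \<le> fit_sum UNIV \<Phi> l0 i + data_tail i (- F)"
      by (rule fit_sum_truncation_le[OF feas_opt i fourier_\<psi>]) (simp add: l'_def)
    then have fit: "enn2ereal (fit_sum H \<psi> l' i) \<le> enn2ereal (fit_sum UNIV \<Phi> l0 i) + enn2ereal (data_tail i (- F))"
      by (metis plus_ennreal.rep_eq enn2ereal_mono)
    have "penalty H l' i \<le> penalty UNIV l0 i"
      unfolding penalty_def
      by (intro sum_mono plus_norm_restrict) (auto simp: l'_def feas_block[OF feas_opt i])
    then have "ereal lam * penalty H l' i \<le> ereal lam * penalty UNIV l0 i"
      using lam0 by (intro ereal_mult_left_mono) auto
    from add_mono[OF fit this] show ?thesis by (simp add: ac_simps)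
  qed
  have "obj H \<psi> l' \<le> (\<Sum>i<n. (enn2ereal (fit_sum UNIV \<Phi> l0 i) + ereal lam * penalty UNIV l0 i)
        + enn2ereal (data_tail i (- F))) + (\<Sum>j<q. ereal (\<mu> j) * enn2ereal (energy_sum UNIV (\<Phi> j)))"
    unfolding objective_eq
    by (rule add_mono; rule sum_mono) (simp_all add: fit_pen weighted_energy_truncation_le fourier_\<psi>)
  also have "\<dots> = obj UNIV \<Phi> l0 + (\<Sum>i<n. enn2ereal (data_tail i (- F)))"
    unfolding objective_eq sum.distrib by (simp add: ac_simps)
  finally show ?thesis using OPT_le[OF feas] obj_opt by simp
qed

lemma data_tail_real:
  assumes fin: "OP UNIV \<noteq> \<infinity>" and i: "i < n"
  shows "enn2ereal (data_tail i A) = ereal (enn2real (data_tail i A))"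
proof -
  have "data_tail i A \<le> data_tail i UNIV" unfolding data_tail_def by (rule einfsum_mono) auto
  then have "data_tail i A < \<infinity>" using data_tail_finite_at_optimum[OF fin i] by (simp add: le_less_trans)
  then have "data_tail i A = ennreal (enn2real (data_tail i A))" by (simp add: infinity_ennreal_def)
  then show ?thesis by (metis enn2ereal_ennreal enn2real_nonneg)
qed

lemma data_tail_small:
  assumes fin: "OP UNIV \<noteq> \<infinity>" and s: "s > 0"
  obtains F where "finite F" and "\<And>A. A \<subseteq> - F \<Longrightarrow> (\<Sum>i<n. enn2ereal (data_tail i A)) \<le> ereal s"
proof -
  define e where "e = s / (real n + 1)"
  have e: "e > 0" using s by (simp add: e_def)
  have "\<exists>F. finite F \<and> data_tail i (- F) < ennreal e" if "i < n" for i
    using einfsum_tail[OF data_tail_finite_at_optimum[OF fin that, unfolded data_tail_def] e] by (simp add: data_tail_def)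
  then obtain FF where FF: "\<And>i. i < n \<Longrightarrow> finite (FF i) \<and> data_tail i (- FF i) < ennreal e" by metis
  show thesis
  proof (rule that)
    show "finite (\<Union>i<n. FF i)" using FF by simp
    fix A assume A: "A \<subseteq> - (\<Union>i<n. FF i)"
    have "enn2ereal (data_tail i A) \<le> ereal e" if i: "i < n" for i
    proof -
      have "data_tail i A \<le> data_tail i (- FF i)"
        unfolding data_tail_def by (rule einfsum_mono) (use A i in auto)
      then have "data_tail i A \<le> ennreal e" using FF[OF i] by (meson less_imp_le order_trans)
      then show ?thesis using e by (metis enn2ereal_ennreal enn2ereal_mono less_imp_le)
    qed
    then have "(\<Sum>i<n. enn2ereal (data_tail i A)) \<le> (\<Sum>i<n. ereal e)" by (intro sum_mono) simp
    also have "\<dots> \<le> ereal s" using s by (simp add: e_def field_simps)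
    finally show "(\<Sum>i<n. enn2ereal (data_tail i A)) \<le> ereal s" .
  qed
qed

lemma truncation_excess_eventually:
  fixes H :: "nat \<Rightarrow> 'x set"
  assumes Hmono: "\<And>k. H k \<subseteq> H (Suc k)" and Hun: "(\<Union>k. H k) = UNIV"
    and fin: "OP UNIV \<noteq> \<infinity>" and s: "s > 0"
  shows "\<forall>\<^sub>F k in sequentially. OP (H k) \<le> OP UNIV + ereal s
    \<and> (\<Sum>i<n. enn2ereal (data_tail i (- H k))) \<le> ereal s"
proof -
  obtain F where F: "finite F" and small: "\<And>A. A \<subseteq> - F \<Longrightarrow> (\<Sum>i<n. enn2ereal (data_tail i A)) \<le> ereal s"
    using data_tail_small[OF fin s] by blast
  obtain K where K: "\<And>k. k \<ge> K \<Longrightarrow> F \<subseteq> H k" using finite_subset_eventually[OF Hmono Hun F] by blast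
  have "OP (H k) \<le> OP UNIV + ereal s \<and> (\<Sum>i<n. enn2ereal (data_tail i (- H k))) \<le> ereal s"
    if "k \<ge> K" for k
    using OPT_le_truncation[OF K[OF that] F] add_left_mono[OF small[of "- F"], of "OP UNIV"]
      small[of "- H k"] K[OF that] by auto
  then show ?thesis unfolding eventually_sequentially by blast
qed

lemma excess_real:
  assumes fin: "OP UNIV \<noteq> \<infinity>" and f: "feas UNIV \<psi> z"
    and le: "obj UNIV \<psi> z \<le> OP H + (\<Sum>i<n. enn2ereal (data_tail i (- H))) + ereal c"
  shows "\<exists>\<epsilon>\<ge>0. obj UNIV \<psi> z = OP UNIV + ereal \<epsilon>"
proof -
  obtain Oval where Oval: "OP UNIV = ereal Oval" using fin OPT_nonneg by (cases "OP UNIV") auto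
  have tails: "(\<Sum>i<n. enn2ereal (data_tail i A)) = ereal (\<Sum>i<n. enn2real (data_tail i A))" for A
    by (simp add: data_tail_real[OF fin])
  have "OP H \<le> ereal (Oval + (\<Sum>i<n. enn2real (data_tail i UNIV)))"
    using OPT_le_truncation[of "{}" H] by (simp add: Oval tails)
  then have "obj UNIV \<psi> z \<le> ereal (Oval + (\<Sum>i<n. enn2real (data_tail i UNIV)))
      + ereal (\<Sum>i<n. enn2real (data_tail i (- H))) + ereal c"
    using le unfolding tails by (meson add_right_mono order_trans)
  then have "obj UNIV \<psi> z < \<infinity>" by (rule le_less_trans) simp
  moreover have "obj UNIV \<psi> z \<ge> ereal Oval" using OPT_le[OF f] Oval by metis
  ultimately obtain r where "obj UNIV \<psi> z = ereal r" "r \<ge> Oval" by (cases "obj UNIV \<psi> z") auto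
  then show ?thesis using Oval by (intro exI[of _ "r - Oval"]) simp
qed

lemma extension_excess_tendsto_zero:
  fixes H :: "nat \<Rightarrow> 'x set" and \<Phi>H :: "nat \<Rightarrow> nat \<Rightarrow> 'g \<Rightarrow> complex"
    and lk :: "nat \<Rightarrow> nat \<Rightarrow> nat \<Rightarrow> 'x \<Rightarrow> complex mat"
  assumes Hmono: "\<And>k. H k \<subseteq> H (Suc k)" and Hun: "(\<Union>k. H k) = UNIV"
    and fk: "\<And>k. feas (H k) (\<Phi>H k) (lk k)" and ok: "\<And>k. obj (H k) (\<Phi>H k) (lk k) = OP (H k)"
    and fin: "OP UNIV \<noteq> \<infinity>"
  obtains z \<epsilon> where "\<And>k. feas UNIV (\<Phi>H k) (z k)" and "\<And>k. obj UNIV (\<Phi>H k) (z k) = OP UNIV + ereal (\<epsilon> k)"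
    and "\<And>k. \<epsilon> k \<ge> 0" and "\<epsilon> \<longlonglongrightarrow> 0"
proof -
  define c where "c k = real n * (lam * (real q * (1 / real (Suc k))))" for k
  have "\<exists>z. feas UNIV (\<Phi>H k) z \<and> obj UNIV (\<Phi>H k) z \<le> OP (H k) + (\<Sum>i<n. enn2ereal (data_tail i (- H k))) + ereal (c k)" for k
    using extension_objective_le[OF fk, of "1 / real (Suc k)"] ok by (simp add: c_def)
  then obtain z where z: "\<And>k. feas UNIV (\<Phi>H k) (z k)"
    and z_le: "\<And>k. obj UNIV (\<Phi>H k) (z k) \<le> OP (H k) + (\<Sum>i<n. enn2ereal (data_tail i (- H k))) + ereal (c k)"
    by metis
  obtain \<epsilon> where obj: "\<And>k. obj UNIV (\<Phi>H k) (z k) = OP UNIV + ereal (\<epsilon> k)" and \<epsilon>0: "\<And>k. \<epsilon> k \<ge> 0"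
    using excess_real[OF fin z z_le] by metis
  have c: "c \<longlonglongrightarrow> 0"
    unfolding c_def by (intro tendsto_mult_right_zero LIMSEQ_inverse_real_of_nat[simplified inverse_eq_divide])
  have "\<forall>\<^sub>F k in sequentially. \<epsilon> k < \<gamma>" if \<gamma>: "\<gamma> > 0" for \<gamma>
  proof -
    have "\<forall>\<^sub>F k in sequentially. (OP (H k) \<le> OP UNIV + ereal (\<gamma> / 3)
        \<and> (\<Sum>i<n. enn2ereal (data_tail i (- H k))) \<le> ereal (\<gamma> / 3)) \<and> c k < \<gamma> / 3"
    proof (rule eventually_conj)
      show "\<forall>\<^sub>F k in sequentially. OP (H k) \<le> OP UNIV + ereal (\<gamma> / 3)
          \<and> (\<Sum>i<n. enn2ereal (data_tail i (- H k))) \<le> ereal (\<gamma> / 3)"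
        by (rule truncation_excess_eventually[OF Hmono Hun fin]) (use \<gamma> in simp)
      show "\<forall>\<^sub>F k in sequentially. c k < \<gamma> / 3"
        by (rule order_tendstoD(2)[OF c]) (use \<gamma> in simp)
    qed
    then show ?thesis
    proof (rule eventually_mono)
      fix k assume k: "(OP (H k) \<le> OP UNIV + ereal (\<gamma> / 3)
        \<and> (\<Sum>i<n. enn2ereal (data_tail i (- H k))) \<le> ereal (\<gamma> / 3)) \<and> c k < \<gamma> / 3"
      have "OP UNIV + ereal (\<epsilon> k) \<le> OP UNIV + ereal (\<gamma> / 3) + ereal (\<gamma> / 3) + ereal (c k)"
        using z_le[of k] k by (simp only: obj[symmetric]) (meson add_mono order_trans order_refl)
      then show "\<epsilon> k < \<gamma>" using k fin OPT_nonneg by (cases "OP UNIV") auto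
    qed
  qed
  then have "\<epsilon> \<longlonglongrightarrow> 0"
    by (intro order_tendstoI) (auto intro: always_eventually less_le_trans[OF _ \<epsilon>0])
  then show thesis using that z obj \<epsilon>0 by blast
qed

theorem optimal_dicts_converge:
  fixes H :: "nat \<Rightarrow> 'x set" and \<Phi>H :: "nat \<Rightarrow> nat \<Rightarrow> 'g \<Rightarrow> complex"
    and lk :: "nat \<Rightarrow> nat \<Rightarrow> nat \<Rightarrow> 'x \<Rightarrow> complex mat"
  assumes Hmono: "\<And>k. H k \<subseteq> H (Suc k)" and Hun: "(\<Union>k. H k) = UNIV"
    and fk: "\<And>k. feas (H k) (\<Phi>H k) (lk k)" and ok: "\<And>k. obj (H k) (\<Phi>H k) (lk k) = OP (H k)"
  shows "(\<lambda>k. dst (\<Phi>H k) \<Phi>) \<longlonglongrightarrow> 0"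
proof -
  have L2: "\<And>j. j < q \<Longrightarrow> in_L2 M (\<Phi>H k j)" for k by (rule feas_L2[OF fk])
  have "(\<lambda>k. dst \<Phi> (\<Phi>H k)) \<longlonglongrightarrow> 0"
  proof (cases "OP UNIV = \<infinity>")
    case True
    then have "dst \<Phi> (\<Phi>H k) = 0" for k
      using dst_le_zero_if_OPT_infinite[OF True feas_zero_ops[OF L2]] dst_nonneg by (simp add: order_antisym)
    then show ?thesis by simp
  next
    case False
    obtain z \<epsilon> where z: "\<And>k. feas UNIV (\<Phi>H k) (z k)"
      and obj: "\<And>k. obj UNIV (\<Phi>H k) (z k) = OP UNIV + ereal (\<epsilon> k)"
      and \<epsilon>: "\<And>k. \<epsilon> k \<ge> 0" "\<epsilon> \<longlonglongrightarrow> 0"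
      using extension_excess_tendsto_zero[OF Hmono Hun fk ok False] by blast
    show ?thesis
      by (rule dst_tendsto_zero[OF z obj \<epsilon>]) (use optimal_dict_dist_zero[OF z _ False] obj in simp)
  qed
  then show ?thesis using dict_dist_commute[OF q1 L2 \<Phi>_L2] by simp
qed

end

theorem theorem3:
  fixes gmul :: "'g::t2_space \<Rightarrow> 'g \<Rightarrow> 'g" and ginv :: "'g \<Rightarrow> 'g" and e :: 'g
    and M :: "'g measure"
    and d :: "'x \<Rightarrow> nat" and \<rho> :: "'x \<Rightarrow> 'g \<Rightarrow> complex mat"
    and n q :: nat and y :: "nat \<Rightarrow> 'g \<Rightarrow> real" and lam :: real and \<mu> :: "nat \<Rightarrow> real"
    and \<Phi> :: "nat \<Rightarrow> 'g \<Rightarrow> complex"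
    and H :: "nat \<Rightarrow> 'x set" and \<Phi>H :: "nat \<Rightarrow> nat \<Rightarrow> 'g \<Rightarrow> complex"
  assumes "compact_hausdorff_group gmul ginv e"
    and "normalized_haar gmul M"
    and "complete_dual gmul d \<rho>"
    and "\<forall>i<n. y i \<in> borel_measurable M \<and> integrable M (\<lambda>x. (y i x)\<^sup>2)"
    and "q \<ge> 1" and "lam \<ge> 0"
    and "optimal_dictionary M d \<rho> n y q lam \<mu> UNIV \<Phi>"
    and "canonically_unique gmul ginv M d \<rho> n y q lam \<mu> \<Phi>"
    and "\<And>k. H k \<subseteq> H (Suc k)"
    and "(\<Union>k. H k) = UNIV"
    and "\<And>k. optimal_dictionary M d \<rho> n y q lam \<mu> (H k) (\<Phi>H k)"
  shows "(\<lambda>k. dict_dist gmul ginv M q (\<Phi>H k) \<Phi>) \<longlonglongrightarrow> 0"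
proof -
  obtain l0 where "feasible M d \<rho> n q UNIV \<Phi> l0"
    and "objective M d \<rho> n y q lam \<mu> UNIV \<Phi> l0 = OPT M d \<rho> n y q lam \<mu> UNIV"
    using assms(7) by (auto simp: optimal_dictionary_def)
  moreover obtain \<delta> where "(\<delta> \<longlongrightarrow> 0) (at_right 0)"
    and "\<forall>\<epsilon>\<ge>0. \<forall>\<psi> l. feasible M d \<rho> n q UNIV \<psi> l \<and>
      objective M d \<rho> n y q lam \<mu> UNIV \<psi> l = OPT M d \<rho> n y q lam \<mu> UNIV + ereal \<epsilon>
      \<longrightarrow> dict_dist gmul ginv M q \<Phi> \<psi> \<le> \<delta> \<epsilon>"
    using assms(8) by (auto simp: canonically_unique_def)
  ultimately interpret canonical_optimum gmul ginv e M d \<rho> n q y lam \<mu> \<Phi> l0 \<delta>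
    using assms(1-3,5,6) by unfold_locales auto
  obtain lk where "\<And>k. feasible M d \<rho> n q (H k) (\<Phi>H k) (lk k)"
    and "\<And>k. objective M d \<rho> n y q lam \<mu> (H k) (\<Phi>H k) (lk k) = OPT M d \<rho> n y q lam \<mu> (H k)"
    using assms(11) unfolding optimal_dictionary_def by metis
  then show ?thesis by (rule optimal_dicts_converge[OF assms(9,10)])
qed

end
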